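(* A collection of polynomials $\{\psi^p(x)=b_px+c_px^2\colon p\text{ prime}\}$ in $\mathbf{Z}[x]/(x^3)$ (with $b_p,c_p\in\mathbf{Z}$) is the set of Adams operations of a filtered $\lambda$-ring structure on $\mathbf{Z}[x]/(x^3)$ if and only if: (1) $b_p\equiv0\pmod p$ for all primes $p$; (2) $c_2\equiv1\pmod2$ and $c_p\equiv0\pmod p$ for all primes $p>2$; and (3) $(b_q^2-b_q)c_p=(b_p^2-b_p)c_q$ for all primes $p,q$. Moreover, when these conditions hold: if $b_2\ne0$ then $b_p^2-b_p\equiv0\pmod{2^{\theta_2(b_2)}}$ for all odd primes $p$; and if $b_2=0$ then $b_p=0$ for all odd primes $p$.
   Context: A (special) $\lambda$-ring is a commutative ring with operations $\lambda^i$ satisfying the Atiyah–Tall axioms; a filtered $\lambda$-ring is a $\lambda$-ring with decreasing filtration by ideals closed under $\lambda^i$, $i\ge1$. $\mathbf{Z}[x]/(x^3)$ is filtered with $x$ in a fixed positive filtration $d$ ($I^k$ generated by the $x^j$ with $jd\ge k$). $\theta_2(m)$ denotes the largest integer with $2^{\theta_2(m)}\mid m$. *)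

theory Defs
  imports Main "HOL-Library.Poly_Mapping" "HOL-Computational_Algebra.Primes"
begin

type_synonym mpoly = "(nat \<Rightarrow>\<^sub>0 nat) \<Rightarrow>\<^sub>0 int"

definition mmono :: "(nat \<Rightarrow> 'a::comm_ring_1) \<Rightarrow> (nat \<Rightarrow>\<^sub>0 nat) \<Rightarrow> 'a" where
  "mmono v mon = (\<Prod>i\<in>Poly_Mapping.keys mon. v i ^ Poly_Mapping.lookup mon i)"

definition mpeval :: "(nat \<Rightarrow> 'a::comm_ring_1) \<Rightarrow> mpoly \<Rightarrow> 'a" where
  "mpeval v P = (\<Sum>mon\<in>Poly_Mapping.keys P. of_int (Poly_Mapping.lookup P mon) * mmono v mon)"

definition esymS :: "nat \<Rightarrow> 'b set \<Rightarrow> ('b \<Rightarrow> int) \<Rightarrow> int" where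
  "esymS k A c = (\<Sum>S\<in>{S. S \<subseteq> A \<and> card S = k}. \<Prod>i\<in>S. c i)"

text \<open>Universal polynomial P_n: coefficient of t^n in the product over i,j<n of (1 + xi_i eta_j t),
  written as a polynomial in e_1(xi),...,e_n(xi) (variables 0..n-1) and e_1(eta),...,e_n(eta)
  (variables n..2n-1).  Polynomial identities over Z are detected on integer points.\<close>
definition Pmul :: "nat \<Rightarrow> mpoly" where
  "Pmul n = (SOME P. \<forall>\<xi> \<eta> :: nat \<Rightarrow> int.
      mpeval (\<lambda>j. if j < n then of_int (esymS (j+1) {..<n} \<xi>)
                  else if j < 2*n then of_int (esymS (j-n+1) {..<n} \<eta>) else 0) P
      = esymS n ({..<n} \<times> {..<n}) (\<lambda>(i,j). \<xi> i * \<eta> j))"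

text \<open>Universal polynomial P_{m,n}: coefficient of t^m in the product over n-element subsets S of
  {0..<mn} of (1 + (prod_{i in S} xi_i) t), as a polynomial in e_1(xi),...,e_{mn}(xi).\<close>
definition Pcomp :: "nat \<Rightarrow> nat \<Rightarrow> mpoly" where
  "Pcomp m n = (SOME P. \<forall>\<xi> :: nat \<Rightarrow> int.
      mpeval (\<lambda>j. if j < m*n then of_int (esymS (j+1) {..<m*n} \<xi>) else 0) P
      = esymS m {S. S \<subseteq> {..<m*n} \<and> card S = n} (\<lambda>S. \<Prod>i\<in>S. \<xi> i))"

section \<open>(Special) lambda-rings in the sense of Atiyah--Tall\<close>

definition pre_lambda_ring :: "(nat \<Rightarrow> 'a::comm_ring_1 \<Rightarrow> 'a) \<Rightarrow> bool" where
  "pre_lambda_ring lam \<longleftrightarrow>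
     (\<forall>x. lam 0 x = 1) \<and> (\<forall>x. lam 1 x = x) \<and>
     (\<forall>n x y. lam n (x + y) = (\<Sum>i\<le>n. lam i x * lam (n - i) y))"

definition lambda_ring :: "(nat \<Rightarrow> 'a::comm_ring_1 \<Rightarrow> 'a) \<Rightarrow> bool" where
  "lambda_ring lam \<longleftrightarrow> pre_lambda_ring lam \<and>
     (\<forall>n\<ge>2. lam n 1 = 0) \<and>
     (\<forall>n\<ge>1. \<forall>x y. lam n (x * y) =
         mpeval (\<lambda>j. if j < n then lam (j+1) x else if j < 2*n then lam (j-n+1) y else 0) (Pmul n)) \<and>
     (\<forall>m\<ge>1. \<forall>n\<ge>1. \<forall>x. lam m (lam n x) =
         mpeval (\<lambda>j. if j < m*n then lam (j+1) x else 0) (Pcomp m n))"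

text \<open>Adams operations via the Newton formula
  psi^n - lam^1 psi^(n-1) + ... + (-1)^(n-1) lam^(n-1) psi^1 + (-1)^n n lam^n = 0.\<close>
fun adams :: "(nat \<Rightarrow> 'a::comm_ring_1 \<Rightarrow> 'a) \<Rightarrow> nat \<Rightarrow> 'a \<Rightarrow> 'a" where
  "adams lam 0 x = 0"
| "adams lam (Suc n) x =
     (-1)^n * of_nat (Suc n) * lam (Suc n) x
     + (\<Sum>j<n. (-1)^(n - j + 1) * lam (n - j) x * adams lam (Suc j) x)"

datatype tr3 = Tr int int int   (* Tr a b c = a + b x + c x^2 *)

instantiation tr3 :: comm_ring_1
begin
definition "0 = Tr 0 0 0"
definition "1 = Tr 1 0 0"
fun plus_tr3 where "Tr a b c + Tr a' b' c' = Tr (a+a') (b+b') (c+c')"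
fun minus_tr3 where "Tr a b c - Tr a' b' c' = Tr (a-a') (b-b') (c-c')"
fun uminus_tr3 where "- Tr a b c = Tr (-a) (-b) (-c)"
fun times_tr3 where "Tr a b c * Tr a' b' c' = Tr (a*a') (a*b' + b*a') (a*c' + b*b' + c*a')"
instance
proof
  fix x y z :: tr3
  show "x * y * z = x * (y * z)"
    by (cases x; cases y; cases z; simp add: algebra_simps)
  show "x * y = y * x" by (cases x; cases y; simp add: algebra_simps)
  show "1 * x = x" by (cases x; simp add: one_tr3_def)
  show "x + y + z = x + (y + z)" by (cases x; cases y; cases z; simp)
  show "x + y = y + x" by (cases x; cases y; simp)
  show "0 + x = x" by (cases x; simp add: zero_tr3_def)
  show "- x + x = 0" by (cases x; simp add: zero_tr3_def)
  show "x - y = x + - y" by (cases x; cases y; simp)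
  show "(x + y) * z = x * z + y * z" by (cases x; cases y; cases z; simp add: algebra_simps)
  show "(0::tr3) \<noteq> 1" by (simp add: zero_tr3_def one_tr3_def)
qed
end

definition X :: tr3 where "X = Tr 0 1 0"

text \<open>Filtration with x in filtration d: I^k is the ideal generated by the x^j with j*d \<ge> k,
  i.e. the elements whose coefficient of x^j vanishes whenever j*d < k.\<close>
definition fil :: "nat \<Rightarrow> nat \<Rightarrow> tr3 set" where
  "fil d k = {Tr a b c | a b c. (0*d < k \<longrightarrow> a = 0) \<and> (1*d < k \<longrightarrow> b = 0) \<and> (2*d < k \<longrightarrow> c = 0)}"

definition filtered_lambda_ring :: "nat \<Rightarrow> (nat \<Rightarrow> tr3 \<Rightarrow> tr3) \<Rightarrow> bool" where
  "filtered_lambda_ring d lam \<longleftrightarrow> lambda_ring lam \<and>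
     (\<forall>k i. i \<ge> 1 \<longrightarrow> (\<forall>r\<in>fil d k. lam i r \<in> fil d k))"

end

theory Submission
  imports Defs "HOL-Computational_Algebra.Computational_Algebra" "HOL-Combinatorics.Transposition"
begin

text \<open>
  Necessity. In a filtered \<open>\<lambda>\<close>-ring structure every \<open>\<lambda>\<^sup>i x\<close> (\<open>i \<ge> 1\<close>) is a multiple of \<open>x\<close>,
  so any product of three of them vanishes and Newton's formula collapses to
  \<open>\<psi>\<^sup>n x = (-1)\<^bsup>n-1\<^esup> (n \<lambda>\<^sup>n x - \<Sum>\<^bsub>0<i<n\<^esub> i \<lambda>\<^sup>i x \<lambda>\<^bsup>n-i\<^esup> x)\<close>. Reading off coefficients gives
  \<open>p | b\<^sub>p\<close>, \<open>c\<^sub>2\<close> odd (as \<open>\<lambda>\<^sup>1 x = x\<close>) and \<open>p | c\<^sub>p\<close> for odd \<open>p\<close> (the sum is symmetric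
  under \<open>i \<mapsto> n - i\<close>); comparing \<open>\<psi>\<^sup>p\<psi>\<^sup>q x = \<psi>\<^sup>q\<psi>\<^sup>p x\<close> gives the third condition.

  Sufficiency. Extend \<open>b\<close> multiplicatively to all \<open>n\<close> and choose \<open>c\<^sub>n\<close> so that the maps
  \<open>\<psi>\<^sup>n(a + \<beta>x + \<gamma>x\<^sup>2) = a + b\<^sub>n\<beta>x + (c\<^sub>n\<beta> + b\<^sub>n\<^sup>2\<gamma>)x\<^sup>2\<close> satisfy
  \<open>\<psi>\<^sup>m\<psi>\<^sup>n = \<psi>\<^bsup>mn\<^esup>\<close>; the third condition is what makes \<open>c\<^sub>n\<close> well defined. Define \<open>\<lambda>\<^sup>k\<close> by
  solving Newton's formula for it; the divisibility conditions make the result integral. The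
  \<open>\<lambda>\<close>-ring axioms are then checked inside \<open>\<complex>[x]/(x\<^sup>3)\<close>, where ring endomorphisms \<open>\<psi>\<^sup>n\<close>
  with \<open>\<psi>\<^sup>1 = id\<close> and \<open>\<psi>\<^sup>m\<psi>\<^sup>n = \<psi>\<^bsup>mn\<^esup>\<close> always yield a \<open>\<lambda>\<close>-ring: the universal polynomials \<open>P\<^sub>n\<close>,
  \<open>P\<^bsub>m,n\<^esub>\<close> of the axioms exist by the fundamental theorem on symmetric polynomials, and the
  identities they satisfy on integers extend, variable by variable, to complex numbers, where
  every sequence is the sequence of elementary symmetric functions of its roots.
\<close>

section \<open>Ring homomorphisms and evaluation of multivariate polynomials\<close>

definition is_ring_hom :: "('a::comm_ring_1 \<Rightarrow> 'b::comm_ring_1) \<Rightarrow> bool" where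
  "is_ring_hom h \<longleftrightarrow> (\<forall>x y. h (x + y) = h x + h y) \<and> (\<forall>x y. h (x * y) = h x * h y) \<and> h 1 = 1"

lemma ring_hom_add: "is_ring_hom h \<Longrightarrow> h (x + y) = h x + h y" by (simp add: is_ring_hom_def)
lemma ring_hom_mult: "is_ring_hom h \<Longrightarrow> h (x * y) = h x * h y" by (simp add: is_ring_hom_def)
lemma ring_hom_one: "is_ring_hom h \<Longrightarrow> h 1 = 1" by (simp add: is_ring_hom_def)
lemma ring_hom_zero: "is_ring_hom h \<Longrightarrow> h 0 = 0"
proof -
  assume "is_ring_hom h"
  then have "h (0 + 0) = h 0 + h 0" by (rule ring_hom_add)
  then show ?thesis by simp
qed
lemma ring_hom_uminus: "is_ring_hom h \<Longrightarrow> h (- x) = - h x"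
proof -
  assume h: "is_ring_hom h"
  then have "h (x + - x) = h x + h (- x)" by (rule ring_hom_add)
  then have "h x + h (- x) = 0" using ring_hom_zero[OF h] by simp
  then show ?thesis by (simp add: add_eq_0_iff)
qed
lemma ring_hom_diff: "is_ring_hom h \<Longrightarrow> h (x - y) = h x - h y"
  using ring_hom_add[of h x "- y"] ring_hom_uminus[of h y] by simp
lemma ring_hom_sum: "is_ring_hom h \<Longrightarrow> h (sum f A) = (\<Sum>a\<in>A. h (f a))"
  by (induction A rule: infinite_finite_induct) (auto simp: ring_hom_zero ring_hom_add)
lemma ring_hom_prod: "is_ring_hom h \<Longrightarrow> h (prod f A) = (\<Prod>a\<in>A. h (f a))"
  by (induction A rule: infinite_finite_induct) (auto simp: ring_hom_one ring_hom_mult)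
lemma ring_hom_power: "is_ring_hom h \<Longrightarrow> h (x ^ n) = h x ^ n"
  by (induction n) (auto simp: ring_hom_one ring_hom_mult)
lemma ring_hom_of_nat: "is_ring_hom h \<Longrightarrow> h (of_nat n) = of_nat n"
  by (induction n) (auto simp: ring_hom_zero ring_hom_one ring_hom_add)
lemma ring_hom_of_int: "is_ring_hom h \<Longrightarrow> h (of_int n) = of_int n"
  by (cases n) (auto simp: ring_hom_of_nat ring_hom_uminus ring_hom_diff ring_hom_one)
lemma is_ring_hom_of_int_fun: "is_ring_hom (of_int :: int \<Rightarrow> 'a::comm_ring_1)" by (simp add: is_ring_hom_def)
lemma mpeval_superset:
  assumes "finite S" "Poly_Mapping.keys P \<subseteq> S"
  shows "mpeval v P = (\<Sum>m\<in>S. of_int (Poly_Mapping.lookup P m) * mmono v m)"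
  unfolding mpeval_def using assms
  by (intro sum.mono_neutral_left) (auto simp: in_keys_iff)

lemma mpeval_add: "mpeval v (P + Q) = mpeval v P + mpeval v Q"
proof -
  let ?S = "Poly_Mapping.keys P \<union> Poly_Mapping.keys Q"
  have fin: "finite ?S" by simp
  have k: "Poly_Mapping.keys (P + Q) \<subseteq> ?S" by (rule keys_add)
  have 1: "mpeval v (P + Q) = (\<Sum>m\<in>?S. of_int (Poly_Mapping.lookup (P + Q) m) * mmono v m)"
    by (rule mpeval_superset[OF fin k])
  have 2: "mpeval v P = (\<Sum>m\<in>?S. of_int (Poly_Mapping.lookup P m) * mmono v m)"
    by (rule mpeval_superset[OF fin]) auto
  have 3: "mpeval v Q = (\<Sum>m\<in>?S. of_int (Poly_Mapping.lookup Q m) * mmono v m)"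
    by (rule mpeval_superset[OF fin]) auto
  show ?thesis unfolding 1 2 3
    by (simp add: lookup_add distrib_right sum.distrib)
qed

lemma mpeval_zero [simp]: "mpeval v 0 = 0"
  by (simp add: mpeval_def)

lemma mpeval_single: "mpeval v (Poly_Mapping.single m c) = of_int c * mmono v m"
  by (simp add: mpeval_def)

lemma mpeval_sum: "mpeval v (sum f A) = (\<Sum>a\<in>A. mpeval v (f a))"
  by (induction A rule: infinite_finite_induct) (auto simp: mpeval_add)

lemma mpeval_uminus: "mpeval v (- P) = - mpeval v P"
proof -
  have "P + - P = 0" by simp
  then have "mpeval v (P + - P) = 0" by simp
  then have "mpeval v P + mpeval v (- P) = 0" by (simp only: mpeval_add)
  then show ?thesis by (simp add: add_eq_0_iff)
qed

lemma mpeval_diff: "mpeval v (P - Q) = mpeval v P - mpeval v Q"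
  using mpeval_add[of v P "- Q"] by (simp add: mpeval_uminus)

lemma poly_mapping_sum_single:
  "P = (\<Sum>m\<in>Poly_Mapping.keys P. Poly_Mapping.single m (Poly_Mapping.lookup P m))"
proof (rule poly_mapping_eqI)
  fix k
  show "Poly_Mapping.lookup P k = Poly_Mapping.lookup (\<Sum>m\<in>Poly_Mapping.keys P. Poly_Mapping.single m (Poly_Mapping.lookup P m)) k"
    by (cases "k \<in> Poly_Mapping.keys P")
      (auto simp: lookup_sum lookup_single when_def in_keys_iff sum.delta)
qed

lemma mmono_superset:
  assumes "finite S" "Poly_Mapping.keys m \<subseteq> S"
  shows "mmono v m = (\<Prod>i\<in>S. v i ^ Poly_Mapping.lookup m i)"
  unfolding mmono_def using assms
  by (intro prod.mono_neutral_left) (auto simp: in_keys_iff)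

lemma mmono_add: "mmono v (a + b) = mmono v a * mmono v b"
proof -
  let ?S = "Poly_Mapping.keys a \<union> Poly_Mapping.keys b"
  have fin: "finite ?S" by simp
  have k: "Poly_Mapping.keys (a + b) \<subseteq> ?S" by (rule keys_add)
  have 1: "mmono v (a + b) = (\<Prod>i\<in>?S. v i ^ Poly_Mapping.lookup (a + b) i)"
    by (rule mmono_superset[OF fin k])
  have 2: "mmono v a = (\<Prod>i\<in>?S. v i ^ Poly_Mapping.lookup a i)"
    by (rule mmono_superset[OF fin]) auto
  have 3: "mmono v b = (\<Prod>i\<in>?S. v i ^ Poly_Mapping.lookup b i)"
    by (rule mmono_superset[OF fin]) auto
  show ?thesis unfolding 1 2 3
    by (simp add: lookup_add power_add prod.distrib)
qed

lemma mmono_zero [simp]: "mmono v 0 = 1"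
  by (simp add: mmono_def)

lemma mpeval_mult: "mpeval v (P * Q) = mpeval v P * mpeval v Q"
proof -
  let ?A = "Poly_Mapping.keys P" and ?B = "Poly_Mapping.keys Q"
  have "P * Q = (\<Sum>a\<in>?A. Poly_Mapping.single a (Poly_Mapping.lookup P a)) *
                (\<Sum>b\<in>?B. Poly_Mapping.single b (Poly_Mapping.lookup Q b))"
    by (subst (1) poly_mapping_sum_single[of P], subst (1) poly_mapping_sum_single[of Q]) (rule refl)
  also have "\<dots> = (\<Sum>a\<in>?A. \<Sum>b\<in>?B. Poly_Mapping.single (a + b) (Poly_Mapping.lookup P a * Poly_Mapping.lookup Q b))"
    by (simp add: sum_product mult_single)
  finally have "mpeval v (P * Q) = (\<Sum>a\<in>?A. \<Sum>b\<in>?B. of_int (Poly_Mapping.lookup P a * Poly_Mapping.lookup Q b) * mmono v (a + b))"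
    by (simp add: mpeval_sum mpeval_single)
  also have "\<dots> = (\<Sum>a\<in>?A. of_int (Poly_Mapping.lookup P a) * mmono v a) * (\<Sum>b\<in>?B. of_int (Poly_Mapping.lookup Q b) * mmono v b)"
    by (simp add: sum_product mmono_add algebra_simps)
  finally show ?thesis by (simp add: mpeval_def)
qed

lemma mpeval_one [simp]: "mpeval v 1 = 1"
  by (simp add: mpeval_def lookup_one)

lemma mpeval_of_int: "mpeval v (of_int c) = of_int c"
proof -
  have "(of_int c :: mpoly) = Poly_Mapping.single 0 c" by (metis single_of_int of_int_eq_id id_apply)
  then show ?thesis by (simp add: mpeval_single)
qed

definition mvar :: "nat \<Rightarrow> mpoly" where
  "mvar i = Poly_Mapping.single (Poly_Mapping.single i 1) 1"

lemma mpeval_mvar [simp]: "mpeval v (mvar i) = v i"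
  by (simp add: mvar_def mpeval_single mmono_def)

lemma mmono_hom: "is_ring_hom h \<Longrightarrow> h (mmono v m) = mmono (\<lambda>i. h (v i)) m"
  by (simp add: mmono_def ring_hom_prod ring_hom_power)

lemma mpeval_hom: "is_ring_hom h \<Longrightarrow> h (mpeval v P) = mpeval (\<lambda>i. h (v i)) P"
  by (simp add: mpeval_def ring_hom_sum ring_hom_mult ring_hom_of_int mmono_hom)

section \<open>Elementary symmetric functions\<close>

definition esym :: "nat \<Rightarrow> 'b set \<Rightarrow> ('b \<Rightarrow> 'a::comm_ring_1) \<Rightarrow> 'a" where
  "esym k A c = (\<Sum>S\<in>{S. S \<subseteq> A \<and> card S = k}. \<Prod>i\<in>S. c i)"

lemma esymS_esym: "esymS k A c = esym k A c"
  by (simp add: esymS_def esym_def)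

lemma esym_hom: "is_ring_hom h \<Longrightarrow> h (esym k A c) = esym k A (\<lambda>i. h (c i))"
  by (simp add: esym_def ring_hom_sum ring_hom_prod)

lemma esym_0: "finite A \<Longrightarrow> esym 0 A c = 1"
proof -
  assume "finite A"
  then have "{S. S \<subseteq> A \<and> card S = 0} = {{}}"
    by (auto dest: finite_subset)
  then show ?thesis by (simp add: esym_def)
qed

lemma esym_empty_Suc: "esym (Suc k) {} c = 0"
proof -
  have E: "{S. S \<subseteq> {} \<and> card S = Suc k} = {}" by auto
  show ?thesis unfolding esym_def E by simp
qed

lemma esym_gt: "finite A \<Longrightarrow> card A < k \<Longrightarrow> esym k A c = 0"
proof -
  assume "finite A" "card A < k"
  have E: "{S. S \<subseteq> A \<and> card S = k} = {}"
  proof (intro equalityI subsetI)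
    fix S assume "S \<in> {S. S \<subseteq> A \<and> card S = k}"
    then have "S \<subseteq> A" "card S = k" by auto
    then have "card S \<le> card A" using card_mono[OF \<open>finite A\<close>] by blast
    then show "S \<in> {}" using \<open>card S = k\<close> \<open>card A < k\<close> by simp
  qed simp
  show ?thesis unfolding esym_def E by (simp only: sum.empty)
qed

lemma subsets_card_Suc_insert:
  assumes fin: "finite A" and a: "a \<notin> A"
  shows "{S. S \<subseteq> insert a A \<and> card S = Suc k} =
    {S. S \<subseteq> A \<and> card S = Suc k} \<union> insert a ` {S. S \<subseteq> A \<and> card S = k}"
    (is "?L = ?B \<union> insert a ` ?C")
proof (intro equalityI subsetI)
  fix S assume "S \<in> ?L"
  then have S: "S \<subseteq> insert a A" "card S = Suc k" by auto
  show "S \<in> ?B \<union> insert a ` ?C"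
  proof (cases "a \<in> S")
    case True
    have "finite S" using S(1) fin finite_subset by blast
    then have "card (S - {a}) = k" using S True by simp
    moreover have "S - {a} \<subseteq> A" "S = insert a (S - {a})" using S True by auto
    ultimately show ?thesis by blast
  next
    case False
    then show ?thesis using S by auto
  qed
next
  fix S assume "S \<in> ?B \<union> insert a ` ?C"
  then show "S \<in> ?L"
  proof
    assume "S \<in> insert a ` ?C"
    then obtain T where T: "T \<subseteq> A" "card T = k" "S = insert a T" by auto
    have "finite T" "a \<notin> T" using T(1) fin a finite_subset by auto
    then have "card S = Suc k" using T by simp
    then show ?thesis using T by auto
  qed auto
qed

lemma esym_insert:
  assumes fin: "finite A" and a: "a \<notin> A"
  shows "esym (Suc k) (insert a A) c = esym (Suc k) A c + c a * esym k A c"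
proof -
  let ?B = "{S. S \<subseteq> A \<and> card S = Suc k}"
  let ?C = "{S. S \<subseteq> A \<and> card S = k}"
  have finB: "finite ?B" and finC: "finite ?C"
    using fin by (auto intro: finite_subset[of _ "Pow A"])
  have inj: "inj_on (insert a) ?C"
  proof (rule inj_onI)
    fix S T assume "S \<in> ?C" "T \<in> ?C" "insert a S = insert a T"
    moreover have "a \<notin> S" "a \<notin> T" using \<open>S \<in> ?C\<close> \<open>T \<in> ?C\<close> a by auto
    ultimately show "S = T" by (metis Diff_insert_absorb)
  qed
  have "esym (Suc k) (insert a A) c = (\<Sum>S\<in>?B. \<Prod>i\<in>S. c i) + (\<Sum>S\<in>insert a ` ?C. \<Prod>i\<in>S. c i)"
    unfolding esym_def subsets_card_Suc_insert[OF fin a]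
    by (rule sum.union_disjoint) (use finB finC a in auto)
  also have "(\<Sum>S\<in>insert a ` ?C. \<Prod>i\<in>S. c i) = (\<Sum>T\<in>?C. \<Prod>i\<in>insert a T. c i)"
    using inj by (simp add: sum.reindex)
  also have "\<dots> = (\<Sum>T\<in>?C. c a * (\<Prod>i\<in>T. c i))"
  proof (rule sum.cong)
    fix T assume "T \<in> ?C"
    then have "finite T" "a \<notin> T" using fin a finite_subset by auto
    then show "(\<Prod>i\<in>insert a T. c i) = c a * (\<Prod>i\<in>T. c i)" by simp
  qed simp
  finally show ?thesis by (simp add: esym_def sum_distrib_left)
qed

lemma esym_reindex:
  assumes "bij_betw f A B"
  shows "esym k B c = esym k A (\<lambda>i. c (f i))"
proof -
  have inj: "inj_on f A" using assms by (simp add: bij_betw_def)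
  have img: "f ` A = B" using assms by (simp add: bij_betw_def)
  have 1: "{S. S \<subseteq> B \<and> card S = k} = (\<lambda>S. f ` S) ` {S. S \<subseteq> A \<and> card S = k}"
  proof (intro equalityI subsetI)
    fix S assume S: "S \<in> {S. S \<subseteq> B \<and> card S = k}"
    let ?T = "{x\<in>A. f x \<in> S}"
    have "f ` ?T = S" using S img by auto
    moreover have "card ?T = k"
    proof -
      have "inj_on f ?T" using inj by (rule inj_on_subset) auto
      then have "card (f ` ?T) = card ?T" by (rule card_image)
      then show ?thesis using S \<open>f ` ?T = S\<close> by simp
    qed
    moreover have "?T \<subseteq> A" by blast
    ultimately show "S \<in> (\<lambda>S. f ` S) ` {S. S \<subseteq> A \<and> card S = k}"
      by (intro image_eqI[of _ _ ?T]) auto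
  next
    fix S assume "S \<in> (\<lambda>S. f ` S) ` {S. S \<subseteq> A \<and> card S = k}"
    then obtain T where T: "T \<subseteq> A" "card T = k" "S = f ` T" by auto
    have "inj_on f T" using inj T(1) by (rule inj_on_subset)
    then have "card S = k" using T by (simp add: card_image)
    then show "S \<in> {S. S \<subseteq> B \<and> card S = k}" using T img by auto
  qed
  have 2: "inj_on (\<lambda>S. f ` S) {S. S \<subseteq> A \<and> card S = k}"
    using inj by (auto simp: inj_on_def inj_on_image_eq_iff)
  show ?thesis
    unfolding esym_def 1 using 2
    by (simp add: sum.reindex prod.reindex inj_on_subset[OF inj])
qed

section \<open>Functions that are polynomial in each variable\<close>

definition poly_fun :: "('a::comm_ring_1 \<Rightarrow> 'a) \<Rightarrow> bool" where
  "poly_fun f \<longleftrightarrow> (\<exists>p. \<forall>z. f z = poly p z)"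

lemma poly_fun_const [simp, intro]: "poly_fun (\<lambda>z. c)"
  unfolding poly_fun_def by (rule exI[of _ "[:c:]"]) simp

lemma poly_fun_id [simp, intro]: "poly_fun (\<lambda>z. z)"
  unfolding poly_fun_def by (rule exI[of _ "[:0, 1:]"]) simp

lemma poly_fun_add [intro]: "poly_fun f \<Longrightarrow> poly_fun g \<Longrightarrow> poly_fun (\<lambda>z. f z + g z)"
  unfolding poly_fun_def by (metis poly_add)

lemma poly_fun_mult [intro]: "poly_fun f \<Longrightarrow> poly_fun g \<Longrightarrow> poly_fun (\<lambda>z. f z * g z)"
  unfolding poly_fun_def by (metis poly_mult)

lemma poly_fun_diff [intro]: "poly_fun f \<Longrightarrow> poly_fun g \<Longrightarrow> poly_fun (\<lambda>z. f z - g z)"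
  unfolding poly_fun_def by (metis poly_diff)

lemma poly_fun_sum [intro]: "(\<And>a. a \<in> A \<Longrightarrow> poly_fun (f a)) \<Longrightarrow> poly_fun (\<lambda>z. \<Sum>a\<in>A. f a z)"
proof (induction A rule: infinite_finite_induct)
  case (insert x F)
  then show ?case by (simp add: poly_fun_add)
qed auto

lemma poly_fun_prod [intro]: "(\<And>a. a \<in> A \<Longrightarrow> poly_fun (f a)) \<Longrightarrow> poly_fun (\<lambda>z. \<Prod>a\<in>A. f a z)"
proof (induction A rule: infinite_finite_induct)
  case (insert x F)
  then show ?case by (simp add: poly_fun_mult)
qed auto

lemma poly_fun_power [intro]: "poly_fun f \<Longrightarrow> poly_fun (\<lambda>z. f z ^ n)"
  by (induction n) (auto simp: poly_fun_mult)

lemma poly_fun_mpeval: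
  assumes "\<And>i. poly_fun (\<lambda>z. v z i)"
  shows "poly_fun (\<lambda>z. mpeval (v z) P)"
  unfolding mpeval_def mmono_def using assms
  by (intro poly_fun_sum poly_fun_mult poly_fun_prod poly_fun_power poly_fun_const) auto

lemma poly_fun_esym:
  assumes "\<And>i. poly_fun (\<lambda>z. c z i)"
  shows "poly_fun (\<lambda>z. esym k A (c z))"
  unfolding esym_def using assms
  by (intro poly_fun_sum poly_fun_prod) auto

lemma poly_fun_upd: "poly_fun (\<lambda>z. (v(k := z)) i)"
  by (cases "i = k") auto

lemma poly_fun_zero:
  fixes f :: "'a::idom \<Rightarrow> 'a"
  assumes "poly_fun f" "infinite {z. f z = 0}"
  shows "f z = 0"
proof -
  obtain p where p: "\<And>z. f z = poly p z" using assms(1) unfolding poly_fun_def by blast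
  have "p = 0"
  proof (rule ccontr)
    assume "p \<noteq> 0"
    then have "finite {z. poly p z = 0}" by (rule poly_roots_finite)
    then show False using assms(2) p by simp
  qed
  then show ?thesis using p by simp
qed

lemma poly_fun_zero_from_Ints:
  fixes H :: "(nat \<Rightarrow> 'a::{idom,ring_char_0}) \<Rightarrow> 'a"
  assumes P: "\<And>v k. poly_fun (\<lambda>z. H (v(k := z)))"
    and Z: "\<And>v. (\<And>i. v i \<in> \<int>) \<Longrightarrow> H v = 0"
  shows "(\<And>i. i \<ge> M \<Longrightarrow> v i \<in> \<int>) \<Longrightarrow> H v = 0"
proof (induction M arbitrary: v)
  case 0 then show ?case using Z by simp
next
  case (Suc M)
  have "\<And>z. z \<in> \<int> \<Longrightarrow> H (v(M := z)) = 0"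
  proof -
    fix z :: 'a assume z: "z \<in> \<int>"
    show "H (v(M := z)) = 0"
      by (rule Suc.IH) (use z Suc.prems in \<open>auto simp: not_less_eq_eq\<close>)
  qed
  then have "\<int> \<subseteq> {z. H (v(M := z)) = 0}" by auto
  moreover have "infinite (\<int> :: 'a set)"
  proof -
    have "inj (of_int :: int \<Rightarrow> 'a)" by (simp add: inj_on_def)
    then have "infinite (range (of_int :: int \<Rightarrow> 'a))"
      using finite_imageD[of "of_int :: int \<Rightarrow> 'a" UNIV] infinite_UNIV_int by blast
    then show ?thesis by (simp add: Ints_def)
  qed
  ultimately have "infinite {z. H (v(M := z)) = 0}" using infinite_super by blast
  then have "H (v(M := v M)) = 0" by (rule poly_fun_zero[OF P])
  then show ?case by simp
qed

lemma poly_fun_zero_from_inj: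
  fixes H :: "(nat \<Rightarrow> 'a::{idom,ring_char_0}) \<Rightarrow> 'a"
  assumes P: "\<And>v k. poly_fun (\<lambda>z. H (v(k := z)))"
    and Z: "\<And>v. inj_on v {..<M} \<Longrightarrow> H v = 0"
  shows "H v = 0"
proof -
  have key: "inj_on v {j..<M} \<Longrightarrow> H v = 0" for j v
  proof (induction j arbitrary: v)
    case 0 then show ?case using Z by (simp add: atLeast0LessThan)
  next
    case (Suc j)
    show ?case
    proof (cases "j < M")
      case False
      then have "{j..<M} = {Suc j..<M}" by auto
      then show ?thesis using Suc by simp
    next
      case True
      let ?B = "v ` {Suc j..<M}"
      have "\<And>z. z \<notin> ?B \<Longrightarrow> H (v(j := z)) = 0"
      proof -
        fix z assume z: "z \<notin> ?B"
        have "{j..<M} = insert j {Suc j..<M}" using True by auto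
        moreover have "inj_on (v(j := z)) {Suc j..<M}"
          using Suc.prems by (auto simp: inj_on_def)
        moreover have "(v(j := z)) j \<notin> (v(j := z)) ` {Suc j..<M}" using z by auto
        ultimately have "inj_on (v(j := z)) {j..<M}" by simp
        then show "H (v(j := z)) = 0" by (rule Suc.IH)
      qed
      then have "- ?B \<subseteq> {z. H (v(j := z)) = 0}" by auto
      moreover have "infinite (- ?B)"
      proof -
        have "finite ?B" by simp
        moreover have "infinite (UNIV :: 'a set)"
        proof -
          have "inj (of_nat :: nat \<Rightarrow> 'a)" by (simp add: inj_on_def)
          then show ?thesis using infinite_UNIV_nat infinite_iff_countable_subset by blast
        qed
        ultimately show ?thesis using Diff_infinite_finite[of ?B UNIV] by (simp add: Compl_eq_Diff_UNIV)
      qed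
      ultimately have "infinite {z. H (v(j := z)) = 0}" using infinite_super by blast
      then have "H (v(j := v j)) = 0" by (rule poly_fun_zero[OF P])
      then show ?thesis by simp
    qed
  qed
  show ?thesis using key[of v M] by simp
qed

section \<open>Newton's identities\<close>

text \<open>\<open>psi_seq u\<close> is Newton's recursion behind \<^const>\<open>adams\<close>, applied to the sequence
  \<open>u i = \<lambda>\<^sup>i x\<close>; \<open>lam_seq iv\<close> solves the same recursion for \<open>u\<close>, where \<open>iv k\<close> is an inverse
  of \<open>k\<close> (see \<open>inverts_nat\<close>).\<close>

fun psi_seq :: "(nat \<Rightarrow> 'a::comm_ring_1) \<Rightarrow> nat \<Rightarrow> 'a" where
  "psi_seq u 0 = 0"
| "psi_seq u (Suc n) =
     (-1)^n * of_nat (Suc n) * u (Suc n)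
     + (\<Sum>j<n. (-1)^(n - j + 1) * u (n - j) * psi_seq u (Suc j))"

declare psi_seq.simps [simp del] adams.simps [simp del]

lemma psi_seq_0 [simp]: "psi_seq u 0 = 0" by (simp add: psi_seq.simps)

lemma adams_psi_seq: "adams lam n x = psi_seq (\<lambda>i. lam i x) n"
proof (induction n rule: less_induct)
  case (less n)
  show ?case
  proof (cases n)
    case (Suc m)
    have "\<And>j. j \<in> {..<m} \<Longrightarrow> adams lam (Suc j) x = psi_seq (\<lambda>i. lam i x) (Suc j)"
      using less Suc by simp
    then have "(\<Sum>j<m. (-1)^(m - j + 1) * lam (m - j) x * adams lam (Suc j) x) =
          (\<Sum>j<m. (-1)^(m - j + 1) * lam (m - j) x * psi_seq (\<lambda>i. lam i x) (Suc j))"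
      by (intro sum.cong refl) simp
    then show ?thesis unfolding Suc by (subst adams.simps(2), subst psi_seq.simps(2)) simp
  qed (simp add: adams.simps)
qed

fun lam_seq :: "(nat \<Rightarrow> 'a) \<Rightarrow> (nat \<Rightarrow> 'a::comm_ring_1) \<Rightarrow> nat \<Rightarrow> 'a" where
  "lam_seq iv s 0 = 1"
| "lam_seq iv s (Suc n) = iv (Suc n) * ((-1)^n * (s (Suc n) -
      (\<Sum>j<n. (-1)^(n - j + 1) * lam_seq iv s (n - j) * s (Suc j))))"

declare lam_seq.simps [simp del]

definition newton :: "(nat \<Rightarrow> 'a::comm_ring_1) \<Rightarrow> (nat \<Rightarrow> 'a) \<Rightarrow> bool" where
  "newton u s \<longleftrightarrow> (\<forall>k\<ge>1. (\<Sum>i<k. (-1)^i * u i * s (k - i)) = (-1)^(k - 1) * of_nat k * u k)"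

lemma sum_reflect:
  "(\<Sum>j<n. (-1)^(n - j + 1) * u (n - j) * s (Suc j)) =
   (\<Sum>i<n. (-1)^i * (u (Suc i) :: 'a::comm_ring_1) * s (n - i))"
proof -
  have "(\<Sum>j<n. (-1)^(n - j + 1) * u (n - j) * s (Suc j)) =
        (\<Sum>i<n. (-1)^(n - (n - Suc i) + 1) * u (n - (n - Suc i)) * s (Suc (n - Suc i)))"
    by (rule sum.nat_diff_reindex[symmetric])
  also have "\<dots> = (\<Sum>i<n. (-1)^i * u (Suc i) * s (n - i))"
  proof (rule sum.cong)
    fix i assume "i \<in> {..<n}"
    then have i: "i < n" by simp
    then have 1: "n - (n - Suc i) = Suc i" and 2: "Suc (n - Suc i) = n - i" by auto
    have 3: "(-1::'a)^(Suc i + 1) = (-1)^i" by simp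
    show "(-1)^(n - (n - Suc i) + 1) * u (n - (n - Suc i)) * s (Suc (n - Suc i)) = (-1)^i * u (Suc i) * s (n - i)"
      unfolding 1 2 3 ..
  qed simp
  finally show ?thesis .
qed

lemma newton_sum_Suc:
  "(\<Sum>i<Suc n. (-1)^i * u i * s (Suc n - i)) =
   u 0 * s (Suc n) - (\<Sum>i<n. (-1)^i * (u (Suc i) :: 'a::comm_ring_1) * s (n - i))"
proof -
  have "(\<Sum>i<Suc n. (-1)^i * u i * s (Suc n - i)) = (-1)^0 * u 0 * s (Suc n - 0) + (\<Sum>i<n. (-1)^(Suc i) * u (Suc i) * s (Suc n - Suc i))"
    by (rule sum.lessThan_Suc_shift)
  also have "(\<Sum>i<n. (-1)^(Suc i) * u (Suc i) * s (Suc n - Suc i)) = - (\<Sum>i<n. (-1)^i * u (Suc i) * s (n - i))"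
    by (simp add: sum_negf[symmetric])
  finally show ?thesis by simp
qed

lemma psi_seq_Suc_alt:
  "psi_seq u (Suc n) = (-1)^n * of_nat (Suc n) * u (Suc n) + (\<Sum>i<n. (-1)^i * u (Suc i) * psi_seq u (n - i))"
proof -
  have "(\<Sum>i<n. (-1)^i * u (Suc i) * psi_seq u (n - i)) = (\<Sum>j<n. (-1)^(n - j + 1) * u (n - j) * psi_seq u (Suc j))"
    by (rule sum_reflect[symmetric])
  then show ?thesis by (subst psi_seq.simps(2)) simp
qed

lemma lam_seq_Suc_alt:
  "lam_seq iv s (Suc n) = iv (Suc n) * ((-1)^n * (s (Suc n) - (\<Sum>i<n. (-1)^i * lam_seq iv s (Suc i) * s (n - i))))"
proof -
  have "(\<Sum>j<n. (-1)^(n - j + 1) * lam_seq iv s (n - j) * s (Suc j)) = (\<Sum>i<n. (-1)^i * lam_seq iv s (Suc i) * s (n - i))"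
    by (rule sum_reflect)
  then show ?thesis by (subst lam_seq.simps(2)) simp
qed

lemma lam_seq_0 [simp]: "lam_seq iv s 0 = 1" by (simp add: lam_seq.simps)

lemma newton_psi_seq: "u 0 = 1 \<Longrightarrow> newton u (psi_seq u)"
  unfolding newton_def
proof (intro allI impI)
  fix k :: nat assume u0: "u 0 = 1" and k: "k \<ge> 1"
  then obtain n where n: "k = Suc n" by (cases k) auto
  show "(\<Sum>i<k. (-1)^i * u i * psi_seq u (k - i)) = (-1)^(k - 1) * of_nat k * u k"
    unfolding n newton_sum_Suc using u0 by (simp add: psi_seq_Suc_alt)
qed

lemma newton_psi_seq_eq:
  assumes u0: "u 0 = 1" and N: "newton u s"
  shows "k \<ge> 1 \<Longrightarrow> s k = psi_seq u k"
proof (induction k rule: less_induct)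
  case (less k)
  then obtain n where n: "k = Suc n" by (cases k) auto
  have IH: "\<And>i. i < n \<Longrightarrow> s (n - i) = psi_seq u (n - i)"
    using less n by auto
  have "(\<Sum>i<k. (-1)^i * u i * s (k - i)) = (-1)^(k - 1) * of_nat k * u k"
    using N less.prems unfolding newton_def by blast
  then have "s (Suc n) - (\<Sum>i<n. (-1)^i * u (Suc i) * s (n - i)) = (-1)^n * of_nat (Suc n) * u (Suc n)"
    unfolding n newton_sum_Suc using u0 by simp
  moreover have "(\<Sum>i<n. (-1)^i * u (Suc i) * s (n - i)) = (\<Sum>i<n. (-1)^i * u (Suc i) * psi_seq u (n - i))"
    using IH by (intro sum.cong) auto
  ultimately show ?case unfolding n psi_seq_Suc_alt by (simp add: algebra_simps)
qed

definition inverts_nat :: "(nat \<Rightarrow> 'a::comm_ring_1) \<Rightarrow> bool" where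
  "inverts_nat iv \<longleftrightarrow> (\<forall>k\<ge>1. of_nat k * iv k = 1)"

lemma newton_lam_seq:
  assumes iv: "inverts_nat iv"
  shows "newton (lam_seq iv s) s"
  unfolding newton_def
proof (intro allI impI)
  fix k :: nat assume k: "k \<ge> 1"
  then obtain n where n: "k = Suc n" by (cases k) auto
  have ivn: "of_nat (Suc n) * iv (Suc n) = 1" using iv unfolding inverts_nat_def by auto
  let ?A = "s (Suc n) - (\<Sum>i<n. (-1)^i * lam_seq iv s (Suc i) * s (n - i))"
  have "(-1)^n * of_nat (Suc n) * lam_seq iv s (Suc n) = ((-1)^n * (-1)^n) * (of_nat (Suc n) * iv (Suc n)) * ?A"
    by (subst lam_seq_Suc_alt) (simp only: mult_ac)
  also have "\<dots> = ?A"
  proof -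
    have m1: "((-1::'a)^n * (-1)^n) = 1" by (simp flip: power_add)
    show ?thesis by (simp only: m1 ivn mult_1_left)
  qed
  finally show "(\<Sum>i<k. (-1)^i * lam_seq iv s i * s (k - i)) = (-1)^(k - 1) * of_nat k * lam_seq iv s k"
    unfolding n newton_sum_Suc by simp
qed

lemma newton_lam_seq_eq:
  assumes iv: "inverts_nat iv" and u0: "u 0 = 1" and N: "newton u s"
  shows "u k = lam_seq iv s k"
proof (induction k rule: less_induct)
  case (less k)
  show ?case
  proof (cases k)
    case 0 then show ?thesis using u0 by simp
  next
    case (Suc n)
    have ivn: "of_nat (Suc n) * iv (Suc n) = 1" using iv unfolding inverts_nat_def by auto
    have "(\<Sum>i<Suc n. (-1)^i * u i * s (Suc n - i)) = (-1)^n * of_nat (Suc n) * u (Suc n)"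
      using N unfolding newton_def by (metis diff_Suc_1 le_add1 plus_1_eq_Suc)
    then have E: "s (Suc n) - (\<Sum>i<n. (-1)^i * u (Suc i) * s (n - i)) = (-1)^n * of_nat (Suc n) * u (Suc n)"
      unfolding newton_sum_Suc using u0 by simp
    have IH: "\<And>i. i \<in> {..<n} \<Longrightarrow> lam_seq iv s (Suc i) = u (Suc i)"
      using less.IH Suc by simp
    have S: "(\<Sum>i<n. (-1)^i * lam_seq iv s (Suc i) * s (n - i)) = (\<Sum>i<n. (-1)^i * u (Suc i) * s (n - i))"
      by (rule sum.cong[OF refl]) (simp only: IH)
    have "lam_seq iv s (Suc n) = iv (Suc n) * ((-1)^n * (s (Suc n) - (\<Sum>i<n. (-1)^i * u (Suc i) * s (n - i))))"
      by (subst lam_seq_Suc_alt) (simp only: S)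
    also have "\<dots> = ((-1)^n * (-1)^n) * (of_nat (Suc n) * iv (Suc n)) * u (Suc n)"
      unfolding E by (simp only: mult_ac)
    also have "\<dots> = u (Suc n)"
    proof -
      have m1: "((-1::'a)^n * (-1)^n) = 1" by (simp flip: power_add)
      show ?thesis by (simp only: m1 ivn mult_1_left)
    qed
    finally show ?thesis using Suc by simp
  qed
qed

lemma psi_seq_cong: "(\<And>i. 1 \<le> i \<Longrightarrow> i \<le> k \<Longrightarrow> u i = v i) \<Longrightarrow> psi_seq u k = psi_seq v k"
proof (induction k rule: less_induct)
  case (less k)
  show ?case
  proof (cases k)
    case (Suc n)
    have 1: "\<And>j. j \<in> {..<n} \<Longrightarrow> (-1)^(n - j + 1) * u (n - j) * psi_seq u (Suc j) = (-1)^(n - j + 1) * v (n - j) * psi_seq v (Suc j)"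
    proof -
      fix j assume "j \<in> {..<n}"
      then have j: "j < n" by simp
      have "u (n - j) = v (n - j)" using less.prems Suc j by simp
      moreover have "psi_seq u (Suc j) = psi_seq v (Suc j)" using less Suc j by simp
      ultimately show "(-1)^(n - j + 1) * u (n - j) * psi_seq u (Suc j) = (-1)^(n - j + 1) * v (n - j) * psi_seq v (Suc j)"
        by simp
    qed
    have 2: "u (Suc n) = v (Suc n)" using less.prems Suc by simp
    show ?thesis unfolding Suc
      by (subst psi_seq.simps(2), subst psi_seq.simps(2)) (simp only: 2 sum.cong[OF refl 1])
  qed simp
qed

lemma lam_seq_cong: "(\<And>i. 1 \<le> i \<Longrightarrow> i \<le> k \<Longrightarrow> s i = r i) \<Longrightarrow> lam_seq iv s k = lam_seq iv r k"
proof (induction k rule: less_induct)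
  case (less k)
  show ?case
  proof (cases k)
    case (Suc n)
    have 1: "\<And>j. j \<in> {..<n} \<Longrightarrow> (-1)^(n - j + 1) * lam_seq iv s (n - j) * s (Suc j) = (-1)^(n - j + 1) * lam_seq iv r (n - j) * r (Suc j)"
    proof -
      fix j assume "j \<in> {..<n}"
      then have j: "j < n" by simp
      have "s (Suc j) = r (Suc j)" using less.prems Suc j by simp
      moreover have "lam_seq iv s (n - j) = lam_seq iv r (n - j)" using less Suc j by simp
      ultimately show "(-1)^(n - j + 1) * lam_seq iv s (n - j) * s (Suc j) = (-1)^(n - j + 1) * lam_seq iv r (n - j) * r (Suc j)"
        by simp
    qed
    have 2: "s (Suc n) = r (Suc n)" using less.prems Suc by simp
    show ?thesis unfolding Suc
      by (subst lam_seq.simps(2), subst lam_seq.simps(2)) (simp only: 2 sum.cong[OF refl 1])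
  qed simp
qed

lemma psi_seq_hom: "is_ring_hom h \<Longrightarrow> h (psi_seq u k) = psi_seq (\<lambda>i. h (u i)) k"
proof (induction k rule: less_induct)
  case (less k)
  show ?case
  proof (cases k)
    case (Suc n)
    have 1: "\<And>j. j \<in> {..<n} \<Longrightarrow> h ((-1)^(n - j + 1) * u (n - j) * psi_seq u (Suc j)) = (-1)^(n - j + 1) * h (u (n - j)) * psi_seq (\<lambda>i. h (u i)) (Suc j)"
    proof -
      fix j assume "j \<in> {..<n}"
      then have j: "j < n" by simp
      have "h (psi_seq u (Suc j)) = psi_seq (\<lambda>i. h (u i)) (Suc j)" using less Suc j by simp
      then show "h ((-1)^(n - j + 1) * u (n - j) * psi_seq u (Suc j)) = (-1)^(n - j + 1) * h (u (n - j)) * psi_seq (\<lambda>i. h (u i)) (Suc j)"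
        using less.prems by (simp add: ring_hom_mult ring_hom_power ring_hom_uminus ring_hom_one)
    qed
    have 2: "h ((-1)^n * of_nat (Suc n) * u (Suc n)) = (-1)^n * of_nat (Suc n) * h (u (Suc n))"
      using less.prems by (simp only: ring_hom_mult ring_hom_power ring_hom_uminus ring_hom_one ring_hom_of_nat)
    show ?thesis unfolding Suc
      by (subst psi_seq.simps(2), subst psi_seq.simps(2)) (simp only: 2 ring_hom_add[OF less.prems] ring_hom_sum[OF less.prems] sum.cong[OF refl 1])
  qed (use less.prems in \<open>simp add: ring_hom_zero\<close>)
qed

lemma lam_seq_hom:
  assumes h: "is_ring_hom h" and iv: "\<And>i. h (iv i) = iv' i"
  shows "h (lam_seq iv s k) = lam_seq iv' (\<lambda>i. h (s i)) k"
proof (induction k rule: less_induct)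
  case (less k)
  show ?case
  proof (cases k)
    case (Suc n)
    have 1: "\<And>j. j \<in> {..<n} \<Longrightarrow> h ((-1)^(n - j + 1) * lam_seq iv s (n - j) * s (Suc j)) = (-1)^(n - j + 1) * lam_seq iv' (\<lambda>i. h (s i)) (n - j) * h (s (Suc j))"
    proof -
      fix j assume "j \<in> {..<n}"
      then have j: "j < n" by simp
      have "h (lam_seq iv s (n - j)) = lam_seq iv' (\<lambda>i. h (s i)) (n - j)" using less Suc j by simp
      then show "h ((-1)^(n - j + 1) * lam_seq iv s (n - j) * s (Suc j)) = (-1)^(n - j + 1) * lam_seq iv' (\<lambda>i. h (s i)) (n - j) * h (s (Suc j))"
        using h by (simp add: ring_hom_mult ring_hom_power ring_hom_uminus ring_hom_one)
    qed
    have S: "h (\<Sum>j<n. (-1)^(n - j + 1) * lam_seq iv s (n - j) * s (Suc j)) = (\<Sum>j<n. (-1)^(n - j + 1) * lam_seq iv' (\<lambda>i. h (s i)) (n - j) * h (s (Suc j)))"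
    proof -
      have "h (\<Sum>j<n. (-1)^(n - j + 1) * lam_seq iv s (n - j) * s (Suc j)) = (\<Sum>j<n. h ((-1)^(n - j + 1) * lam_seq iv s (n - j) * s (Suc j)))"
        by (rule ring_hom_sum[OF h])
      also have "\<dots> = (\<Sum>j<n. (-1)^(n - j + 1) * lam_seq iv' (\<lambda>i. h (s i)) (n - j) * h (s (Suc j)))"
        by (rule sum.cong[OF refl 1])
      finally show ?thesis .
    qed
    show ?thesis unfolding Suc
      by (subst lam_seq.simps(2), subst lam_seq.simps(2))
        (simp only: iv ring_hom_mult[OF h] ring_hom_power[OF h] ring_hom_uminus[OF h] ring_hom_one[OF h] ring_hom_diff[OF h] S)
  qed (simp add: ring_hom_one[OF h])
qed

definition seq_conv :: "(nat \<Rightarrow> 'a::comm_ring_1) \<Rightarrow> (nat \<Rightarrow> 'a) \<Rightarrow> nat \<Rightarrow> 'a" where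
  "seq_conv u v k = (\<Sum>i\<le>k. u i * v (k - i))"

text \<open>With \<open>U = \<Sum>u\<^sub>k t\<^sup>k\<close>, \<open>newton u s\<close> says \<open>U \<cdot> psi_fps s = t U'\<close>; see \<open>newton_fps\<close>.\<close>

definition psi_fps :: "(nat \<Rightarrow> 'a::comm_ring_1) \<Rightarrow> 'a fps" where
  "psi_fps s = Abs_fps (\<lambda>k. if k = 0 then 0 else (-1)^(k - 1) * s k)"

lemma neg1_pow_diff: "i \<le> m \<Longrightarrow> (-1::'a::comm_ring_1)^(m - i) = (-1)^m * (-1)^i"
proof -
  assume "i \<le> m"
  then have "(-1::'a)^m = (-1)^(m - i) * (-1)^i" by (simp flip: power_add)
  then have "(-1::'a)^m * (-1)^i = (-1)^(m - i) * ((-1)^i * (-1)^i)" by (simp add: mult_ac)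
  also have "(-1::'a)^i * (-1)^i = 1" by (simp flip: power_add)
  finally show ?thesis by simp
qed

lemma fps_psi_fps_nth:
  fixes u s :: "nat \<Rightarrow> 'a::comm_ring_1"
  shows "(Abs_fps u * psi_fps s) $ Suc n = (-1)^n * (\<Sum>i<Suc n. (-1)^i * u i * s (Suc n - i))"
proof -
  have "(Abs_fps u * psi_fps s) $ Suc n = (\<Sum>i=0..Suc n. u i * psi_fps s $ (Suc n - i))"
    by (simp add: fps_mult_nth)
  also have "\<dots> = (\<Sum>i<Suc n. u i * psi_fps s $ (Suc n - i))"
    by (simp add: atLeast0AtMost lessThan_Suc_atMost[symmetric] psi_fps_def)
  also have "\<dots> = (\<Sum>i<Suc n. (-1)^n * ((-1)^i * u i * s (Suc n - i)))"
  proof (rule sum.cong)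
    fix i assume "i \<in> {..<Suc n}"
    then have i: "i \<le> n" by simp
    have "psi_fps s $ (Suc n - i) = (-1)^(n - i) * s (Suc n - i)"
      using i by (simp add: psi_fps_def Suc_diff_le)
    then show "u i * psi_fps s $ (Suc n - i) = (-1)^n * ((-1)^i * u i * s (Suc n - i))"
      using i by (simp add: neg1_pow_diff mult_ac)
  qed simp
  finally show ?thesis by (simp only: sum_distrib_left)
qed

lemma newton_fps: "newton u s \<longleftrightarrow> Abs_fps u * psi_fps s = fps_X * fps_deriv (Abs_fps u)"
proof
  assume N: "newton u s"
  show "Abs_fps u * psi_fps s = fps_X * fps_deriv (Abs_fps u)"
  proof (rule fps_ext)
    fix k show "(Abs_fps u * psi_fps s) $ k = (fps_X * fps_deriv (Abs_fps u)) $ k"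
    proof (cases k)
      case 0 then show ?thesis by (simp add: fps_mult_nth psi_fps_def)
    next
      case (Suc n)
      have "(\<Sum>i<Suc n. (-1)^i * u i * s (Suc n - i)) = (-1)^n * of_nat (Suc n) * u (Suc n)"
        using N unfolding newton_def by (metis diff_Suc_1 le_add1 plus_1_eq_Suc)
      then have "(Abs_fps u * psi_fps s) $ Suc n = ((-1)^n * (-1)^n) * of_nat (Suc n) * u (Suc n)"
        by (simp add: fps_psi_fps_nth mult_ac)
      also have "(-1::'a)^n * (-1)^n = 1" by (simp flip: power_add)
      finally show ?thesis using Suc by (simp add: fps_deriv_def)
    qed
  qed
next
  assume E: "Abs_fps u * psi_fps s = fps_X * fps_deriv (Abs_fps u)"
  show "newton u s" unfolding newton_def
  proof (intro allI impI)
    fix k :: nat assume "k \<ge> 1"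
    then obtain n where n: "k = Suc n" by (cases k) auto
    have "(Abs_fps u * psi_fps s) $ Suc n = (fps_X * fps_deriv (Abs_fps u)) $ Suc n" using E by simp
    then have "(-1)^n * (\<Sum>i<Suc n. (-1)^i * u i * s (Suc n - i)) = of_nat (Suc n) * u (Suc n)"
      by (simp add: fps_psi_fps_nth fps_deriv_def)
    then have "((-1)^n * (-1)^n) * (\<Sum>i<Suc n. (-1)^i * u i * s (Suc n - i)) = (-1)^n * of_nat (Suc n) * u (Suc n)"
      by (metis mult.assoc)
    also have "(-1::'a)^n * (-1)^n = 1" by (simp flip: power_add)
    finally show "(\<Sum>i<k. (-1)^i * u i * s (k - i)) = (-1)^(k - 1) * of_nat k * u k"
      unfolding n by simp
  qed
qed

lemma psi_fps_add: "psi_fps (\<lambda>k. s k + r k) = psi_fps s + psi_fps r"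
  by (rule fps_ext) (simp add: psi_fps_def algebra_simps)

lemma Abs_fps_seq_conv: "Abs_fps (seq_conv u v) = Abs_fps u * Abs_fps v"
  by (rule fps_ext) (simp add: seq_conv_def fps_mult_nth atLeast0AtMost)

lemma newton_seq_conv:
  assumes "newton u s" "newton v r"
  shows "newton (seq_conv u v) (\<lambda>k. s k + r k)"
proof -
  let ?U = "Abs_fps u" and ?V = "Abs_fps v"
  have 1: "?U * psi_fps s = fps_X * fps_deriv ?U" using assms(1) by (simp add: newton_fps)
  have 2: "?V * psi_fps r = fps_X * fps_deriv ?V" using assms(2) by (simp add: newton_fps)
  have "(?U * ?V) * (psi_fps s + psi_fps r) = (?U * psi_fps s) * ?V + (?V * psi_fps r) * ?U"
    by (simp add: algebra_simps)
  also have "\<dots> = fps_X * fps_deriv (?U * ?V)"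
    unfolding 1 2 fps_deriv_mult by (simp add: algebra_simps)
  finally show ?thesis by (simp add: newton_fps Abs_fps_seq_conv psi_fps_add)
qed

lemma newton_cong: "newton u s \<Longrightarrow> (\<And>k. k \<ge> 1 \<Longrightarrow> s k = r k) \<Longrightarrow> newton u r"
  unfolding newton_def
proof (intro allI impI)
  fix k :: nat assume N: "\<forall>k\<ge>1. (\<Sum>i<k. (-1)^i * u i * s (k - i)) = (-1)^(k - 1) * of_nat k * u k"
    and e: "\<And>k. k \<ge> 1 \<Longrightarrow> s k = r k" and k: "k \<ge> 1"
  have "(\<Sum>i<k. (-1)^i * u i * r (k - i)) = (\<Sum>i<k. (-1)^i * u i * s (k - i))"
    using e by (intro sum.cong) auto
  then show "(\<Sum>i<k. (-1)^i * u i * r (k - i)) = (-1)^(k - 1) * of_nat k * u k" using N k by simp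
qed

lemma newton_hom:
  assumes h: "is_ring_hom h" and N: "newton u s"
  shows "newton (\<lambda>k. h (u k)) (\<lambda>k. h (s k))"
  unfolding newton_def
proof (intro allI impI)
  fix k :: nat assume k: "k \<ge> 1"
  have "(\<Sum>i<k. (-1)^i * u i * s (k - i)) = (-1)^(k - 1) * of_nat k * u k" using N k unfolding newton_def by blast
  then have "h (\<Sum>i<k. (-1)^i * u i * s (k - i)) = h ((-1)^(k - 1) * of_nat k * u k)" by simp
  then show "(\<Sum>i<k. (-1)^i * h (u i) * h (s (k - i))) = (-1)^(k - 1) * of_nat k * h (u k)"
    by (simp add: ring_hom_sum[OF h] ring_hom_mult[OF h] ring_hom_power[OF h] ring_hom_uminus[OF h] ring_hom_one[OF h] ring_hom_of_nat[OF h])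
qed

lemma Abs_fps_nth: "Abs_fps (\<lambda>k. f $ k) = f"
  by (rule fps_ext) simp

lemma esym_fps_insert:
  assumes "finite A" "a \<notin> A"
  shows "Abs_fps (\<lambda>k. esym k (insert a A) c) = (1 + fps_const (c a) * fps_X) * Abs_fps (\<lambda>k. esym k A c)"
proof (rule fps_ext)
  fix k show "Abs_fps (\<lambda>k. esym k (insert a A) c) $ k = ((1 + fps_const (c a) * fps_X) * Abs_fps (\<lambda>k. esym k A c)) $ k"
    using assms by (cases k) (simp_all add: esym_0 esym_insert distrib_right mult.assoc fps_X_mult_nth)
qed

lemma newton_single: "newton (\<lambda>k. (1 + fps_const x * fps_X) $ k) (\<lambda>k. x ^ k)"
proof -
  have "(1 + fps_const x * fps_X) * psi_fps (\<lambda>k. x ^ k) = fps_X * fps_deriv (1 + fps_const x * fps_X)"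
  proof (rule fps_ext)
    fix k show "((1 + fps_const x * fps_X) * psi_fps (\<lambda>k. x ^ k)) $ k = (fps_X * fps_deriv (1 + fps_const x * fps_X)) $ k"
    proof (cases k)
      case 0 then show ?thesis by (simp add: psi_fps_def distrib_right mult.assoc fps_X_mult_nth)
    next
      case (Suc n)
      show ?thesis
      proof (cases n)
        case 0 then show ?thesis using Suc by (simp add: psi_fps_def distrib_right mult.assoc fps_X_mult_nth)
      next
        case (Suc m)
        have "((1 + fps_const x * fps_X) * psi_fps (\<lambda>k. x ^ k)) $ Suc (Suc m) = (-1)^(Suc m) * x^(Suc (Suc m)) + x * ((-1)^m * x^(Suc m))"
          by (simp add: psi_fps_def distrib_right mult.assoc fps_X_mult_nth)
        also have "\<dots> = 0" by simp
        finally show ?thesis using \<open>k = Suc n\<close> Suc by (simp add: fps_X_mult_nth)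
      qed
    qed
  qed
  moreover have "Abs_fps (\<lambda>k. (1 + fps_const x * fps_X) $ k) = 1 + fps_const x * fps_X"
    by (rule Abs_fps_nth)
  ultimately show ?thesis by (simp add: newton_fps)
qed

lemma newton_esym:
  assumes "finite A"
  shows "newton (\<lambda>k. esym k A c) (\<lambda>k. \<Sum>a\<in>A. c a ^ k)"
  using assms
proof (induction A rule: finite_induct)
  case empty
  show ?case unfolding newton_def
  proof (intro allI impI)
    fix k :: nat assume "k \<ge> 1"
    then obtain n where "k = Suc n" by (cases k) auto
    then show "(\<Sum>i<k. (-1)^i * esym i {} c * (\<Sum>a\<in>{}. c a ^ (k - i))) = (-1)^(k - 1) * of_nat k * esym k {} c"
      by (simp add: esym_empty_Suc)
  qed
next
  case (insert a A)
  have N1: "newton (\<lambda>k. (1 + fps_const (c a) * fps_X) $ k) (\<lambda>k. c a ^ k)" by (rule newton_single)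
  have C: "newton (seq_conv (\<lambda>k. (1 + fps_const (c a) * fps_X) $ k) (\<lambda>k. esym k A c)) (\<lambda>k. c a ^ k + (\<Sum>a\<in>A. c a ^ k))"
    by (rule newton_seq_conv[OF N1 insert.IH])
  have "seq_conv (\<lambda>k. (1 + fps_const (c a) * fps_X) $ k) (\<lambda>k. esym k A c) = (\<lambda>k. esym k (insert a A) c)"
  proof -
    have "Abs_fps (seq_conv (\<lambda>k. (1 + fps_const (c a) * fps_X) $ k) (\<lambda>k. esym k A c)) = Abs_fps (\<lambda>k. esym k (insert a A) c)"
      unfolding Abs_fps_seq_conv esym_fps_insert[OF insert.hyps] Abs_fps_nth ..
    then show ?thesis by (metis fps_nth_Abs_fps)
  qed
  moreover have "(\<lambda>k. c a ^ k + (\<Sum>a\<in>A. c a ^ k)) = (\<lambda>k. \<Sum>a\<in>insert a A. c a ^ k)"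
    using insert.hyps by simp
  ultimately show ?case using C by simp
qed

lemma psi_seq_esym:
  assumes "finite A" "k \<ge> 1"
  shows "psi_seq (\<lambda>k. esym k A c) k = (\<Sum>a\<in>A. c a ^ k)"
  using newton_psi_seq_eq[of "\<lambda>k. esym k A c" "\<lambda>k. \<Sum>a\<in>A. c a ^ k" k] esym_0[OF assms(1), of c] newton_esym[OF assms(1), of c] assms(2)
  by simp

lemma psi_seq_lam_seq:
  assumes "inverts_nat iv" "k \<ge> 1"
  shows "psi_seq (lam_seq iv s) k = s k"
  using newton_psi_seq_eq[of "lam_seq iv s" s k] newton_lam_seq[of iv s] assms by simp

lemma lam_seq_esym:
  assumes "inverts_nat iv" "finite A"
  shows "lam_seq iv (\<lambda>k. \<Sum>a\<in>A. c a ^ k) k = esym k A c"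
  using newton_lam_seq_eq[of iv "\<lambda>k. esym k A c" "\<lambda>k. \<Sum>a\<in>A. c a ^ k" k] esym_0[OF assms(2), of c] newton_esym[OF assms(2), of c] assms(1)
  by simp

section \<open>Splitting over the complex numbers\<close>

lemma coeff_prod_linear:
  fixes \<xi> :: "'b \<Rightarrow> 'a::comm_ring_1"
  assumes "finite A"
  shows "coeff (\<Prod>i\<in>A. [:\<xi> i, 1:]) m = (if m \<le> card A then esym (card A - m) A \<xi> else 0)"
  using assms
proof (induction A arbitrary: m rule: finite_induct)
  case empty
  then show ?case by (cases m) (simp_all add: esym_0)
next
  case (insert a A)
  let ?q = "\<Prod>i\<in>A. [:\<xi> i, 1:]"
  let ?n = "card A"
  have cA: "card (insert a A) = Suc ?n" using insert by simp
  have "(\<Prod>i\<in>insert a A. [:\<xi> i, 1:]) = [:\<xi> a, 1:] * ?q" using insert by simp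
  also have "[:\<xi> a, 1:] * ?q = smult (\<xi> a) ?q + pCons 0 ?q"
    by (simp add: mult_pCons_left)
  finally have E: "coeff (\<Prod>i\<in>insert a A. [:\<xi> i, 1:]) m = \<xi> a * coeff ?q m + (if m = 0 then 0 else coeff ?q (m - 1))"
    by (cases m) simp_all
  show ?case
  proof (cases "m = 0")
    case True
    have "esym (Suc ?n) (insert a A) \<xi> = esym (Suc ?n) A \<xi> + \<xi> a * esym ?n A \<xi>"
      using insert by (simp add: esym_insert)
    moreover have "esym (Suc ?n) A \<xi> = 0" using insert by (simp add: esym_gt)
    ultimately show ?thesis using E True cA insert by simp
  next
    case False
    then obtain m' where m': "m = Suc m'" by (cases m) auto
    show ?thesis
    proof (cases "m' < ?n")
      case True
      have "esym (Suc (?n - Suc m')) (insert a A) \<xi> = esym (Suc (?n - Suc m')) A \<xi> + \<xi> a * esym (?n - Suc m') A \<xi>"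
        using insert by (simp add: esym_insert)
      moreover have "Suc (?n - Suc m') = ?n - m'" using True by simp
      moreover have "Suc ?n - m = ?n - m'" using m' by simp
      ultimately show ?thesis using E True cA insert m' by (simp add: add.commute)
    next
      case False
      show ?thesis
      proof (cases "m' = ?n")
        case True
        then show ?thesis using E cA insert m' by (simp add: esym_0)
      next
        case False
        then show ?thesis using E cA insert m' \<open>\<not> m' < ?n\<close> by simp
      qed
    qed
  qed
qed

lemma esym_surj_complex:
  fixes u :: "nat \<Rightarrow> complex"
  shows "\<exists>\<xi>. \<forall>j. 1 \<le> j \<longrightarrow> j \<le> N \<longrightarrow> esym j {..<N} \<xi> = u j"
proof -
  let ?u = "\<lambda>j. if j = 0 then 1 else u j"
  define p where "p = (\<Sum>j\<le>N. monom (?u j) (N - j))"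
  have cp: "coeff p m = (if m \<le> N then ?u (N - m) else 0)" for m
  proof -
    have "coeff p m = (\<Sum>j\<le>N. if N - j = m then ?u j else 0)"
      by (simp add: p_def coeff_sum coeff_monom)
    also have "\<dots> = (if m \<le> N then ?u (N - m) else 0)"
    proof (cases "m \<le> N")
      case True
      have "(\<Sum>j\<le>N. if N - j = m then ?u j else 0) = (\<Sum>j\<in>{N - m}. ?u j)"
        by (rule sum.mono_neutral_cong_right) (use True in auto)
      then show ?thesis using True by simp
    next
      case False
      then show ?thesis by (intro trans[OF sum.neutral]) auto
    qed
    finally show ?thesis .
  qed
  have degp: "degree p = N"
  proof (rule antisym)
    show "degree p \<le> N" by (rule degree_le) (simp add: cp)
    show "N \<le> degree p" by (rule le_degree) (simp add: cp)
  qed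
  have lc: "lead_coeff p = 1" using degp cp by simp
  obtain root where r: "smult (lead_coeff p) (\<Prod>i<degree p. [:-root i, 1:]) = p"
    by (rule complex_poly_decompose')
  then have pr: "p = (\<Prod>i<N. [:-root i, 1:])" using lc degp by simp
  have "\<forall>j. 1 \<le> j \<longrightarrow> j \<le> N \<longrightarrow> esym j {..<N} (\<lambda>i. - root i) = u j"
  proof (intro allI impI)
    fix j assume j: "1 \<le> j" "j \<le> N"
    have "coeff p (N - j) = esym (N - (N - j)) {..<N} (\<lambda>i. - root i)"
      unfolding pr by (subst coeff_prod_linear) simp_all
    then show "esym j {..<N} (\<lambda>i. - root i) = u j" using j cp by simp
  qed
  then show ?thesis by blast
qed

section \<open>The fundamental theorem on symmetric polynomials\<close>

definition int_poly_fun :: "((nat \<Rightarrow> int) \<Rightarrow> int) \<Rightarrow> bool" where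
  "int_poly_fun F \<longleftrightarrow> (\<exists>P. \<forall>v. F v = mpeval v P)"

lemma int_poly_fun_const [intro, simp]: "int_poly_fun (\<lambda>v. c)"
  unfolding int_poly_fun_def by (rule exI[of _ "of_int c"]) (simp add: mpeval_of_int)

lemma int_poly_fun_var [intro, simp]: "int_poly_fun (\<lambda>v. v i)"
  unfolding int_poly_fun_def by (rule exI[of _ "mvar i"]) simp

lemma int_poly_fun_add [intro]: "int_poly_fun F \<Longrightarrow> int_poly_fun G \<Longrightarrow> int_poly_fun (\<lambda>v. F v + G v)"
  unfolding int_poly_fun_def by (metis mpeval_add)

lemma int_poly_fun_mult [intro]: "int_poly_fun F \<Longrightarrow> int_poly_fun G \<Longrightarrow> int_poly_fun (\<lambda>v. F v * G v)"
  unfolding int_poly_fun_def by (metis mpeval_mult)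

lemma int_poly_fun_uminus [intro]: "int_poly_fun F \<Longrightarrow> int_poly_fun (\<lambda>v. - F v)"
  unfolding int_poly_fun_def by (metis mpeval_uminus)

lemma int_poly_fun_diff [intro]: "int_poly_fun F \<Longrightarrow> int_poly_fun G \<Longrightarrow> int_poly_fun (\<lambda>v. F v - G v)"
  unfolding int_poly_fun_def by (metis mpeval_diff)

lemma int_poly_fun_sum [intro]: "(\<And>a. a \<in> A \<Longrightarrow> int_poly_fun (F a)) \<Longrightarrow> int_poly_fun (\<lambda>v. \<Sum>a\<in>A. F a v)"
proof (induction A rule: infinite_finite_induct)
  case (insert x F)
  then show ?case by (simp add: int_poly_fun_add)
qed auto

lemma int_poly_fun_prod [intro]: "(\<And>a. a \<in> A \<Longrightarrow> int_poly_fun (F a)) \<Longrightarrow> int_poly_fun (\<lambda>v. \<Prod>a\<in>A. F a v)"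
proof (induction A rule: infinite_finite_induct)
  case (insert x F)
  then show ?case by (simp add: int_poly_fun_mult)
qed auto

lemma int_poly_fun_power [intro]: "int_poly_fun F \<Longrightarrow> int_poly_fun (\<lambda>v. F v ^ n)"
  by (induction n) (auto simp: int_poly_fun_mult)

lemma int_poly_fun_mpeval:
  assumes "\<And>j. int_poly_fun (\<lambda>v. w v j)"
  shows "int_poly_fun (\<lambda>v. mpeval (w v) P)"
  unfolding mpeval_def mmono_def using assms
  by (intro int_poly_fun_sum int_poly_fun_mult int_poly_fun_prod int_poly_fun_power int_poly_fun_const) auto

lemma int_poly_fun_comp:
  assumes "int_poly_fun G" "\<And>j. int_poly_fun (\<lambda>v. w v j)"
  shows "int_poly_fun (\<lambda>v. G (w v))"
proof -
  obtain P where P: "\<And>v. G v = mpeval v P" using assms(1) unfolding int_poly_fun_def by blast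
  show ?thesis unfolding P by (rule int_poly_fun_mpeval[OF assms(2)])
qed

lemma int_poly_fun_esym:
  assumes "\<And>i. int_poly_fun (\<lambda>v. c v i)"
  shows "int_poly_fun (\<lambda>v. esym k A (c v))"
  unfolding esym_def using assms by (intro int_poly_fun_sum int_poly_fun_prod) auto

lemma int_poly_fun_poly_fun:
  assumes "int_poly_fun F"
  shows "poly_fun (\<lambda>z. F (v(k := z)))"
proof -
  obtain P where P: "\<And>v. F v = mpeval v P" using assms unfolding int_poly_fun_def by blast
  show ?thesis unfolding P by (rule poly_fun_mpeval) (rule poly_fun_upd)
qed

lemma esym_cong: "(\<And>i. i \<in> A \<Longrightarrow> c i = d i) \<Longrightarrow> esym k A c = esym k A d"
  unfolding esym_def by (intro sum.cong refl prod.cong) auto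

definition esym_subst :: "nat \<Rightarrow> (nat \<Rightarrow> 'a::comm_ring_1) \<Rightarrow> nat \<Rightarrow> 'a" where
  "esym_subst N v j = (if j < N then esym (Suc j) {..<N} v else v j)"

lemma int_poly_fun_esym_subst [intro]: "int_poly_fun (\<lambda>v. esym_subst N v j)"
  unfolding esym_subst_def by (cases "j < N") (auto intro: int_poly_fun_esym)

lemma int_poly_fun_comp_esym_subst: "int_poly_fun G \<Longrightarrow> int_poly_fun (\<lambda>v. G (esym_subst N v))"
  by (rule int_poly_fun_comp) auto

lemma int_poly_fun_comp_map:
  assumes "int_poly_fun G" shows "int_poly_fun (\<lambda>v. G (\<lambda>i. v (\<sigma> i)))"
proof (rule int_poly_fun_comp[OF assms])
  fix j show "int_poly_fun (\<lambda>v. v (\<sigma> j))" by (rule int_poly_fun_var)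
qed

lemma esym_subst_hom: "is_ring_hom h \<Longrightarrow> esym_subst N (\<lambda>i. h (v i)) j = h (esym_subst N v j)"
  by (simp add: esym_subst_def esym_hom)

definition symmetric_fun :: "nat \<Rightarrow> ((nat \<Rightarrow> 'a) \<Rightarrow> 'b) \<Rightarrow> bool" where
  "symmetric_fun N F \<longleftrightarrow> (\<forall>a b v. a < N \<longrightarrow> b < N \<longrightarrow> F (\<lambda>k. v (transpose a b k)) = F v)"

lemma esym_subst_transpose:
  assumes "a < N" "b < N"
  shows "esym_subst N (\<lambda>k. v (transpose a b k)) = esym_subst N v"
proof
  fix j show "esym_subst N (\<lambda>k. v (transpose a b k)) j = esym_subst N v j"
  proof (cases "j < N")
    case True
    have "esym (Suc j) {..<N} v = esym (Suc j) {..<N} (\<lambda>k. v (transpose a b k))"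
      using assms by (intro esym_reindex) simp
    then show ?thesis using True by (simp add: esym_subst_def)
  next
    case False
    then have "transpose a b j = j" using assms by (auto simp: transpose_def)
    then show ?thesis using False by (simp add: esym_subst_def)
  qed
qed

text \<open>The normal form in the induction step of the fundamental theorem: a polynomial of degree
  \<open>\<le> N\<close> in \<open>v N\<close> whose coefficients are polynomials in the elementary symmetric functions of
  \<open>v 0, \<dots>, v N\<close> (and in the remaining variables).\<close>

definition esym_reduced :: "nat \<Rightarrow> ((nat \<Rightarrow> int) \<Rightarrow> int) \<Rightarrow> bool" where
  "esym_reduced N f \<longleftrightarrow> (\<exists>G. (\<forall>k. int_poly_fun (G k)) \<and> (\<forall>v. f v = (\<Sum>k\<le>N. G k (esym_subst (Suc N) v) * v N ^ k)))"

lemma sum_delta0: "(\<Sum>k\<le>(N::nat). (if k = 0 then a else 0)) = (a :: 'a::comm_monoid_add)"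
  by (induction N) auto

lemma esym_reduced_comp_esym_subst_Suc: "int_poly_fun G \<Longrightarrow> esym_reduced N (\<lambda>v. G (esym_subst (Suc N) v))"
  unfolding esym_reduced_def
proof (rule exI[of _ "\<lambda>k. if k = 0 then G else (\<lambda>_. 0)"], intro conjI allI)
  fix k v assume "int_poly_fun G"
  then show "int_poly_fun (if k = 0 then G else (\<lambda>_. 0))" by simp
next
  fix v :: "nat \<Rightarrow> int"
  have "(\<Sum>k\<le>N. (if k = 0 then G else (\<lambda>_. 0)) (esym_subst (Suc N) v) * v N ^ k) = (\<Sum>k\<le>N. (if k = 0 then G (esym_subst (Suc N) v) else 0))"
    by (intro sum.cong) auto
  then show "G (esym_subst (Suc N) v) = (\<Sum>k\<le>N. (if k = 0 then G else (\<lambda>_. 0)) (esym_subst (Suc N) v) * v N ^ k)"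
    by (simp only: sum_delta0)
qed

lemma esym_reduced_const: "esym_reduced N (\<lambda>v. c)"
  using esym_reduced_comp_esym_subst_Suc[of "\<lambda>_. c" N] by simp

lemma esym_reduced_add: "esym_reduced N f \<Longrightarrow> esym_reduced N g \<Longrightarrow> esym_reduced N (\<lambda>v. f v + g v)"
proof -
  assume "esym_reduced N f" "esym_reduced N g"
  then obtain F G where F: "\<forall>k. int_poly_fun (F k)" "\<forall>v. f v = (\<Sum>k\<le>N. F k (esym_subst (Suc N) v) * v N ^ k)"
    and G: "\<forall>k. int_poly_fun (G k)" "\<forall>v. g v = (\<Sum>k\<le>N. G k (esym_subst (Suc N) v) * v N ^ k)"
    unfolding esym_reduced_def by blast
  show ?thesis unfolding esym_reduced_def
    by (rule exI[of _ "\<lambda>k w. F k w + G k w"]) (use F G in \<open>auto simp: distrib_right sum.distrib\<close>)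
qed

lemma esym_reduced_scale: "esym_reduced N f \<Longrightarrow> int_poly_fun H \<Longrightarrow> esym_reduced N (\<lambda>v. f v * H (esym_subst (Suc N) v))"
proof -
  assume "esym_reduced N f" and H: "int_poly_fun H"
  then obtain F where F: "\<forall>k. int_poly_fun (F k)" "\<forall>v. f v = (\<Sum>k\<le>N. F k (esym_subst (Suc N) v) * v N ^ k)"
    unfolding esym_reduced_def by blast
  have "f v * H (esym_subst (Suc N) v) = (\<Sum>k\<le>N. (F k (esym_subst (Suc N) v) * H (esym_subst (Suc N) v)) * v N ^ k)" for v
  proof -
    have "f v * H (esym_subst (Suc N) v) = (\<Sum>k\<le>N. F k (esym_subst (Suc N) v) * v N ^ k * H (esym_subst (Suc N) v))"
      using F(2) by (simp add: sum_distrib_right)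
    also have "\<dots> = (\<Sum>k\<le>N. (F k (esym_subst (Suc N) v) * H (esym_subst (Suc N) v)) * v N ^ k)"
      by (intro sum.cong) (simp_all add: mult_ac)
    finally show ?thesis .
  qed
  moreover have "\<forall>k. int_poly_fun (\<lambda>w. F k w * H w)" using F(1) H by auto
  ultimately show ?thesis unfolding esym_reduced_def
    by (intro exI[of _ "\<lambda>k w. F k w * H w"]) auto
qed

lemma esym_uminus: "esym k A (\<lambda>i. - c i) = (-1)^k * esym k A c"
  unfolding esym_def sum_distrib_left
proof (intro sum.cong refl)
  fix S assume "S \<in> {S. S \<subseteq> A \<and> card S = k}"
  then have cS: "card S = k" by simp
  have "(\<Prod>i\<in>S. - c i) = (\<Prod>i\<in>S. (-1) * c i)" by simp
  also have "\<dots> = (\<Prod>i\<in>S. -1) * (\<Prod>i\<in>S. c i)" by (rule prod.distrib)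
  also have "(\<Prod>i\<in>S. (-1::'a)) = (-1)^k" using cS by simp
  finally show "(\<Prod>i\<in>S. - c i) = (-1)^k * (\<Prod>i\<in>S. c i)" .
qed

lemma sum_atMost_shift0: "(\<Sum>k\<le>N. f k) = f 0 + (\<Sum>k<N. f (Suc k))"
proof (cases N)
  case (Suc n)
  show ?thesis unfolding Suc sum.atMost_Suc_shift lessThan_Suc_atMost ..
qed simp

lemma root_power_reduction:
  fixes v :: "nat \<Rightarrow> int"
  shows "v N ^ Suc N = (\<Sum>m\<le>N. (- ((-1)^(Suc N - m) * esym_subst (Suc N) v (N - m))) * v N ^ m)"
proof -
  let ?p = "\<Prod>i<Suc N. [:- v i, 1:]"
  have cp: "coeff ?p m = (if m \<le> Suc N then esym (Suc N - m) {..<Suc N} (\<lambda>i. - v i) else 0)" for m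
    by (subst coeff_prod_linear) simp_all
  have dp: "degree ?p \<le> Suc N"
  proof (rule degree_le, intro allI impI)
    fix i assume "Suc N < i"
    then show "coeff ?p i = 0" by (subst cp) simp
  qed
  have "poly ?p (v N) = (\<Prod>i<Suc N. v N - v i)" by (simp add: poly_prod)
  also have "\<dots> = 0" by (rule prod_zero) (auto intro: bexI[of _ N])
  finally have 0: "poly ?p (v N) = 0" .
  have "poly ?p (v N) = (\<Sum>m\<le>degree ?p. coeff ?p m * v N ^ m)" by (rule poly_altdef)
  also have "\<dots> = (\<Sum>m\<le>Suc N. coeff ?p m * v N ^ m)"
  proof (rule sum.mono_neutral_left)
    show "finite {..Suc N}" by simp
    show "{..degree ?p} \<subseteq> {..Suc N}" using dp by auto
    show "\<forall>i\<in>{..Suc N} - {..degree ?p}. coeff ?p i * v N ^ i = 0"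
    proof
      fix i assume "i \<in> {..Suc N} - {..degree ?p}"
      then have "degree ?p < i" by simp
      then show "coeff ?p i * v N ^ i = 0" by (simp only: coeff_eq_0 mult_zero_left)
    qed
  qed
  also have "\<dots> = (\<Sum>m\<le>N. coeff ?p m * v N ^ m) + v N ^ Suc N"
  proof -
    have C1: "coeff ?p (Suc N) = 1" by (subst cp) (simp add: esym_0)
    show ?thesis by (simp only: sum.atMost_Suc C1 mult_1_left)
  qed
  finally have E: "v N ^ Suc N = - (\<Sum>m\<le>N. coeff ?p m * v N ^ m)" using 0 by simp
  have "\<And>m. m \<in> {..N} \<Longrightarrow> coeff ?p m = (-1)^(Suc N - m) * esym_subst (Suc N) v (N - m)"
  proof -
    fix m assume "m \<in> {..N}"
    then have m: "m \<le> N" by simp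
    have "coeff ?p m = (-1)^(Suc N - m) * esym (Suc N - m) {..<Suc N} v"
      using m by (subst cp) (simp add: esym_uminus)
    moreover have "esym_subst (Suc N) v (N - m) = esym (Suc N - m) {..<Suc N} v"
      using m unfolding esym_subst_def by (subst if_P) (simp_all add: Suc_diff_le)
    ultimately show "coeff ?p m = (-1)^(Suc N - m) * esym_subst (Suc N) v (N - m)"
      by (simp only:)
  qed
  then have "(\<Sum>m\<le>N. coeff ?p m * v N ^ m) = (\<Sum>m\<le>N. ((-1)^(Suc N - m) * esym_subst (Suc N) v (N - m)) * v N ^ m)"
    by (intro sum.cong) auto
  then show ?thesis unfolding E by (simp only: sum_negf[symmetric] mult_minus_left)
qed

lemma esym_reduced_mult_last_var: "esym_reduced N f \<Longrightarrow> esym_reduced N (\<lambda>v. f v * v N)"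
proof -
  assume "esym_reduced N f"
  then obtain F where F: "\<forall>k. int_poly_fun (F k)" "\<forall>v. f v = (\<Sum>k\<le>N. F k (esym_subst (Suc N) v) * v N ^ k)"
    unfolding esym_reduced_def by blast
  define cc where "cc m w = - ((-1)^(Suc N - m) * w (N - m))" for m and w :: "nat \<Rightarrow> int"
  have cc: "\<And>v. v N ^ Suc N = (\<Sum>m\<le>N. cc m (esym_subst (Suc N) v) * v N ^ m)"
    unfolding cc_def by (rule root_power_reduction)
  define G where "G k w = (if k = 0 then 0 else F (k - 1) w) + F N w * cc k w" for k w
  have isc: "int_poly_fun (\<lambda>w. cc k w)" for k
    unfolding cc_def by (rule int_poly_fun_uminus, rule int_poly_fun_mult, rule int_poly_fun_const, rule int_poly_fun_var)
  have "int_poly_fun (G k)" for k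
  proof (cases "k = 0")
    case True
    then have "G k = (\<lambda>w. 0 + F N w * cc k w)" by (simp add: G_def fun_eq_iff)
    then show ?thesis using F(1) isc by (auto intro!: int_poly_fun_add int_poly_fun_mult)
  next
    case False
    then have "G k = (\<lambda>w. F (k - 1) w + F N w * cc k w)" by (simp add: G_def fun_eq_iff)
    then show ?thesis using F(1) isc by (auto intro!: int_poly_fun_add int_poly_fun_mult)
  qed
  moreover have "f v * v N = (\<Sum>k\<le>N. G k (esym_subst (Suc N) v) * v N ^ k)" for v
  proof -
    let ?w = "esym_subst (Suc N) v"
    have "f v * v N = (\<Sum>k\<le>N. F k ?w * v N ^ k) * v N" using F(2) by simp
    also have "\<dots> = (\<Sum>k\<le>N. F k ?w * v N ^ k * v N)" by (rule sum_distrib_right)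
    also have "\<dots> = (\<Sum>k\<le>N. F k ?w * v N ^ Suc k)"
      by (intro sum.cong) (simp_all add: mult_ac)
    finally have "f v * v N = (\<Sum>k\<le>N. F k ?w * v N ^ Suc k)" .
    also have "\<dots> = (\<Sum>k<N. F k ?w * v N ^ Suc k) + F N ?w * v N ^ Suc N"
      by (simp add: lessThan_Suc_atMost[symmetric])
    also have "(\<Sum>k<N. F k ?w * v N ^ Suc k) = (\<Sum>k\<le>N. (if k = 0 then 0 else F (k - 1) ?w) * v N ^ k)"
      by (subst sum_atMost_shift0) simp
    also have "F N ?w * v N ^ Suc N = (\<Sum>k\<le>N. F N ?w * cc k ?w * v N ^ k)"
      by (subst cc) (simp add: sum_distrib_left mult_ac)
    finally show ?thesis by (simp add: G_def distrib_right sum.distrib)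
  qed
  ultimately show ?thesis unfolding esym_reduced_def by blast
qed

lemma esym_reduced_mult_last_var_power: "esym_reduced N f \<Longrightarrow> esym_reduced N (\<lambda>v. f v * v N ^ m)"
proof (induction m)
  case 0 then show ?case by simp
next
  case (Suc m)
  have "esym_reduced N (\<lambda>v. (f v * v N ^ m) * v N)" by (rule esym_reduced_mult_last_var[OF Suc.IH[OF Suc.prems]])
  then show ?case by (simp add: mult_ac)
qed

lemma esym_reduced_sum: "(\<And>a. a \<in> A \<Longrightarrow> esym_reduced N (f a)) \<Longrightarrow> esym_reduced N (\<lambda>v. \<Sum>a\<in>A. f a v)"
proof (induction A rule: infinite_finite_induct)
  case (infinite A) then show ?case by (simp add: esym_reduced_const)
next
  case empty then show ?case by (simp add: esym_reduced_const)
next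
  case (insert x F) then show ?case by (simp add: esym_reduced_add)
qed

lemma esym_reduced_mult: "esym_reduced N f \<Longrightarrow> esym_reduced N g \<Longrightarrow> esym_reduced N (\<lambda>v. f v * g v)"
proof -
  assume f: "esym_reduced N f" and "esym_reduced N g"
  then obtain G where G: "\<forall>k. int_poly_fun (G k)" "\<forall>v. g v = (\<Sum>k\<le>N. G k (esym_subst (Suc N) v) * v N ^ k)"
    unfolding esym_reduced_def by blast
  have "esym_reduced N (\<lambda>v. \<Sum>k\<le>N. (f v * G k (esym_subst (Suc N) v)) * v N ^ k)"
    by (intro esym_reduced_sum esym_reduced_mult_last_var_power esym_reduced_scale f) (use G in auto)
  then show ?thesis using G(2) by (simp add: sum_distrib_left mult_ac)
qed

lemma esym_reduced_prod: "(\<And>a. a \<in> A \<Longrightarrow> esym_reduced N (f a)) \<Longrightarrow> esym_reduced N (\<lambda>v. \<Prod>a\<in>A. f a v)"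
proof (induction A rule: infinite_finite_induct)
  case (infinite A) then show ?case by (simp add: esym_reduced_const)
next
  case empty then show ?case by (simp add: esym_reduced_const)
next
  case (insert x F) then show ?case by (simp add: esym_reduced_mult)
qed

lemma esym_reduced_power: "esym_reduced N f \<Longrightarrow> esym_reduced N (\<lambda>v. f v ^ m)"
  by (induction m) (auto simp: esym_reduced_const esym_reduced_mult)

lemma esym_reduced_diff: "esym_reduced N f \<Longrightarrow> esym_reduced N g \<Longrightarrow> esym_reduced N (\<lambda>v. f v - g v)"
proof -
  assume "esym_reduced N f" "esym_reduced N g"
  then have "esym_reduced N (\<lambda>v. g v * (\<lambda>_. -1) (esym_subst (Suc N) v))" by (intro esym_reduced_scale) auto
  then have "esym_reduced N (\<lambda>v. f v + g v * (\<lambda>_. -1) (esym_subst (Suc N) v))" using \<open>esym_reduced N f\<close> by (rule esym_reduced_add[rotated])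
  then show ?thesis by simp
qed

lemma esym_reduced_mpeval: "(\<And>j. esym_reduced N (\<lambda>v. w v j)) \<Longrightarrow> esym_reduced N (\<lambda>v. mpeval (w v) P)"
  unfolding mpeval_def mmono_def
  by (intro esym_reduced_sum esym_reduced_mult esym_reduced_prod esym_reduced_power esym_reduced_const)

lemma esym_reduced_last_var: "esym_reduced N (\<lambda>v. v N)"
  using esym_reduced_mult_last_var[OF esym_reduced_const[of N 1]] by simp

lemma esym_reduced_esym: "esym_reduced N (\<lambda>v. esym k {..<N} v)"
proof (induction k)
  case 0 then show ?case by (simp add: esym_0 esym_reduced_const)
next
  case (Suc k)
  have ins: "{..<Suc N} = insert N {..<N}" by auto
  have E: "esym (Suc k) {..<N} v = esym (Suc k) {..<Suc N} v - v N * esym k {..<N} v" for v :: "nat \<Rightarrow> int"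
    unfolding ins by (simp add: esym_insert)
  have 1: "esym_reduced N (\<lambda>v. esym (Suc k) {..<Suc N} v)"
  proof (cases "k < Suc N")
    case True
    then have "\<And>v::nat\<Rightarrow>int. esym (Suc k) {..<Suc N} v = esym_subst (Suc N) v k" by (simp add: esym_subst_def)
    then show ?thesis using esym_reduced_comp_esym_subst_Suc[of "\<lambda>w. w k" N] by simp
  next
    case False
    then have "\<And>v::nat\<Rightarrow>int. esym (Suc k) {..<Suc N} v = 0" by (intro esym_gt) auto
    then show ?thesis by (simp add: esym_reduced_const)
  qed
  have 2: "esym_reduced N (\<lambda>v. esym k {..<N} v * v N)" by (rule esym_reduced_mult_last_var[OF Suc.IH])
  show ?case unfolding E using esym_reduced_diff[OF 1 2] by (simp add: mult_ac)
qed

lemma esym_reduced_esym_subst: "esym_reduced N (\<lambda>v. esym_subst N v j)"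
proof -
  consider "j < N" | "j = N" | "j > N" by linarith
  then show ?thesis
  proof cases
    case 1 then show ?thesis by (simp add: esym_subst_def esym_reduced_esym)
  next
    case 2 then show ?thesis by (simp add: esym_subst_def esym_reduced_last_var)
  next
    case 3
    then have "\<And>v::nat\<Rightarrow>int. esym_subst N v j = esym_subst (Suc N) v j" by (simp add: esym_subst_def)
    then show ?thesis using esym_reduced_comp_esym_subst_Suc[of "\<lambda>w. w j" N] by simp
  qed
qed

lemma esym_subst_0: "esym_subst 0 v = v"
  by (simp add: esym_subst_def fun_eq_iff)

text \<open>The polynomial \<open>\<Sum>k\<le>N. G k (esym_subst (Suc N) v) t\<^sup>k\<close> of degree \<open>\<le> N\<close> takes the value
  \<open>F v\<close> at the \<open>N + 1\<close> distinct points \<open>v 0, \<dots>, v N\<close>, so it is constant.\<close>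

lemma symmetric_esym_reduced_eq_const_coeff:
  fixes F :: "(nat \<Rightarrow> 'a::idom) \<Rightarrow> 'a"
  assumes sym: "symmetric_fun (Suc N) F"
    and F: "\<And>v. F v = (\<Sum>k\<le>N. G k (esym_subst (Suc N) v) * v N ^ k)"
    and inj: "inj_on v {..<Suc N}"
  shows "F v = G 0 (esym_subst (Suc N) v)"
proof -
  let ?w = "esym_subst (Suc N) v"
  let ?p = "\<Sum>k\<le>N. monom (G k ?w) k"
  have "poly ?p x = poly [:F v:] x" if "x \<in> v ` {..<Suc N}" for x
  proof -
    obtain i where i: "i < Suc N" "x = v i" using \<open>x \<in> v ` {..<Suc N}\<close> by auto
    have "F v = F (\<lambda>k. v (transpose i N k))"
      using sym i unfolding symmetric_fun_def by auto
    also have "\<dots> = (\<Sum>k\<le>N. G k ?w * v i ^ k)"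
      using i by (simp add: F esym_subst_transpose)
    finally show ?thesis using i by (simp add: poly_sum poly_monom)
  qed
  moreover have "degree ?p \<le> N"
    by (intro degree_sum_le) (auto intro: order.trans[OF degree_monom_le])
  ultimately have "?p = [:F v:]"
    by (intro poly_eqI_degree[where A = "v ` {..<Suc N}"]) (auto simp: card_image[OF inj])
  then have "coeff ?p 0 = F v" by simp
  then show ?thesis by (simp add: coeff_sum coeff_monom)
qed

theorem symmetric_int_poly_fun_esym:
  assumes "int_poly_fun F" "symmetric_fun N F"
  shows "\<exists>G. int_poly_fun G \<and> (\<forall>v. F v = G (esym_subst N v))"
  using assms
proof (induction N arbitrary: F)
  case 0
  then show ?case by (intro exI[of _ F]) (simp add: esym_subst_0)
next
  case (Suc N)
  have "symmetric_fun N F" using Suc.prems(2) unfolding symmetric_fun_def by auto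
  then obtain G1 where G1: "int_poly_fun G1" "\<And>v. F v = G1 (esym_subst N v)"
    using Suc.IH Suc.prems(1) by blast
  obtain P1 where P1: "\<And>v. G1 v = mpeval v P1" using G1(1) unfolding int_poly_fun_def by blast
  have "esym_reduced N (\<lambda>v. mpeval (esym_subst N v) P1)"
    by (rule esym_reduced_mpeval[OF esym_reduced_esym_subst])
  moreover have "F = (\<lambda>v. mpeval (esym_subst N v) P1)" using G1(2) P1 by (simp add: fun_eq_iff)
  ultimately have "esym_reduced N F" by simp
  then obtain G where G: "\<forall>k. int_poly_fun (G k)" "\<forall>v. F v = (\<Sum>k\<le>N. G k (esym_subst (Suc N) v) * v N ^ k)"
    unfolding esym_reduced_def by blast
  have diff: "int_poly_fun (\<lambda>v. F v - G 0 (esym_subst (Suc N) v))"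
    using Suc.prems(1) G(1) by (intro int_poly_fun_diff int_poly_fun_comp_esym_subst) auto
  have inj_case: "F v = G 0 (esym_subst (Suc N) v)" if "inj_on v {..<Suc N}" for v
    by (rule symmetric_esym_reduced_eq_const_coeff[OF Suc.prems(2) _ that]) (use G(2) in blast)
  have "F v - G 0 (esym_subst (Suc N) v) = 0" for v
    by (rule poly_fun_zero_from_inj[OF int_poly_fun_poly_fun[OF diff], of "Suc N"]) (simp add: inj_case)
  then show ?case using G(1) by (intro exI[of _ "G 0"]) auto
qed

lemma ex_int_fun_of_Ints: "(\<And>i. v i \<in> \<int>) \<Longrightarrow> \<exists>f. v = (\<lambda>i. of_int (f i))"
  by (rule exI[of _ "\<lambda>i. SOME n. v i = of_int n"]) (metis (mono_tags) Ints_cases someI_ex)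

lemma poly_fun_esym_subst: "poly_fun (\<lambda>z. esym_subst N (v(k := z)) j)"
proof (cases "j < N")
  case True
  then show ?thesis unfolding esym_subst_def by (simp add: poly_fun_esym[OF poly_fun_upd])
next
  case False
  then show ?thesis unfolding esym_subst_def by (simp add: poly_fun_upd[of v k j, simplified])
qed

lemma esym_subst_surj_complex: "\<exists>v. esym_subst N v = (w :: nat \<Rightarrow> complex)"
proof -
  obtain \<xi> :: "nat \<Rightarrow> complex" where \<xi>: "\<forall>j. 1 \<le> j \<longrightarrow> j \<le> N \<longrightarrow> esym j {..<N} \<xi> = w (j - 1)"
    using esym_surj_complex[of N "\<lambda>j. w (j - 1)"] by blast
  define v where "v i = (if i < N then \<xi> i else w i)" for i
  have "esym_subst N v j = w j" for j
  proof (cases "j < N")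
    case True
    have "esym (Suc j) {..<N} v = esym (Suc j) {..<N} \<xi>" by (rule esym_cong) (simp add: v_def)
    then show ?thesis using True \<xi> by (simp add: esym_subst_def)
  qed (simp add: esym_subst_def v_def)
  then show ?thesis by blast
qed

text \<open>Algebraic independence of the elementary symmetric functions, proved over \<open>\<complex>\<close>,
  where \<open>esym_subst N\<close> is onto.\<close>

lemma esym_subst_zero_imp_zero:
  assumes H: "int_poly_fun H" and Z: "\<And>v. H (esym_subst N v) = 0"
  shows "H w = 0"
proof -
  obtain Q where Q: "\<And>v. H v = mpeval v Q" using H unfolding int_poly_fun_def by blast
  define Hc where "Hc v = mpeval (esym_subst N v) Q" for v :: "nat \<Rightarrow> complex"
  have int_case: "Hc v = 0" if ints: "\<And>i. v i \<in> \<int>" for v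
  proof -
    obtain f where f: "v = (\<lambda>i. of_int (f i))"
      using ex_int_fun_of_Ints[of v] ints by blast
    have "esym_subst N v = (\<lambda>j. of_int (esym_subst N f j))"
      unfolding f by (rule ext) (rule esym_subst_hom[OF is_ring_hom_of_int_fun])
    then have "Hc v = of_int (mpeval (esym_subst N f) Q)"
      unfolding Hc_def by (simp add: mpeval_hom[OF is_ring_hom_of_int_fun])
    then show ?thesis using Z Q by simp
  qed
  have "poly_fun (\<lambda>z. Hc (v(k := z)))" for v k
    unfolding Hc_def by (rule poly_fun_mpeval) (rule poly_fun_esym_subst)
  then have Hc: "Hc v = 0" if "\<And>i. i \<ge> N \<Longrightarrow> v i \<in> \<int>" for v
    by (rule poly_fun_zero_from_Ints[OF _ int_case that])
  obtain v where v: "esym_subst N v = (\<lambda>j. of_int (w j) :: complex)"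
    using esym_subst_surj_complex by blast
  moreover have "v i \<in> \<int>" if "i \<ge> N" for i
    using fun_cong[OF v, of i] that by (simp add: esym_subst_def)
  ultimately have "mpeval (\<lambda>j. of_int (w j) :: complex) Q = 0" using Hc[of v] by (simp add: Hc_def)
  then have "(of_int (mpeval w Q) :: complex) = 0" by (simp add: mpeval_hom[OF is_ring_hom_of_int_fun])
  then show ?thesis using Q by simp
qed

definition esym_subst2 :: "nat \<Rightarrow> (nat \<Rightarrow> 'a::comm_ring_1) \<Rightarrow> nat \<Rightarrow> 'a" where
  "esym_subst2 n v j = (if j < n then esym (Suc j) {..<n} v
     else if j < 2 * n then esym (Suc (j - n)) {..<n} (\<lambda>i. v (n + i)) else v j)"

lemma symmetric_second_block:
  assumes G1: "int_poly_fun G1" and F: "\<And>v. F v = G1 (esym_subst n v)"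
    and sym2: "\<And>v. F (\<lambda>k. v (transpose (n + a) (n + b) k)) = F v"
  shows "G1 (\<lambda>k. u (transpose (n + a) (n + b) k)) = G1 u"
proof -
  let ?t = "transpose (n + a) (n + b)"
  have "esym_subst n (\<lambda>k. v (?t k)) = (\<lambda>k. esym_subst n v (?t k))" for v :: "nat \<Rightarrow> int"
  proof
    fix k show "esym_subst n (\<lambda>k. v (?t k)) k = esym_subst n v (?t k)"
    proof (cases "k < n")
      case True
      have "esym (Suc k) {..<n} (\<lambda>k. v (?t k)) = esym (Suc k) {..<n} v"
        by (rule esym_cong) (simp add: transpose_def)
      then show ?thesis using True by (simp add: esym_subst_def transpose_def)
    qed (simp add: esym_subst_def transpose_def)
  qed
  then have "G1 (\<lambda>k. esym_subst n v (?t k)) - G1 (esym_subst n v) = 0" for v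
    using sym2[of v] by (simp add: F)
  then have "G1 (\<lambda>k. u (?t k)) - G1 u = 0"
    by (rule esym_subst_zero_imp_zero[OF int_poly_fun_diff[OF int_poly_fun_comp_map[OF G1] G1]])
  then show ?thesis by simp
qed

text \<open>Symmetry in two blocks of \<open>n\<close> variables: apply the fundamental theorem to the first block,
  then, after swapping the blocks by \<open>\<pi>\<close>, to the second.\<close>

lemma symmetric_two_blocks_esym:
  assumes F: "int_poly_fun F" and sym1: "symmetric_fun n F"
    and sym2: "\<And>a b v. a < n \<Longrightarrow> b < n \<Longrightarrow> F (\<lambda>k. v (transpose (n + a) (n + b) k)) = F v"
  shows "\<exists>G. int_poly_fun G \<and> (\<forall>v. F v = G (esym_subst2 n v))"
proof -
  obtain G1 where G1: "int_poly_fun G1" "\<And>v. F v = G1 (esym_subst n v)"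
    using symmetric_int_poly_fun_esym[OF F sym1] by blast
  define \<pi> where "\<pi> k = (if k < n then n + k else if k < 2 * n then k - n else k)" for k
  have \<pi>\<pi>: "\<pi> (\<pi> k) = k" for k by (auto simp: \<pi>_def)
  define G2 where "G2 u = G1 (\<lambda>k. u (\<pi> k))" for u
  have G2: "int_poly_fun G2"
    unfolding G2_def by (rule int_poly_fun_comp_map[OF G1(1)])
  have "symmetric_fun n G2" unfolding symmetric_fun_def
  proof (intro allI impI)
    fix a b u assume ab: "a < n" "b < n"
    have "transpose a b (\<pi> k) = \<pi> (transpose (n + a) (n + b) k)" for k
      using ab by (auto simp: transpose_def \<pi>_def)
    then show "G2 (\<lambda>k. u (transpose a b k)) = G2 u"
      unfolding G2_def using symmetric_second_block[OF G1 sym2[OF ab]] by simp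
  qed
  then obtain G3 where G3: "int_poly_fun G3" "\<And>u. G2 u = G3 (esym_subst n u)"
    using symmetric_int_poly_fun_esym[OF G2] by blast
  have "esym_subst n (\<lambda>k. esym_subst n v (\<pi> k)) = (\<lambda>k. esym_subst2 n v (\<pi> k))" for v :: "nat \<Rightarrow> int"
  proof
    fix k show "esym_subst n (\<lambda>k. esym_subst n v (\<pi> k)) k = esym_subst2 n v (\<pi> k)"
    proof (cases "k < n")
      case True
      have "esym (Suc k) {..<n} (\<lambda>k. esym_subst n v (\<pi> k)) = esym (Suc k) {..<n} (\<lambda>i. v (n + i))"
        by (rule esym_cong) (simp add: \<pi>_def esym_subst_def)
      then show ?thesis using True by (simp add: esym_subst_def esym_subst2_def \<pi>_def)
    qed (auto simp: esym_subst_def esym_subst2_def \<pi>_def)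
  qed
  then have "F v = G3 (\<lambda>k. esym_subst2 n v (\<pi> k))" for v
    using G1(2) G3(2)[of "\<lambda>k. esym_subst n v (\<pi> k)"] by (simp add: G2_def \<pi>\<pi>)
  then show ?thesis
    using int_poly_fun_comp_map[OF G3(1)] by blast
qed

section \<open>The universal polynomials\<close>

definition esym_pairs :: "nat \<Rightarrow> (nat \<Rightarrow> int) \<Rightarrow> int" where
  "esym_pairs n v = esym n ({..<n} \<times> {..<n}) (\<lambda>(i,j). v i * v (n + j))"

lemma int_poly_fun_esym_pairs: "int_poly_fun (esym_pairs n)"
  unfolding esym_pairs_def[abs_def]
proof (rule int_poly_fun_esym)
  fix x :: "nat \<times> nat"
  show "int_poly_fun (\<lambda>v. case x of (i, j) \<Rightarrow> v i * v (n + j))" by (cases x) auto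
qed

lemma symmetric_fun_esym_pairs: "symmetric_fun n (esym_pairs n)"
  unfolding symmetric_fun_def
proof (intro allI impI)
  fix a b v assume ab: "a < n" "b < n"
  let ?I = "{..<n}" and ?f = "\<lambda>(i::nat, j::nat). (transpose a b i, j)"
  have "bij_betw ?f (?I \<times> ?I) (?I \<times> ?I)"
    by (rule bij_betw_byWitness[of _ ?f]) (use ab in \<open>auto simp: transpose_def\<close>)
  then have "esym_pairs n v = esym n (?I \<times> ?I) (\<lambda>x. (\<lambda>(i,j). v i * v (n + j)) (?f x))"
    unfolding esym_pairs_def by (rule esym_reindex)
  also have "\<dots> = esym_pairs n (\<lambda>k. v (transpose a b k))"
    unfolding esym_pairs_def by (rule esym_cong) (use ab in \<open>auto simp: transpose_def\<close>)
  finally show "esym_pairs n (\<lambda>k. v (transpose a b k)) = esym_pairs n v" by simp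
qed

lemma esym_pairs_transpose_second_block:
  assumes ab: "a < n" "b < n"
  shows "esym_pairs n (\<lambda>k. v (transpose (n + a) (n + b) k)) = esym_pairs n v"
proof -
  let ?I = "{..<n}" and ?f = "\<lambda>(i::nat, j::nat). (i, transpose a b j)"
  have "bij_betw ?f (?I \<times> ?I) (?I \<times> ?I)"
    by (rule bij_betw_byWitness[of _ ?f]) (use ab in \<open>auto simp: transpose_def\<close>)
  then have "esym_pairs n v = esym n (?I \<times> ?I) (\<lambda>x. (\<lambda>(i,j). v i * v (n + j)) (?f x))"
    unfolding esym_pairs_def by (rule esym_reindex)
  also have "\<dots> = esym_pairs n (\<lambda>k. v (transpose (n + a) (n + b) k))"
    unfolding esym_pairs_def by (rule esym_cong) (use ab in \<open>auto simp: transpose_def\<close>)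
  finally show ?thesis by simp
qed

lemma Pmul_exists:
  "\<exists>P. \<forall>\<xi> \<eta> :: nat \<Rightarrow> int.
      mpeval (\<lambda>j. if j < n then of_int (esymS (j+1) {..<n} \<xi>)
                  else if j < 2*n then of_int (esymS (j-n+1) {..<n} \<eta>) else 0) P
      = esymS n ({..<n} \<times> {..<n}) (\<lambda>(i,j). \<xi> i * \<eta> j)"
proof -
  let ?I = "{..<n}"
  obtain G where G: "int_poly_fun G" "\<And>v. esym_pairs n v = G (esym_subst2 n v)"
    using symmetric_two_blocks_esym[OF int_poly_fun_esym_pairs symmetric_fun_esym_pairs
        esym_pairs_transpose_second_block] by blast
  then obtain P where P: "\<And>y. G y = mpeval y P" unfolding int_poly_fun_def by blast
  show ?thesis
  proof (intro exI allI)
    fix \<xi> \<eta> :: "nat \<Rightarrow> int"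
    define v where "v k = (if k < n then \<xi> k else if k < 2*n then \<eta> (k - n) else 0)" for k
    have "esym_pairs n v = esymS n (?I \<times> ?I) (\<lambda>(i,j). \<xi> i * \<eta> j)"
      unfolding esym_pairs_def esymS_esym by (rule esym_cong) (auto simp: v_def)
    moreover have "esym_subst2 n v = (\<lambda>j. if j < n then of_int (esymS (j+1) ?I \<xi>)
                  else if j < 2*n then of_int (esymS (j-n+1) ?I \<eta>) else 0)"
    proof
      fix j
      have "esym k ?I v = esym k ?I \<xi>" for k
        by (rule esym_cong) (simp add: v_def)
      moreover have "esym k ?I (\<lambda>i. v (n + i)) = esym k ?I \<eta>" for k
        by (rule esym_cong) (simp add: v_def)
      ultimately show "esym_subst2 n v j = (if j < n then of_int (esymS (j+1) ?I \<xi>)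
                  else if j < 2*n then of_int (esymS (j-n+1) ?I \<eta>) else 0)"
        by (simp add: esym_subst2_def esymS_esym v_def)
    qed
    ultimately show "mpeval (\<lambda>j. if j < n then of_int (esymS (j+1) ?I \<xi>)
                  else if j < 2*n then of_int (esymS (j-n+1) ?I \<eta>) else 0) P
      = esymS n (?I \<times> ?I) (\<lambda>(i,j). \<xi> i * \<eta> j)"
      using G(2) P by metis
  qed
qed

lemma Pcomp_exists:
  "\<exists>P. \<forall>\<xi> :: nat \<Rightarrow> int.
      mpeval (\<lambda>j. if j < m*n then of_int (esymS (j+1) {..<m*n} \<xi>) else 0) P
      = esymS m {S. S \<subseteq> {..<m*n} \<and> card S = n} (\<lambda>S. \<Prod>i\<in>S. \<xi> i)"
proof -
  let ?N = "m * n"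
  let ?S = "{S. S \<subseteq> {..<?N} \<and> card S = n}"
  define F where "F v = esym m ?S (\<lambda>S. \<Prod>i\<in>S. v i)" for v :: "nat \<Rightarrow> int"
  have isF: "int_poly_fun F" unfolding F_def by (intro int_poly_fun_esym int_poly_fun_prod) auto
  have symF: "symmetric_fun ?N F" unfolding symmetric_fun_def
  proof (intro allI impI)
    fix a b v assume ab: "a < ?N" "b < ?N"
    have tb: "bij_betw (transpose a b) {..<?N} {..<?N}" using ab by simp
    have "transpose a b ` S \<in> ?S" if S: "S \<in> ?S" for S
    proof -
      have "card (transpose a b ` S) = n" using S by (simp add: card_image)
      moreover have "transpose a b ` S \<subseteq> {..<?N}" using S tb by (auto simp: bij_betw_def)
      ultimately show ?thesis by simp
    qed
    then have bij: "bij_betw (\<lambda>S. transpose a b ` S) ?S ?S"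
      by (intro bij_betw_byWitness[where f' = "\<lambda>S. transpose a b ` S"]) (auto simp: image_image)
    have "F v = esym m ?S (\<lambda>S. (\<lambda>T. \<Prod>i\<in>T. v i) (transpose a b ` S))"
      unfolding F_def by (rule esym_reindex[OF bij])
    also have "\<dots> = F (\<lambda>k. v (transpose a b k))"
      unfolding F_def
    proof (rule esym_cong)
      fix S assume "S \<in> ?S"
      have "inj_on (transpose a b) S" by (auto simp: inj_on_def transpose_def split: if_splits)
      then show "(\<Prod>i\<in>transpose a b ` S. v i) = (\<Prod>i\<in>S. v (transpose a b i))" by (simp add: prod.reindex)
    qed
    finally show "F (\<lambda>k. v (transpose a b k)) = F v" by simp
  qed
  obtain G where G: "int_poly_fun G" "\<And>v. F v = G (esym_subst ?N v)" using symmetric_int_poly_fun_esym[OF isF symF] by blast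
  then obtain P where P: "\<And>y. G y = mpeval y P" unfolding int_poly_fun_def by blast
  show ?thesis
  proof (intro exI allI)
    fix \<xi> :: "nat \<Rightarrow> int"
    define v where "v k = (if k < ?N then \<xi> k else 0)" for k
    have Fv: "F v = esymS m ?S (\<lambda>S. \<Prod>i\<in>S. \<xi> i)"
      unfolding F_def esymS_esym
      by (rule esym_cong) (auto simp: v_def intro!: prod.cong)
    have "esym_subst ?N v = (\<lambda>j. if j < ?N then of_int (esymS (j+1) {..<?N} \<xi>) else 0)"
    proof
      fix j show "esym_subst ?N v j = (if j < ?N then of_int (esymS (j+1) {..<?N} \<xi>) else 0)"
      proof (cases "j < ?N")
        case True
        have "esym (Suc j) {..<?N} v = esym (Suc j) {..<?N} \<xi>" by (rule esym_cong) (simp add: v_def)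
        then show ?thesis using True by (simp add: esym_subst_def esymS_esym)
      next
        case False then show ?thesis by (simp add: esym_subst_def v_def)
      qed
    qed
    then show "mpeval (\<lambda>j. if j < ?N then of_int (esymS (j+1) {..<?N} \<xi>) else 0) P
      = esymS m ?S (\<lambda>S. \<Prod>i\<in>S. \<xi> i)"
      using Fv G(2) P by metis
  qed
qed

lemma Pmul_spec:
  "mpeval (\<lambda>j. if j < n then of_int (esymS (j+1) {..<n} \<xi>)
                  else if j < 2*n then of_int (esymS (j-n+1) {..<n} \<eta>) else 0) (Pmul n)
      = esymS n ({..<n} \<times> {..<n}) (\<lambda>(i,j). \<xi> i * \<eta> j)"
  using someI_ex[OF Pmul_exists[of n]] unfolding Pmul_def by blast

lemma Pcomp_spec:
  "mpeval (\<lambda>j. if j < m*n then of_int (esymS (j+1) {..<m*n} \<xi>) else 0) (Pcomp m n)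
      = esymS m {S. S \<subseteq> {..<m*n} \<and> card S = n} (\<lambda>S. \<Prod>i\<in>S. \<xi> i)"
  using someI_ex[OF Pcomp_exists[of m n]] unfolding Pcomp_def by blast

definition Pmul_args :: "nat \<Rightarrow> (nat \<Rightarrow> 'a) \<Rightarrow> (nat \<Rightarrow> 'a) \<Rightarrow> nat \<Rightarrow> 'a::zero" where
  "Pmul_args n u v j = (if j < n then u (j+1) else if j < 2*n then v (j-n+1) else 0)"

definition Pcomp_args :: "nat \<Rightarrow> (nat \<Rightarrow> 'a) \<Rightarrow> nat \<Rightarrow> 'a::zero" where
  "Pcomp_args N u j = (if j < N then u (j+1) else 0)"

lemma Pmul_args_hom: "is_ring_hom h \<Longrightarrow> (\<lambda>j. h (Pmul_args n u v j)) = Pmul_args n (\<lambda>i. h (u i)) (\<lambda>i. h (v i))"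
  by (rule ext) (simp add: Pmul_args_def ring_hom_zero)

lemma Pcomp_args_hom: "is_ring_hom h \<Longrightarrow> (\<lambda>j. h (Pcomp_args N u j)) = Pcomp_args N (\<lambda>i. h (u i))"
  by (rule ext) (simp add: Pcomp_args_def ring_hom_zero)

lemma poly_fun_if_id: "poly_fun (\<lambda>z. if b then z else c)"
  by (cases b) auto

lemma Pmul_esym_complex:
  fixes \<xi> \<eta> :: "nat \<Rightarrow> complex"
  shows "mpeval (Pmul_args n (\<lambda>j. esym j {..<n} \<xi>) (\<lambda>j. esym j {..<n} \<eta>)) (Pmul n)
       = esym n ({..<n} \<times> {..<n}) (\<lambda>(i,j). \<xi> i * \<eta> j)"
proof -
  let ?I = "{..<n}"
  define H where "H w = mpeval (Pmul_args n (\<lambda>j. esym j ?I w) (\<lambda>j. esym j ?I (\<lambda>i. w (n + i)))) (Pmul n)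
      - esym n (?I \<times> ?I) (\<lambda>(i,j). w i * w (n + j))" for w :: "nat \<Rightarrow> complex"
  have P: "poly_fun (\<lambda>z. H (w(k := z)))" for w k
    unfolding H_def
  proof (rule poly_fun_diff)
    show "poly_fun (\<lambda>z. mpeval (Pmul_args n (\<lambda>j. esym j ?I (w(k := z))) (\<lambda>j. esym j ?I (\<lambda>i. (w(k := z)) (n + i)))) (Pmul n))"
    proof (rule poly_fun_mpeval)
      fix j
      show "poly_fun (\<lambda>z. Pmul_args n (\<lambda>j. esym j ?I (w(k := z))) (\<lambda>j. esym j ?I (\<lambda>i. (w(k := z)) (n + i))) j)"
        unfolding Pmul_args_def
        by (cases "j < n"; cases "j < 2 * n") (auto intro!: poly_fun_esym poly_fun_upd poly_fun_if_id)
    qed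
    show "poly_fun (\<lambda>z. esym n (?I \<times> ?I) (\<lambda>(i, j). (w(k := z)) i * (w(k := z)) (n + j)))"
    proof (rule poly_fun_esym)
      fix x :: "nat \<times> nat"
      show "poly_fun (\<lambda>z. case x of (i, j) \<Rightarrow> (w(k := z)) i * (w(k := z)) (n + j))"
        by (cases x) (auto intro!: poly_fun_mult poly_fun_upd poly_fun_if_id)
    qed
  qed
  have I: "H w = 0" if "\<And>i. w i \<in> \<int>" for w
  proof -
    have "\<exists>f. w = (\<lambda>i. of_int (f i))" by (rule ex_int_fun_of_Ints) (rule that)
    then obtain f where f: "w = (\<lambda>i. of_int (f i))" by blast
    have spec: "mpeval (\<lambda>j. if j < n then of_int (esymS (j+1) ?I f)
                  else if j < 2*n then of_int (esymS (j-n+1) ?I (\<lambda>i. f (n + i))) else 0) (Pmul n)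
      = esymS n (?I \<times> ?I) (\<lambda>(i,j). f i * f (n + j))"
      by (rule Pmul_spec)
    have "Pmul_args n (\<lambda>j. esym j ?I w) (\<lambda>j. esym j ?I (\<lambda>i. w (n + i))) =
          (\<lambda>j. of_int (if j < n then of_int (esymS (j+1) ?I f)
                  else if j < 2*n then of_int (esymS (j-n+1) ?I (\<lambda>i. f (n + i))) else 0))"
      by (rule ext) (simp add: Pmul_args_def f esymS_esym esym_hom[OF is_ring_hom_of_int_fun])
    then have "mpeval (Pmul_args n (\<lambda>j. esym j ?I w) (\<lambda>j. esym j ?I (\<lambda>i. w (n + i)))) (Pmul n)
        = of_int (esymS n (?I \<times> ?I) (\<lambda>(i,j). f i * f (n + j)))"
      using spec by (simp add: mpeval_hom[OF is_ring_hom_of_int_fun, symmetric])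
    moreover have "esym n (?I \<times> ?I) (\<lambda>(i,j). w i * w (n + j)) = of_int (esymS n (?I \<times> ?I) (\<lambda>(i,j). f i * f (n + j)))"
      unfolding esymS_esym f esym_hom[OF is_ring_hom_of_int_fun]
      by (rule esym_cong) auto
    ultimately show ?thesis by (simp add: H_def)
  qed
  define w where "w k = (if k < n then \<xi> k else if k < 2*n then \<eta> (k - n) else 0)" for k
  have "H w = 0" by (rule poly_fun_zero_from_Ints[OF P I, of "2*n"]) (auto simp: w_def)
  moreover have "(\<lambda>j. esym j ?I w) = (\<lambda>j. esym j ?I \<xi>)"
    by (rule ext, rule esym_cong) (simp add: w_def)
  moreover have "(\<lambda>j. esym j ?I (\<lambda>i. w (n + i))) = (\<lambda>j. esym j ?I \<eta>)"
    by (rule ext, rule esym_cong) (simp add: w_def)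
  moreover have "esym n (?I \<times> ?I) (\<lambda>(i,j). w i * w (n + j)) = esym n (?I \<times> ?I) (\<lambda>(i,j). \<xi> i * \<eta> j)"
    by (rule esym_cong) (auto simp: w_def)
  ultimately show ?thesis by (simp add: H_def)
qed

lemma Pcomp_esym_complex:
  fixes \<xi> :: "nat \<Rightarrow> complex"
  shows "mpeval (Pcomp_args (m*n) (\<lambda>j. esym j {..<m*n} \<xi>)) (Pcomp m n)
       = esym m {S. S \<subseteq> {..<m*n} \<and> card S = n} (\<lambda>S. \<Prod>i\<in>S. \<xi> i)"
proof -
  let ?N = "m * n"
  let ?S = "{S. S \<subseteq> {..<?N} \<and> card S = n}"
  define H where "H w = mpeval (Pcomp_args ?N (\<lambda>j. esym j {..<?N} w)) (Pcomp m n)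
      - esym m ?S (\<lambda>S. \<Prod>i\<in>S. w i)" for w :: "nat \<Rightarrow> complex"
  have P: "poly_fun (\<lambda>z. H (w(k := z)))" for w k
    unfolding H_def
  proof (rule poly_fun_diff)
    show "poly_fun (\<lambda>z. mpeval (Pcomp_args ?N (\<lambda>j. esym j {..<?N} (w(k := z)))) (Pcomp m n))"
    proof (rule poly_fun_mpeval)
      fix j
      show "poly_fun (\<lambda>z. Pcomp_args ?N (\<lambda>j. esym j {..<?N} (w(k := z))) j)"
        unfolding Pcomp_args_def by (cases "j < ?N") (auto intro!: poly_fun_esym poly_fun_upd)
    qed
    show "poly_fun (\<lambda>z. esym m ?S (\<lambda>S. \<Prod>i\<in>S. (w(k := z)) i))"
      by (intro poly_fun_esym poly_fun_prod poly_fun_upd)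
  qed
  have I: "H w = 0" if "\<And>i. w i \<in> \<int>" for w
  proof -
    have "\<exists>f. w = (\<lambda>i. of_int (f i))" by (rule ex_int_fun_of_Ints) (rule that)
    then obtain f where f: "w = (\<lambda>i. of_int (f i))" by blast
    have spec: "mpeval (\<lambda>j. if j < ?N then of_int (esymS (j+1) {..<?N} f) else 0) (Pcomp m n)
      = esymS m ?S (\<lambda>S. \<Prod>i\<in>S. f i)"
      by (rule Pcomp_spec)
    have "Pcomp_args ?N (\<lambda>j. esym j {..<?N} w) = (\<lambda>j. of_int (if j < ?N then of_int (esymS (j+1) {..<?N} f) else 0))"
      by (rule ext) (simp add: Pcomp_args_def f esymS_esym esym_hom[OF is_ring_hom_of_int_fun])
    then have "mpeval (Pcomp_args ?N (\<lambda>j. esym j {..<?N} w)) (Pcomp m n) = of_int (esymS m ?S (\<lambda>S. \<Prod>i\<in>S. f i))"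
      using spec by (simp add: mpeval_hom[OF is_ring_hom_of_int_fun, symmetric])
    moreover have "esym m ?S (\<lambda>S. \<Prod>i\<in>S. w i) = of_int (esymS m ?S (\<lambda>S. \<Prod>i\<in>S. f i))"
      unfolding esymS_esym f esym_hom[OF is_ring_hom_of_int_fun]
      by (rule esym_cong) (simp add: ring_hom_prod[OF is_ring_hom_of_int_fun])
    ultimately show ?thesis by (simp add: H_def)
  qed
  define w where "w k = (if k < ?N then \<xi> k else 0)" for k
  have "H w = 0" by (rule poly_fun_zero_from_Ints[OF P I, of ?N]) (auto simp: w_def)
  moreover have "(\<lambda>j. esym j {..<?N} w) = (\<lambda>j. esym j {..<?N} \<xi>)"
    by (rule ext, rule esym_cong) (simp add: w_def)
  moreover have "esym m ?S (\<lambda>S. \<Prod>i\<in>S. w i) = esym m ?S (\<lambda>S. \<Prod>i\<in>S. \<xi> i)"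
    by (rule esym_cong) (auto simp: w_def intro!: prod.cong)
  ultimately show ?thesis by (simp add: H_def)
qed

definition inv_nat_complex :: "nat \<Rightarrow> complex" where "inv_nat_complex k = inverse (of_nat k)"

lemma inverts_nat_inv_nat_complex: "inverts_nat inv_nat_complex"
  by (simp add: inverts_nat_def inv_nat_complex_def)

lemma Pmul_newton_complex:
  fixes u v :: "nat \<Rightarrow> complex"
  shows "mpeval (Pmul_args n u v) (Pmul n) = lam_seq inv_nat_complex (\<lambda>k. psi_seq u k * psi_seq v k) n"
proof -
  let ?I = "{..<n}"
  from esym_surj_complex[of n u] obtain \<xi> :: "nat \<Rightarrow> complex" where \<xi>: "\<forall>j. 1 \<le> j \<longrightarrow> j \<le> n \<longrightarrow> esym j ?I \<xi> = u j" ..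
  from esym_surj_complex[of n v] obtain \<eta> :: "nat \<Rightarrow> complex" where \<eta>: "\<forall>j. 1 \<le> j \<longrightarrow> j \<le> n \<longrightarrow> esym j ?I \<eta> = v j" ..
  have "Pmul_args n u v = Pmul_args n (\<lambda>j. esym j ?I \<xi>) (\<lambda>j. esym j ?I \<eta>)"
    by (rule ext) (simp add: Pmul_args_def \<xi> \<eta>)
  then have L: "mpeval (Pmul_args n u v) (Pmul n) = esym n (?I \<times> ?I) (\<lambda>(i,j). \<xi> i * \<eta> j)"
    by (simp add: Pmul_esym_complex)
  have "lam_seq inv_nat_complex (\<lambda>k. psi_seq u k * psi_seq v k) n = lam_seq inv_nat_complex (\<lambda>k. \<Sum>x\<in>?I \<times> ?I. (case x of (i, j) \<Rightarrow> \<xi> i * \<eta> j) ^ k) n"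
  proof (rule lam_seq_cong)
    fix k assume k: "1 \<le> k" "k \<le> n"
    have "psi_seq u k = psi_seq (\<lambda>j. esym j ?I \<xi>) k" by (rule psi_seq_cong) (use k \<xi> in auto)
    also have "\<dots> = (\<Sum>a\<in>?I. \<xi> a ^ k)" using k by (simp add: psi_seq_esym)
    finally have 1: "psi_seq u k = (\<Sum>a\<in>?I. \<xi> a ^ k)" .
    have "psi_seq v k = psi_seq (\<lambda>j. esym j ?I \<eta>) k" by (rule psi_seq_cong) (use k \<eta> in auto)
    also have "\<dots> = (\<Sum>a\<in>?I. \<eta> a ^ k)" using k by (simp add: psi_seq_esym)
    finally have 2: "psi_seq v k = (\<Sum>a\<in>?I. \<eta> a ^ k)" .
    show "psi_seq u k * psi_seq v k = (\<Sum>x\<in>?I \<times> ?I. (case x of (i, j) \<Rightarrow> \<xi> i * \<eta> j) ^ k)"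
      unfolding 1 2 sum_product sum.cartesian_product by (simp add: power_mult_distrib split_def)
  qed
  also have "\<dots> = esym n (?I \<times> ?I) (\<lambda>(i,j). \<xi> i * \<eta> j)"
    by (rule lam_seq_esym[OF inverts_nat_inv_nat_complex]) simp
  finally show ?thesis using L by simp
qed

lemma Pcomp_newton_complex:
  fixes u :: "nat \<Rightarrow> complex"
  shows "mpeval (Pcomp_args (m*n) u) (Pcomp m n) = lam_seq inv_nat_complex (\<lambda>j. lam_seq inv_nat_complex (\<lambda>k. psi_seq u (j*k)) n) m"
proof -
  let ?N = "m * n"
  let ?S = "{S. S \<subseteq> {..<?N} \<and> card S = n}"
  from esym_surj_complex[of ?N u] obtain \<xi> :: "nat \<Rightarrow> complex" where \<xi>: "\<forall>j. 1 \<le> j \<longrightarrow> j \<le> ?N \<longrightarrow> esym j {..<?N} \<xi> = u j" ..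
  have "Pcomp_args ?N u = Pcomp_args ?N (\<lambda>j. esym j {..<?N} \<xi>)"
    by (rule ext) (simp add: Pcomp_args_def \<xi>)
  then have L: "mpeval (Pcomp_args ?N u) (Pcomp m n) = esym m ?S (\<lambda>S. \<Prod>i\<in>S. \<xi> i)"
    by (simp add: Pcomp_esym_complex)
  have "lam_seq inv_nat_complex (\<lambda>j. lam_seq inv_nat_complex (\<lambda>k. psi_seq u (j*k)) n) m = lam_seq inv_nat_complex (\<lambda>j. \<Sum>S\<in>?S. (\<Prod>i\<in>S. \<xi> i) ^ j) m"
  proof (rule lam_seq_cong)
    fix j assume j: "1 \<le> j" "j \<le> m"
    have "lam_seq inv_nat_complex (\<lambda>k. psi_seq u (j*k)) n = lam_seq inv_nat_complex (\<lambda>k. \<Sum>i\<in>{..<?N}. (\<xi> i ^ j) ^ k) n"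
    proof (rule lam_seq_cong)
      fix k assume k: "1 \<le> k" "k \<le> n"
      have jk: "1 \<le> j * k" "j * k \<le> ?N" using j k by (simp_all add: mult_le_mono)
      have "psi_seq u (j*k) = psi_seq (\<lambda>i. esym i {..<?N} \<xi>) (j*k)" by (rule psi_seq_cong) (use jk \<xi> in auto)
      also have "\<dots> = (\<Sum>i\<in>{..<?N}. \<xi> i ^ (j*k))" using jk by (simp add: psi_seq_esym)
      finally show "psi_seq u (j*k) = (\<Sum>i\<in>{..<?N}. (\<xi> i ^ j) ^ k)" by (simp add: power_mult)
    qed
    also have "\<dots> = esym n {..<?N} (\<lambda>i. \<xi> i ^ j)" by (rule lam_seq_esym[OF inverts_nat_inv_nat_complex]) simp
    also have "\<dots> = (\<Sum>S\<in>?S. (\<Prod>i\<in>S. \<xi> i) ^ j)" by (simp add: esym_def prod_power_distrib)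
    finally show "lam_seq inv_nat_complex (\<lambda>k. psi_seq u (j*k)) n = (\<Sum>S\<in>?S. (\<Prod>i\<in>S. \<xi> i) ^ j)" .
  qed
  also have "\<dots> = esym m ?S (\<lambda>S. \<Prod>i\<in>S. \<xi> i)"
    by (rule lam_seq_esym[OF inverts_nat_inv_nat_complex]) (auto intro: finite_subset[of _ "Pow {..<?N}"])
  finally show ?thesis using L by simp
qed

section \<open>The rings \<open>\<complex>[x]/(x\<^sup>3)\<close> and \<open>\<int>[x]/(x\<^sup>3)\<close>\<close>

text \<open>\<open>CTr a b c\<close> stands for \<open>a + b x + c x\<^sup>2\<close> in \<open>\<complex>[x]/(x\<^sup>3)\<close>. Being a \<open>\<rat>\<close>-algebra, it allows
  Newton's formula to be inverted; identities of polynomials over it are obtained from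
  \<open>\<complex>[x]\<close>, which is a domain, by truncation.\<close>

datatype ctr3 = CTr complex complex complex

instantiation ctr3 :: comm_ring_1
begin
definition "0 = CTr 0 0 0"
definition "1 = CTr 1 0 0"
fun plus_ctr3 where "CTr a b c + CTr a' b' c' = CTr (a+a') (b+b') (c+c')"
fun minus_ctr3 where "CTr a b c - CTr a' b' c' = CTr (a-a') (b-b') (c-c')"
fun uminus_ctr3 where "- CTr a b c = CTr (-a) (-b) (-c)"
fun times_ctr3 where "CTr a b c * CTr a' b' c' = CTr (a*a') (a*b' + b*a') (a*c' + b*b' + c*a')"
instance
proof
  fix x y z :: ctr3
  show "x * y * z = x * (y * z)"
    by (cases x; cases y; cases z; simp add: algebra_simps)
  show "x * y = y * x" by (cases x; cases y; simp add: algebra_simps)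
  show "1 * x = x" by (cases x; simp add: one_ctr3_def)
  show "x + y + z = x + (y + z)" by (cases x; cases y; cases z; simp)
  show "x + y = y + x" by (cases x; cases y; simp)
  show "0 + x = x" by (cases x; simp add: zero_ctr3_def)
  show "- x + x = 0" by (cases x; simp add: zero_ctr3_def)
  show "x - y = x + - y" by (cases x; cases y; simp)
  show "(x + y) * z = x * z + y * z" by (cases x; cases y; cases z; simp add: algebra_simps)
  show "(0::ctr3) \<noteq> 1" by (simp add: zero_ctr3_def one_ctr3_def)
qed
end

definition ctr3_of_poly :: "complex poly \<Rightarrow> ctr3" where
  "ctr3_of_poly p = CTr (coeff p 0) (coeff p 1) (coeff p 2)"

definition poly_of_ctr3 :: "ctr3 \<Rightarrow> complex poly" where
  "poly_of_ctr3 x = (case x of CTr a b c \<Rightarrow> [:a, b, c:])"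

lemma ctr3_of_poly_poly_of_ctr3 [simp]: "ctr3_of_poly (poly_of_ctr3 x) = x"
  by (cases x) (simp add: ctr3_of_poly_def poly_of_ctr3_def numeral_2_eq_2)

lemma coeff_mult_0: "coeff (p * q) 0 = coeff p 0 * coeff q 0"
  by (simp add: coeff_mult)
lemma coeff_mult_1: "coeff (p * q) (Suc 0) = coeff p 0 * coeff q (Suc 0) + coeff p (Suc 0) * coeff q 0"
  by (simp add: coeff_mult)
lemma coeff_mult_2: "coeff (p * q) (Suc (Suc 0)) = coeff p 0 * coeff q (Suc (Suc 0)) + coeff p (Suc 0) * coeff q (Suc 0) + coeff p (Suc (Suc 0)) * coeff q 0"
  by (simp add: coeff_mult atMost_Suc algebra_simps)

lemma is_ring_hom_ctr3_of_poly: "is_ring_hom ctr3_of_poly"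
  unfolding is_ring_hom_def
  by (simp add: ctr3_of_poly_def coeff_mult_0 coeff_mult_1 coeff_mult_2 one_ctr3_def numeral_2_eq_2)

lemma is_ring_hom_poly: "is_ring_hom (\<lambda>p. poly p z)"
  by (simp add: is_ring_hom_def poly_mult)

definition inv_nat_poly :: "nat \<Rightarrow> complex poly" where "inv_nat_poly k = [:inverse (of_nat k):]"
definition inv_nat_ctr3 :: "nat \<Rightarrow> ctr3" where "inv_nat_ctr3 k = CTr (inverse (of_nat k)) 0 0"

lemma poly_inv_nat_poly: "poly (inv_nat_poly k) z = inv_nat_complex k" by (simp add: inv_nat_poly_def inv_nat_complex_def)
lemma ctr3_of_poly_inv_nat_poly: "ctr3_of_poly (inv_nat_poly k) = inv_nat_ctr3 k" by (simp add: inv_nat_poly_def inv_nat_ctr3_def ctr3_of_poly_def numeral_2_eq_2)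

lemma of_nat_ctr3: "(of_nat k :: ctr3) = CTr (of_nat k) 0 0"
  by (induction k) (simp_all add: zero_ctr3_def one_ctr3_def)

lemma inverts_nat_inv_nat_ctr3: "inverts_nat inv_nat_ctr3"
  by (simp add: inverts_nat_def inv_nat_ctr3_def of_nat_ctr3 one_ctr3_def)

lemma poly_eqI_all: "(\<And>z. poly p z = poly q (z::complex)) \<Longrightarrow> p = q"
  by (metis poly_eq_poly_eq_iff ext)

lemma Pmul_newton_ctr3:
  fixes u v :: "nat \<Rightarrow> ctr3"
  shows "mpeval (Pmul_args n u v) (Pmul n) = lam_seq inv_nat_ctr3 (\<lambda>k. psi_seq u k * psi_seq v k) n"
proof -
  let ?U = "\<lambda>i. poly_of_ctr3 (u i)" and ?V = "\<lambda>i. poly_of_ctr3 (v i)"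
  have E: "mpeval (Pmul_args n ?U ?V) (Pmul n) = lam_seq inv_nat_poly (\<lambda>k. psi_seq ?U k * psi_seq ?V k) n"
  proof (rule poly_eqI_all)
    fix z
    have "poly (mpeval (Pmul_args n ?U ?V) (Pmul n)) z = mpeval (Pmul_args n (\<lambda>i. poly (?U i) z) (\<lambda>i. poly (?V i) z)) (Pmul n)"
      by (simp add: mpeval_hom[OF is_ring_hom_poly] Pmul_args_hom[OF is_ring_hom_poly])
    also have "\<dots> = lam_seq inv_nat_complex (\<lambda>k. psi_seq (\<lambda>i. poly (?U i) z) k * psi_seq (\<lambda>i. poly (?V i) z) k) n"
      by (rule Pmul_newton_complex)
    also have "\<dots> = poly (lam_seq inv_nat_poly (\<lambda>k. psi_seq ?U k * psi_seq ?V k) n) z"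
      by (simp add: lam_seq_hom[OF is_ring_hom_poly poly_inv_nat_poly] psi_seq_hom[OF is_ring_hom_poly] poly_mult)
    finally show "poly (mpeval (Pmul_args n ?U ?V) (Pmul n)) z = poly (lam_seq inv_nat_poly (\<lambda>k. psi_seq ?U k * psi_seq ?V k) n) z" .
  qed
  have "ctr3_of_poly (mpeval (Pmul_args n ?U ?V) (Pmul n)) = mpeval (Pmul_args n u v) (Pmul n)"
    by (simp add: mpeval_hom[OF is_ring_hom_ctr3_of_poly] Pmul_args_hom[OF is_ring_hom_ctr3_of_poly])
  moreover have "ctr3_of_poly (lam_seq inv_nat_poly (\<lambda>k. psi_seq ?U k * psi_seq ?V k) n) = lam_seq inv_nat_ctr3 (\<lambda>k. psi_seq u k * psi_seq v k) n"
    by (simp add: lam_seq_hom[OF is_ring_hom_ctr3_of_poly ctr3_of_poly_inv_nat_poly] psi_seq_hom[OF is_ring_hom_ctr3_of_poly] ring_hom_mult[OF is_ring_hom_ctr3_of_poly])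
  ultimately show ?thesis using E by simp
qed

lemma Pcomp_newton_ctr3:
  fixes u :: "nat \<Rightarrow> ctr3"
  shows "mpeval (Pcomp_args (m*n) u) (Pcomp m n) = lam_seq inv_nat_ctr3 (\<lambda>j. lam_seq inv_nat_ctr3 (\<lambda>k. psi_seq u (j*k)) n) m"
proof -
  let ?U = "\<lambda>i. poly_of_ctr3 (u i)"
  have E: "mpeval (Pcomp_args (m*n) ?U) (Pcomp m n) = lam_seq inv_nat_poly (\<lambda>j. lam_seq inv_nat_poly (\<lambda>k. psi_seq ?U (j*k)) n) m"
  proof (rule poly_eqI_all)
    fix z
    have "poly (mpeval (Pcomp_args (m*n) ?U) (Pcomp m n)) z = mpeval (Pcomp_args (m*n) (\<lambda>i. poly (?U i) z)) (Pcomp m n)"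
      by (simp add: mpeval_hom[OF is_ring_hom_poly] Pcomp_args_hom[OF is_ring_hom_poly])
    also have "\<dots> = lam_seq inv_nat_complex (\<lambda>j. lam_seq inv_nat_complex (\<lambda>k. psi_seq (\<lambda>i. poly (?U i) z) (j*k)) n) m"
      by (rule Pcomp_newton_complex)
    also have "\<dots> = poly (lam_seq inv_nat_poly (\<lambda>j. lam_seq inv_nat_poly (\<lambda>k. psi_seq ?U (j*k)) n) m) z"
      by (simp add: lam_seq_hom[OF is_ring_hom_poly poly_inv_nat_poly] psi_seq_hom[OF is_ring_hom_poly])
    finally show "poly (mpeval (Pcomp_args (m*n) ?U) (Pcomp m n)) z = poly (lam_seq inv_nat_poly (\<lambda>j. lam_seq inv_nat_poly (\<lambda>k. psi_seq ?U (j*k)) n) m) z" .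
  qed
  have "ctr3_of_poly (mpeval (Pcomp_args (m*n) ?U) (Pcomp m n)) = mpeval (Pcomp_args (m*n) u) (Pcomp m n)"
    by (simp add: mpeval_hom[OF is_ring_hom_ctr3_of_poly] Pcomp_args_hom[OF is_ring_hom_ctr3_of_poly])
  moreover have "ctr3_of_poly (lam_seq inv_nat_poly (\<lambda>j. lam_seq inv_nat_poly (\<lambda>k. psi_seq ?U (j*k)) n) m) = lam_seq inv_nat_ctr3 (\<lambda>j. lam_seq inv_nat_ctr3 (\<lambda>k. psi_seq u (j*k)) n) m"
    by (simp add: lam_seq_hom[OF is_ring_hom_ctr3_of_poly ctr3_of_poly_inv_nat_poly] psi_seq_hom[OF is_ring_hom_ctr3_of_poly])
  ultimately show ?thesis using E by simp
qed

definition to_ctr3 :: "tr3 \<Rightarrow> ctr3" where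
  "to_ctr3 x = (case x of Tr a b c \<Rightarrow> CTr (of_int a) (of_int b) (of_int c))"

lemma to_ctr3_Tr [simp]: "to_ctr3 (Tr a b c) = CTr (of_int a) (of_int b) (of_int c)"
  by (simp add: to_ctr3_def)

lemma is_ring_hom_to_ctr3: "is_ring_hom to_ctr3"
  unfolding is_ring_hom_def
proof (intro conjI allI)
  fix x y :: tr3
  show "to_ctr3 (x + y) = to_ctr3 x + to_ctr3 y" by (cases x; cases y) simp
  show "to_ctr3 (x * y) = to_ctr3 x * to_ctr3 y" by (cases x; cases y) simp
  show "to_ctr3 1 = 1" by (simp add: one_tr3_def one_ctr3_def)
qed

lemma to_ctr3_inj: "to_ctr3 x = to_ctr3 y \<Longrightarrow> x = y"
  by (cases x; cases y) simp

lemma of_nat_tr3: "(of_nat k :: tr3) = Tr (of_nat k) 0 0"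
  by (induction k) (simp_all add: zero_tr3_def one_tr3_def)

lemma of_int_tr3: "(of_int k :: tr3) = Tr k 0 0"
  by (cases k) (simp_all add: of_nat_tr3 one_tr3_def)

lemma X_squared: "X ^ 2 = Tr 0 0 1"
  by (simp add: X_def power2_eq_square)

lemma Tr_eq_X_poly: "Tr a b c = of_int a + of_int b * X + of_int c * X ^ 2"
  unfolding X_squared by (simp add: of_int_tr3 X_def)

lemma sum_Tr: "(\<Sum>i\<in>A. Tr (f i) (g i) (h i)) = Tr (\<Sum>i\<in>A. f i) (\<Sum>i\<in>A. g i) (\<Sum>i\<in>A. h i)"
  by (induction A rule: infinite_finite_induct) (simp_all add: zero_tr3_def)

lemma neg1_pow_tr3: "((-1)::tr3) ^ k = Tr ((-1)^k) 0 0"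
proof -
  have "((-1)::tr3) ^ k = of_int ((-1)^k)" by simp
  then show ?thesis by (simp add: of_int_tr3)
qed

lemma sum_atLeast1_reflect: "(\<Sum>i\<in>{1..<Suc m}. f i) = (\<Sum>i<m. f (m - i))"
proof -
  have "(\<Sum>i\<in>{1..<Suc m}. f i) = (\<Sum>i<m. f (Suc i))"
    unfolding One_nat_def sum.shift_bounds_Suc_ivl atLeast0LessThan ..
  also have "\<dots> = (\<Sum>i<m. f (Suc (m - Suc i)))" by (rule sum.nat_diff_reindex[symmetric])
  also have "\<dots> = (\<Sum>i<m. f (m - i))" by (intro sum.cong) (auto simp: Suc_diff_Suc)
  finally show ?thesis .
qed

lemma psi_seq_square_zero:
  fixes u :: "nat \<Rightarrow> 'a::comm_ring_1"
  assumes Z: "\<And>i j k. 1 \<le> i \<Longrightarrow> 1 \<le> j \<Longrightarrow> 1 \<le> k \<Longrightarrow> u i * u j * u k = 0"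
  shows "n \<ge> 1 \<Longrightarrow> psi_seq u n = (-1)^(n - 1) * (of_nat n * u n - (\<Sum>i\<in>{1..<n}. of_nat i * u i * u (n - i)))"
proof (induction n rule: less_induct)
  case (less n)
  then obtain m where n: "n = Suc m" by (cases n) auto
  have T: "u (Suc i) * psi_seq u (m - i) = (-1)^(m - i - 1) * (of_nat (m - i) * u (Suc i) * u (m - i))" if i: "i < m" for i
  proof -
    define S where "S = (\<Sum>l\<in>{1..<m - i}. of_nat l * u l * u (m - i - l))"
    have A: "psi_seq u (m - i) = (-1)^(m - i - 1) * (of_nat (m - i) * u (m - i) - S)"
      using less.IH[of "m - i"] n i by (simp add: S_def)
    have B: "u (Suc i) * S = 0" unfolding S_def
      unfolding sum_distrib_left
    proof (rule sum.neutral, intro ballI)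
      fix l assume "l \<in> {1..<m - i}"
      then have "1 \<le> l" "1 \<le> m - i - l" by auto
      then have "u (Suc i) * u l * u (m - i - l) = 0" by (intro Z) auto
      then show "u (Suc i) * (of_nat l * u l * u (m - i - l)) = 0" by (simp add: mult_ac)
    qed
    have "u (Suc i) * psi_seq u (m - i) = (-1)^(m - i - 1) * (of_nat (m - i) * u (Suc i) * u (m - i)) - (-1)^(m - i - 1) * (u (Suc i) * S)"
      unfolding A by (simp add: algebra_simps)
    then show ?thesis unfolding B by simp
  qed
  have "(\<Sum>i<m. (-1)^i * u (Suc i) * psi_seq u (m - i)) = (\<Sum>i<m. (-1)^(m - 1) * (of_nat (m - i) * u (m - i) * u (Suc i)))"
  proof (rule sum.cong)
    fix i assume "i \<in> {..<m}"
    then have i: "i < m" by simp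
    have s: "(-1::'a)^i * (-1)^(m - i - 1) = (-1)^(m - 1)"
      using i by (simp flip: power_add)
    have "(-1)^i * u (Suc i) * psi_seq u (m - i) = (-1)^i * (u (Suc i) * psi_seq u (m - i))" by (rule mult.assoc)
    also have "\<dots> = (-1)^i * ((-1)^(m - i - 1) * (of_nat (m - i) * u (Suc i) * u (m - i)))" by (simp only: T[OF i])
    also have "\<dots> = ((-1)^i * (-1)^(m - i - 1)) * (of_nat (m - i) * u (m - i) * u (Suc i))" by (simp only: mult_ac)
    finally have "(-1)^i * u (Suc i) * psi_seq u (m - i) = ((-1)^i * (-1)^(m - i - 1)) * (of_nat (m - i) * u (m - i) * u (Suc i))" .
    then show "(-1)^i * u (Suc i) * psi_seq u (m - i) = (-1)^(m - 1) * (of_nat (m - i) * u (m - i) * u (Suc i))"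
      by (simp only: s)
  qed simp
  also have "\<dots> = (-1)^(m - 1) * (\<Sum>i\<in>{1..<Suc m}. of_nat i * u i * u (Suc m - i))"
  proof -
    have "(\<Sum>i\<in>{1..<Suc m}. of_nat i * u i * u (Suc m - i)) = (\<Sum>i<m. of_nat (m - i) * u (m - i) * u (Suc m - (m - i)))"
      by (rule sum_atLeast1_reflect)
    also have "\<dots> = (\<Sum>i<m. of_nat (m - i) * u (m - i) * u (Suc i))"
      by (intro sum.cong) (auto simp: Suc_diff_le)
    finally show ?thesis by (simp only: sum_distrib_left)
  qed
  finally have S: "(\<Sum>i<m. (-1)^i * u (Suc i) * psi_seq u (m - i)) = (-1)^(m - 1) * (\<Sum>i\<in>{1..<Suc m}. of_nat i * u i * u (Suc m - i))" .
  have sg: "(-1::'a)^(m - 1) = - ((-1)^m)" if "m \<ge> 1" using that by (cases m) simp_all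
  show ?case
  proof (cases "m = 0")
    case True
    then show ?thesis using n by (simp add: psi_seq_Suc_alt)
  next
    case False
    then show ?thesis unfolding n psi_seq_Suc_alt S using sg[of] by (simp add: algebra_simps)
  qed
qed

lemma psi_seq_Tr0:
  assumes u: "\<And>i. i \<ge> 1 \<Longrightarrow> u i = Tr 0 (p i) (q i)" and n: "n \<ge> 1"
  shows "psi_seq u n = Tr 0 ((-1)^(n - 1) * (int n * p n))
     ((-1)^(n - 1) * (int n * q n - (\<Sum>i\<in>{1..<n}. int i * (p i * p (n - i)))))"
proof -
  have "u i * u j * u k = 0" if "1 \<le> i" "1 \<le> j" "1 \<le> k" for i j k
    using that by (simp add: u zero_tr3_def)
  then have "psi_seq u n = (-1)^(n - 1) * (of_nat n * u n - (\<Sum>i\<in>{1..<n}. of_nat i * u i * u (n - i)))"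
    by (rule psi_seq_square_zero[OF _ n])
  also have "(\<Sum>i\<in>{1..<n}. of_nat i * u i * u (n - i)) = (\<Sum>i\<in>{1..<n}. Tr 0 0 (int i * (p i * p (n - i))))"
    by (intro sum.cong) (auto simp: u of_nat_tr3)
  finally show ?thesis using n by (simp add: u sum_Tr neg1_pow_tr3 of_nat_tr3)
qed

section \<open>Adams operations of a \<open>\<lambda>\<close>-ring\<close>

lemma lambda_ring_lam0: "lambda_ring lam \<Longrightarrow> lam 0 x = 1"
  by (simp add: lambda_ring_def pre_lambda_ring_def)
lemma lambda_ring_lam1: "lambda_ring lam \<Longrightarrow> lam 1 x = x"
  by (simp add: lambda_ring_def pre_lambda_ring_def)
lemma lambda_ring_add: "lambda_ring lam \<Longrightarrow> (\<lambda>i. lam i (x + y)) = seq_conv (\<lambda>i. lam i x) (\<lambda>i. lam i y)"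
  by (rule ext) (simp add: lambda_ring_def pre_lambda_ring_def seq_conv_def)
lemma lambda_ring_lam_one: "lambda_ring lam \<Longrightarrow> n \<ge> 2 \<Longrightarrow> lam n 1 = 0"
  by (simp add: lambda_ring_def)
lemma lambda_ring_mult: "lambda_ring lam \<Longrightarrow> n \<ge> 1 \<Longrightarrow> lam n (x * y) = mpeval (Pmul_args n (\<lambda>i. lam i x) (\<lambda>i. lam i y)) (Pmul n)"
  by (simp add: lambda_ring_def Pmul_args_def[abs_def])
lemma lambda_ring_comp: "lambda_ring lam \<Longrightarrow> m \<ge> 1 \<Longrightarrow> n \<ge> 1 \<Longrightarrow> lam m (lam n x) = mpeval (Pcomp_args (m*n) (\<lambda>i. lam i x)) (Pcomp m n)"
  by (simp add: lambda_ring_def Pcomp_args_def[abs_def])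

lemma adams_add:
  assumes L: "lambda_ring lam" and k: "k \<ge> 1"
  shows "adams lam k (x + y) = adams lam k x + adams lam k y"
proof -
  have N1: "newton (\<lambda>i. lam i x) (psi_seq (\<lambda>i. lam i x))" by (rule newton_psi_seq) (simp add: lambda_ring_lam0[OF L])
  have N2: "newton (\<lambda>i. lam i y) (psi_seq (\<lambda>i. lam i y))" by (rule newton_psi_seq) (simp add: lambda_ring_lam0[OF L])
  have N: "newton (seq_conv (\<lambda>i. lam i x) (\<lambda>i. lam i y)) (\<lambda>k. psi_seq (\<lambda>i. lam i x) k + psi_seq (\<lambda>i. lam i y) k)"
    by (rule newton_seq_conv[OF N1 N2])
  have c0: "seq_conv (\<lambda>i. lam i x) (\<lambda>i. lam i y) 0 = 1" by (simp add: seq_conv_def lambda_ring_lam0[OF L])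
  have "psi_seq (\<lambda>i. lam i x) k + psi_seq (\<lambda>i. lam i y) k = psi_seq (seq_conv (\<lambda>i. lam i x) (\<lambda>i. lam i y)) k"
    by (rule newton_psi_seq_eq[OF c0 N k])
  then show ?thesis by (simp add: adams_psi_seq lambda_ring_add[OF L])
qed

lemma esym_single: "esym k {a} c = (if k = 0 then 1 else if k = 1 then c a else 0)"
proof (cases k)
  case 0 then show ?thesis by (simp add: esym_0)
next
  case (Suc m)
  have "esym (Suc m) (insert a {}) c = esym (Suc m) {} c + c a * esym m {} c"
    by (rule esym_insert) auto
  then show ?thesis using Suc by (cases m) (simp_all add: esym_0 esym_empty_Suc)
qed

lemma adams_one:
  assumes L: "lambda_ring lam" and k: "k \<ge> 1"
  shows "adams lam k 1 = 1"
proof -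
  have "(\<lambda>i. lam i 1) = (\<lambda>i. esym i {0::nat} (\<lambda>_. 1))"
  proof
    fix i show "lam i 1 = esym i {0::nat} (\<lambda>_. 1)"
      using lambda_ring_lam0[OF L] lambda_ring_lam1[OF L] lambda_ring_lam_one[OF L, of i]
      by (cases i; cases "i = 1") (auto simp: esym_single)
  qed
  then show ?thesis using k by (simp add: adams_psi_seq psi_seq_esym)
qed

context
  fixes lam :: "nat \<Rightarrow> tr3 \<Rightarrow> tr3"
  assumes L: "lambda_ring lam"
begin

lemma to_ctr3_lam_mul: "(\<lambda>n. to_ctr3 (lam n (x * y))) = lam_seq inv_nat_ctr3 (\<lambda>k. psi_seq (\<lambda>i. to_ctr3 (lam i x)) k * psi_seq (\<lambda>i. to_ctr3 (lam i y)) k)"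
proof
  fix n show "to_ctr3 (lam n (x * y)) = lam_seq inv_nat_ctr3 (\<lambda>k. psi_seq (\<lambda>i. to_ctr3 (lam i x)) k * psi_seq (\<lambda>i. to_ctr3 (lam i y)) k) n"
  proof (cases "n = 0")
    case True then show ?thesis by (simp add: lambda_ring_lam0[OF L] ring_hom_one[OF is_ring_hom_to_ctr3])
  next
    case False
    then have "to_ctr3 (lam n (x * y)) = mpeval (Pmul_args n (\<lambda>i. to_ctr3 (lam i x)) (\<lambda>i. to_ctr3 (lam i y))) (Pmul n)"
      by (simp add: lambda_ring_mult[OF L] mpeval_hom[OF is_ring_hom_to_ctr3] Pmul_args_hom[OF is_ring_hom_to_ctr3])
    then show ?thesis by (simp add: Pmul_newton_ctr3)
  qed
qed

lemma adams_mult: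
  assumes k: "k \<ge> 1"
  shows "adams lam k (x * y) = adams lam k x * adams lam k y"
proof (rule to_ctr3_inj)
  have "to_ctr3 (adams lam k (x * y)) = psi_seq (\<lambda>n. to_ctr3 (lam n (x * y))) k"
    by (simp add: adams_psi_seq psi_seq_hom[OF is_ring_hom_to_ctr3])
  also have "\<dots> = psi_seq (\<lambda>i. to_ctr3 (lam i x)) k * psi_seq (\<lambda>i. to_ctr3 (lam i y)) k"
    unfolding to_ctr3_lam_mul by (rule psi_seq_lam_seq[OF inverts_nat_inv_nat_ctr3 k])
  also have "\<dots> = to_ctr3 (adams lam k x * adams lam k y)"
    by (simp add: adams_psi_seq psi_seq_hom[OF is_ring_hom_to_ctr3] ring_hom_mult[OF is_ring_hom_to_ctr3])
  finally show "to_ctr3 (adams lam k (x * y)) = to_ctr3 (adams lam k x * adams lam k y)" .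
qed

lemma is_ring_hom_adams: "k \<ge> 1 \<Longrightarrow> is_ring_hom (adams lam k)"
  unfolding is_ring_hom_def using adams_add[OF L] adams_mult adams_one[OF L] by auto

lemma to_ctr3_lam_comp:
  assumes n: "n \<ge> 1"
  shows "(\<lambda>m. to_ctr3 (lam m (lam n x))) = lam_seq inv_nat_ctr3 (\<lambda>j. lam_seq inv_nat_ctr3 (\<lambda>k. psi_seq (\<lambda>i. to_ctr3 (lam i x)) (j*k)) n)"
proof
  fix m show "to_ctr3 (lam m (lam n x)) = lam_seq inv_nat_ctr3 (\<lambda>j. lam_seq inv_nat_ctr3 (\<lambda>k. psi_seq (\<lambda>i. to_ctr3 (lam i x)) (j*k)) n) m"
  proof (cases "m = 0")
    case True then show ?thesis by (simp add: lambda_ring_lam0[OF L] ring_hom_one[OF is_ring_hom_to_ctr3])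
  next
    case False
    then have "to_ctr3 (lam m (lam n x)) = mpeval (Pcomp_args (m*n) (\<lambda>i. to_ctr3 (lam i x))) (Pcomp m n)"
      using n by (simp add: lambda_ring_comp[OF L] mpeval_hom[OF is_ring_hom_to_ctr3] Pcomp_args_hom[OF is_ring_hom_to_ctr3])
    then show ?thesis by (simp add: Pcomp_newton_ctr3)
  qed
qed

lemma adams_lam:
  assumes j: "j \<ge> 1"
  shows "to_ctr3 (adams lam j (lam n x)) = lam_seq inv_nat_ctr3 (\<lambda>k. to_ctr3 (adams lam (j*k) x)) n"
proof (cases "n = 0")
  case True
  then show ?thesis using adams_one[OF L j] by (simp add: lambda_ring_lam0[OF L] ring_hom_one[OF is_ring_hom_to_ctr3])
next
  case False
  then have n: "n \<ge> 1" by simp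
  have "to_ctr3 (adams lam j (lam n x)) = psi_seq (\<lambda>m. to_ctr3 (lam m (lam n x))) j"
    by (simp add: adams_psi_seq psi_seq_hom[OF is_ring_hom_to_ctr3])
  also have "\<dots> = lam_seq inv_nat_ctr3 (\<lambda>k. psi_seq (\<lambda>i. to_ctr3 (lam i x)) (j*k)) n"
    unfolding to_ctr3_lam_comp[OF n] by (rule psi_seq_lam_seq[OF inverts_nat_inv_nat_ctr3 j])
  also have "\<dots> = lam_seq inv_nat_ctr3 (\<lambda>k. to_ctr3 (adams lam (j*k) x)) n"
    by (simp add: adams_psi_seq psi_seq_hom[OF is_ring_hom_to_ctr3])
  finally show ?thesis .
qed

lemma adams_adams:
  assumes j: "j \<ge> 1" and k: "k \<ge> 1"
  shows "adams lam j (adams lam k x) = adams lam (j*k) x"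
proof (rule to_ctr3_inj)
  have "to_ctr3 (adams lam j (adams lam k x)) = to_ctr3 (psi_seq (\<lambda>i. adams lam j (lam i x)) k)"
    by (simp add: adams_psi_seq[of lam k] psi_seq_hom[OF is_ring_hom_adams[OF j]])
  also have "\<dots> = psi_seq (\<lambda>i. to_ctr3 (adams lam j (lam i x))) k"
    by (simp add: psi_seq_hom[OF is_ring_hom_to_ctr3])
  also have "\<dots> = psi_seq (lam_seq inv_nat_ctr3 (\<lambda>k'. to_ctr3 (adams lam (j*k') x))) k"
    by (simp add: adams_lam[OF j])
  also have "\<dots> = to_ctr3 (adams lam (j*k) x)" by (rule psi_seq_lam_seq[OF inverts_nat_inv_nat_ctr3 k])
  finally show "to_ctr3 (adams lam j (adams lam k x)) = to_ctr3 (adams lam (j*k) x)" .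
qed

end

section \<open>Necessity of the conditions\<close>

definition adams_conditions :: "(nat \<Rightarrow> int) \<Rightarrow> (nat \<Rightarrow> int) \<Rightarrow> bool" where
  "adams_conditions b c \<longleftrightarrow> (\<forall>p. prime p \<longrightarrow> int p dvd b p) \<and>
           odd (c 2) \<and> (\<forall>p. prime p \<and> p > 2 \<longrightarrow> int p dvd c p) \<and>
           (\<forall>p q. prime p \<and> prime q \<longrightarrow> (b q^2 - b q) * c p = (b p^2 - b p) * c q)"

lemma sum_weighted_reflect:
  fixes f :: "nat \<Rightarrow> int"
  shows "2 * (\<Sum>i\<in>{1..<n}. int i * (f i * f (n - i))) = int n * (\<Sum>i\<in>{1..<n}. f i * f (n - i))"
proof -
  have "(\<Sum>i\<in>{1..<n}. int i * (f i * f (n - i))) = (\<Sum>i\<in>{1..<n}. int (n - i) * (f (n - i) * f i))"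
    by (rule sum.reindex_bij_witness[of _ "\<lambda>i. n - i" "\<lambda>i. n - i"]) auto
  then have "2 * (\<Sum>i\<in>{1..<n}. int i * (f i * f (n - i))) =
        (\<Sum>i\<in>{1..<n}. int i * (f i * f (n - i))) + (\<Sum>i\<in>{1..<n}. int (n - i) * (f (n - i) * f i))"
    by simp
  also have "\<dots> = (\<Sum>i\<in>{1..<n}. (int i + int (n - i)) * (f i * f (n - i)))"
    by (simp add: sum.distrib[symmetric] algebra_simps)
  also have "\<dots> = (\<Sum>i\<in>{1..<n}. int n * (f i * f (n - i)))"
    by (intro sum.cong) auto
  finally show ?thesis by (simp add: sum_distrib_left)
qed

lemma odd_sum_reflect_iff:
  fixes f :: "nat \<Rightarrow> int"
  assumes k: "k \<ge> 1"
  shows "odd (\<Sum>i\<in>{1..<2*k}. f i * f (2*k - i)) \<longleftrightarrow> odd (f k)"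
proof -
  let ?g = "\<lambda>i. f i * f (2*k - i)"
  have "(\<Sum>i\<in>{1..<2*k}. ?g i) = (\<Sum>i\<in>{1..<k}. ?g i) + (\<Sum>i\<in>{k..<2*k}. ?g i)"
    using k by (simp add: sum.atLeastLessThan_concat)
  also have "(\<Sum>i\<in>{k..<2*k}. ?g i) = ?g k + (\<Sum>i\<in>{Suc k..<2*k}. ?g i)"
    using k by (simp add: sum.atLeast_Suc_lessThan)
  also have "(\<Sum>i\<in>{Suc k..<2*k}. ?g i) = (\<Sum>i\<in>{1..<k}. ?g i)"
    by (rule sum.reindex_bij_witness[of _ "\<lambda>i. 2*k - i" "\<lambda>i. 2*k - i"]) (auto simp: mult.commute)
  finally have "(\<Sum>i\<in>{1..<2*k}. ?g i) = 2 * (\<Sum>i\<in>{1..<k}. ?g i) + f k * f k" by simp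
  then show ?thesis by simp
qed

fun coeff_x :: "tr3 \<Rightarrow> int" where "coeff_x (Tr a b c) = b"
fun coeff_x2 :: "tr3 \<Rightarrow> int" where "coeff_x2 (Tr a b c) = c"

locale filtered_adams_X =
  fixes d :: nat and lam :: "nat \<Rightarrow> tr3 \<Rightarrow> tr3" and b c :: "nat \<Rightarrow> int"
  assumes d: "d > 0" and filtered: "filtered_lambda_ring d lam"
    and adams_X: "\<And>p. prime p \<Longrightarrow> adams lam p X = of_int (b p) * X + of_int (c p) * X^2"
begin

lemma lambda_ring: "lambda_ring lam"
  using filtered by (simp add: filtered_lambda_ring_def)

lemma lam_X: "i \<ge> 1 \<Longrightarrow> lam i X = Tr 0 (coeff_x (lam i X)) (coeff_x2 (lam i X))"
proof -
  assume "i \<ge> 1"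
  moreover have "X \<in> fil d d" by (auto simp: fil_def X_def)
  ultimately have "lam i X \<in> fil d d" using filtered unfolding filtered_lambda_ring_def by blast
  then show ?thesis using d by (auto simp: fil_def)
qed

lemma adams_X_Newton:
  assumes n: "n \<ge> 1"
  shows "adams lam n X = Tr 0 ((-1)^(n - 1) * (int n * coeff_x (lam n X)))
     ((-1)^(n - 1) * (int n * coeff_x2 (lam n X)
        - (\<Sum>i\<in>{1..<n}. int i * (coeff_x (lam i X) * coeff_x (lam (n - i) X)))))"
  unfolding adams_psi_seq
  by (rule psi_seq_Tr0[where p = "\<lambda>i. coeff_x (lam i X)" and q = "\<lambda>i. coeff_x2 (lam i X)"])
    (use lam_X n in auto)

lemma adams_prime_X: "prime p \<Longrightarrow> adams lam p X = Tr 0 (b p) (c p)"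
  using adams_X by (simp add: of_int_tr3 X_def power2_eq_square)

lemma prime_dvd_b: "prime p \<Longrightarrow> int p dvd b p"
  using adams_X_Newton[of p] adams_prime_X[of p] prime_ge_1_nat[of p] by simp

lemma odd_c2: "odd (c 2)"
proof -
  have "{1..<2::nat} = {1}" by auto
  moreover have "lam 1 X = X"
    by (rule lambda_ring_lam1[OF lambda_ring])
  then have "coeff_x (lam 1 X) = 1"
    by (simp add: X_def)
  ultimately have "c 2 = 1 - 2 * coeff_x2 (lam 2 X)"
    using adams_X_Newton[of 2] adams_prime_X[of 2] by simp
  then show ?thesis by simp
qed

lemma odd_prime_dvd_c:
  assumes p: "prime p" "p > 2"
  shows "int p dvd c p"
proof -
  let ?S = "\<Sum>i\<in>{1..<p}. int i * (coeff_x (lam i X) * coeff_x (lam (p - i) X))"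
  have c: "c p = (-1)^(p - 1) * (int p * coeff_x2 (lam p X) - ?S)"
    using adams_X_Newton[of p] adams_prime_X[OF p(1)] p by simp
  have "int p dvd 2 * ?S"
    by (subst sum_weighted_reflect) simp
  moreover have "coprime (int p) 2"
    using p by (simp add: prime_odd_nat)
  ultimately have "int p dvd ?S"
    using coprime_dvd_mult_right_iff by blast
  then show ?thesis unfolding c by simp
qed

text \<open>Both sides are the coefficient of \<open>x\<^sup>2\<close> in \<open>\<psi>\<^sup>p \<psi>\<^sup>q x = \<psi>\<^sup>q \<psi>\<^sup>p x\<close>.\<close>

lemma b_c_commute:
  assumes p: "prime p" and q: "prime q"
  shows "(b q^2 - b q) * c p = (b p^2 - b p) * c q"
proof -
  have adams_Tr: "adams lam r (Tr 0 \<beta> \<gamma>) = Tr 0 (\<beta> * b r) (\<beta> * c r + \<gamma> * b r ^ 2)"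
    if r: "prime r" for r \<beta> \<gamma>
  proof -
    have h: "is_ring_hom (adams lam r)"
      using r prime_ge_1_nat by (intro is_ring_hom_adams[OF lambda_ring]) auto
    have "adams lam r (Tr 0 \<beta> \<gamma>) = of_int \<beta> * adams lam r X + of_int \<gamma> * adams lam r X ^ 2"
      unfolding Tr_eq_X_poly[of 0 \<beta> \<gamma>]
      by (simp add: ring_hom_add[OF h] ring_hom_mult[OF h] ring_hom_of_int[OF h] ring_hom_power[OF h])
    then show ?thesis using adams_prime_X[OF r] by (simp add: of_int_tr3 power2_eq_square)
  qed
  have "p \<ge> 1" "q \<ge> 1"
    using p q prime_ge_1_nat by auto
  then have "adams lam p (adams lam q X) = adams lam q (adams lam p X)"
    by (simp add: adams_adams[OF lambda_ring] mult.commute)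
  then have "b q * c p + c q * b p ^ 2 = b p * c q + c p * b q ^ 2"
    using p q by (simp add: adams_prime_X adams_Tr)
  then show ?thesis by (simp add: algebra_simps power2_eq_square)
qed

end

lemma adams_conditions_necessary:
  assumes "d > 0" and "filtered_lambda_ring d lam"
    and "\<forall>p. prime p \<longrightarrow> adams lam p X = of_int (b p) * X + of_int (c p) * X^2"
  shows "adams_conditions b c"
proof -
  interpret filtered_adams_X d lam b c
    using assms by unfold_locales blast+
  show ?thesis unfolding adams_conditions_def
    using prime_dvd_b odd_c2 odd_prime_dvd_c b_c_commute by blast
qed

lemma adams_conditions_two_power_dvd:
  assumes conds: "adams_conditions b c" and p: "prime p"
  shows "2 ^ multiplicity 2 (b 2) dvd b p^2 - b p"
proof -
  have "2 ^ multiplicity 2 (b 2) dvd b 2" by (rule multiplicity_dvd)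
  then have "2 ^ multiplicity 2 (b 2) dvd (b 2^2 - b 2) * c p"
    by (simp add: power2_eq_square right_diff_distrib)
  moreover have "(b 2^2 - b 2) * c p = (b p^2 - b p) * c 2"
    using conds p unfolding adams_conditions_def by (metis two_is_prime_nat)
  moreover have "coprime ((2::int) ^ multiplicity 2 (b 2)) (c 2)"
    using conds unfolding adams_conditions_def by simp
  ultimately show ?thesis
    using coprime_dvd_mult_left_iff by metis
qed

lemma adams_conditions_b_zero:
  assumes conds: "adams_conditions b c" and "b 2 = 0" and p: "prime p"
  shows "b p = 0"
proof -
  have "(b 2^2 - b 2) * c p = (b p^2 - b p) * c 2"
    using conds p unfolding adams_conditions_def by (metis two_is_prime_nat)
  moreover have "c 2 \<noteq> 0" using conds unfolding adams_conditions_def by auto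
  ultimately have "b p * (b p - 1) = 0" using \<open>b 2 = 0\<close> by (simp add: power2_eq_square algebra_simps)
  moreover have "b p \<noteq> 1"
  proof
    assume "b p = 1"
    then have "int p dvd 1" using conds p unfolding adams_conditions_def by metis
    then show False using p by simp
  qed
  ultimately show ?thesis by simp
qed

section \<open>Binomial sequences\<close>

definition delta_seq :: "nat \<Rightarrow> int" where "delta_seq k = (if k = 0 then 1 else 0)"
definition one_plus_t_seq :: "nat \<Rightarrow> int" where "one_plus_t_seq k = (if k \<le> 1 then 1 else 0)"
definition inv_one_plus_t_seq :: "nat \<Rightarrow> int" where "inv_one_plus_t_seq k = (-1)^k"

text \<open>\<open>binom_int a\<close> is the coefficient sequence of \<open>(1 + t)\<^sup>a\<close>, i.e. the \<open>\<lambda>\<close>-operations of the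
  integer \<open>a\<close>.\<close>

fun binom_nat :: "nat \<Rightarrow> nat \<Rightarrow> int" where
  "binom_nat 0 = delta_seq" | "binom_nat (Suc m) = seq_conv (binom_nat m) one_plus_t_seq"
fun binom_neg :: "nat \<Rightarrow> nat \<Rightarrow> int" where
  "binom_neg 0 = delta_seq" | "binom_neg (Suc m) = seq_conv (binom_neg m) inv_one_plus_t_seq"

definition binom_int :: "int \<Rightarrow> nat \<Rightarrow> int" where
  "binom_int a = (if a \<ge> 0 then binom_nat (nat a) else binom_neg (nat (- a)))"

lemma newton_delta_seq: "newton delta_seq (\<lambda>_. 0)"
  unfolding newton_def delta_seq_def by simp

lemma newton_one_plus_t_seq: "newton one_plus_t_seq (\<lambda>_. 1)"
proof -
  have "one_plus_t_seq = (\<lambda>k. esym k {0::nat} (\<lambda>_. 1))" by (rule ext) (simp add: one_plus_t_seq_def esym_single)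
  then show ?thesis using newton_esym[of "{0::nat}" "\<lambda>_. (1::int)"] by simp
qed

lemma newton_inv_one_plus_t_seq: "newton inv_one_plus_t_seq (\<lambda>_. -1)"
  unfolding newton_def inv_one_plus_t_seq_def
proof (intro allI impI)
  fix k :: nat assume k: "k \<ge> 1"
  have "(\<Sum>i<k. (-1::int)^i * (-1)^i * (-1)) = (\<Sum>i<k. -1)"
    by (intro sum.cong) (simp_all flip: power_add)
  also have "\<dots> = - int k" by simp
  also have "\<dots> = (-1)^(k - 1) * int k * (-1)^k"
  proof -
    have "(-1::int)^(k - 1) * (-1)^k = (-1)^(k - 1 + k)" by (simp add: power_add)
    also have "k - 1 + k = Suc (2 * (k - 1))" using k by simp
    finally have "(-1::int)^(k - 1) * (-1)^k = -1" by simp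
    then show ?thesis by (simp add: algebra_simps)
  qed
  finally show "(\<Sum>i<k. (-1::int)^i * (-1)^i * (-1)) = (-1)^(k - 1) * of_nat k * (-1)^k" by simp
qed

lemma seq_conv_0: "seq_conv u v 0 = u 0 * v 0" by (simp add: seq_conv_def)

lemma binom_nat_0: "binom_nat m 0 = 1" by (induction m) (simp_all add: delta_seq_def one_plus_t_seq_def seq_conv_0)
lemma binom_neg_0: "binom_neg m 0 = 1" by (induction m) (simp_all add: delta_seq_def inv_one_plus_t_seq_def seq_conv_0)
lemma binom_int_0: "binom_int a 0 = 1" by (simp add: binom_int_def binom_nat_0 binom_neg_0)

lemma newton_binom_nat: "newton (binom_nat m) (\<lambda>_. int m)"
proof (induction m)
  case 0 then show ?case using newton_delta_seq by simp
next
  case (Suc m)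
  have "newton (seq_conv (binom_nat m) one_plus_t_seq) (\<lambda>k. int m + 1)" using newton_seq_conv[OF Suc.IH newton_one_plus_t_seq] by simp
  moreover have "(\<lambda>k::nat. int m + 1) = (\<lambda>_. int (Suc m))" by auto
  ultimately show ?case by simp
qed

lemma newton_binom_neg: "newton (binom_neg m) (\<lambda>_. - int m)"
proof (induction m)
  case 0 then show ?case using newton_delta_seq by simp
next
  case (Suc m)
  have "newton (seq_conv (binom_neg m) inv_one_plus_t_seq) (\<lambda>k. - int m + - 1)" using newton_seq_conv[OF Suc.IH newton_inv_one_plus_t_seq] by simp
  moreover have "(\<lambda>k::nat. - int m + - 1) = (\<lambda>_. - int (Suc m))" by auto
  ultimately show ?case by simp
qed

lemma newton_binom_int: "newton (binom_int a) (\<lambda>_. a)"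
proof (cases "a \<ge> 0")
  case True
  have "(\<lambda>_::nat. int (nat a)) = (\<lambda>_. a)" using True by auto
  then show ?thesis using True newton_binom_nat[of "nat a"] by (simp add: binom_int_def)
next
  case False
  have "(\<lambda>_::nat. - int (nat (- a))) = (\<lambda>_. a)" using False by auto
  then show ?thesis using False newton_binom_neg[of "nat (- a)"] by (simp add: binom_int_def)
qed

lemma binom_int_zero: "binom_int 0 = delta_seq" by (simp add: binom_int_def)

lemma seq_conv_delta_seq: "seq_conv (\<lambda>i. of_int (delta_seq i)) v n = v n"
proof -
  have "seq_conv (\<lambda>i. of_int (delta_seq i)) v n = (\<Sum>i\<le>n. (if i = 0 then v (n - i) else 0))"
    unfolding seq_conv_def by (intro sum.cong) (simp_all add: delta_seq_def)
  also have "\<dots> = v n" by (simp add: sum.delta)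
  finally show ?thesis .
qed

section \<open>Extending the coefficients multiplicatively\<close>

definition bext :: "(nat \<Rightarrow> int) \<Rightarrow> nat \<Rightarrow> int" where
  "bext b n = (\<Prod>p\<in>#prime_factorization n. b p)"

text \<open>\<open>cext b c n\<close> is the \<open>x\<^sup>2\<close>-coefficient of \<open>\<psi>\<^sup>n x\<close> forced by \<open>\<psi>\<^sup>n\<psi>\<^sup>2 = \<psi>\<^sup>2\<psi>\<^sup>n\<close>, namely
  \<open>(b\<^sub>2\<^sup>2 - b\<^sub>2) c\<^sub>n = c\<^sub>2 (b\<^sub>n\<^sup>2 - b\<^sub>n)\<close>; the division is exact (\<open>sq_diff_b2_cext\<close>). If \<open>b\<^sub>2 = 0\<close>, then
  \<open>b\<^sub>n = 0\<close> for all \<open>n > 1\<close> and only the prime values of \<open>c\<close> survive.\<close>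

definition cext :: "(nat \<Rightarrow> int) \<Rightarrow> (nat \<Rightarrow> int) \<Rightarrow> nat \<Rightarrow> int" where
  "cext b c n = (if b 2 = 0 then (if prime n then c n else 0)
               else c 2 * (bext b n ^ 2 - bext b n) div (b 2 ^ 2 - b 2))"

lemma bext_1 [simp]: "bext b 1 = 1" by (simp add: bext_def)
lemma bext_Suc0 [simp]: "bext b (Suc 0) = 1" by (simp add: bext_def)
lemma bext_prime: "prime p \<Longrightarrow> bext b p = b p" by (simp add: bext_def prime_factorization_prime)
lemma bext_mult: "m \<noteq> 0 \<Longrightarrow> n \<noteq> 0 \<Longrightarrow> bext b (m * n) = bext b m * bext b n"
  by (simp add: bext_def prime_factorization_mult)

lemma prime_factor_step:
  assumes "n > (1::nat)"
  shows "\<exists>p m. prime p \<and> n = p * m \<and> 1 \<le> m \<and> m < n"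
proof -
  obtain p where p: "prime p" "p dvd n" using prime_factor_nat[of n] assms by auto
  then obtain m where m: "n = p * m" by (auto elim: dvdE)
  have "m \<ge> 1" using m assms by (cases m) auto
  moreover have "p \<ge> 2" using p by (simp add: prime_ge_2_nat)
  then have "m < n" using m \<open>m \<ge> 1\<close> by simp
  ultimately show ?thesis using p m by blast
qed

locale adams_coeffs =
  fixes b c :: "nat \<Rightarrow> int"
  assumes conds: "adams_conditions b c"
begin

lemma adams_conditions_dvd_b: "prime p \<Longrightarrow> int p dvd b p" using conds by (simp add: adams_conditions_def)
lemma adams_conditions_odd_c2: "odd (c 2)" using conds by (simp add: adams_conditions_def)
lemma adams_conditions_dvd_c: "prime p \<Longrightarrow> p > 2 \<Longrightarrow> int p dvd c p" using conds by (simp add: adams_conditions_def)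
lemma adams_conditions_commute: "prime p \<Longrightarrow> prime q \<Longrightarrow> (b q^2 - b q) * c p = (b p^2 - b p) * c q"
  using conds by (simp add: adams_conditions_def)
lemma adams_conditions_even_b2: "even (b 2)" using adams_conditions_dvd_b[of 2] by simp

lemma bext_dvd: "n \<ge> 1 \<Longrightarrow> int n dvd bext b n"
proof (induction n rule: less_induct)
  case (less n)
  show ?case
  proof (cases "n = 1")
    case False
    then obtain p m where pm: "prime p" "n = p * m" "1 \<le> m" "m < n"
      using prime_factor_step[of n] less.prems by auto
    have "bext b n = b p * bext b m" using pm by (simp add: bext_mult bext_prime prime_gt_0_nat)
    moreover have "int p dvd b p" by (rule adams_conditions_dvd_b[OF pm(1)])
    moreover have "int m dvd bext b m" using less pm by simp
    ultimately show ?thesis using pm by (simp add: mult_dvd_mono)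
  qed simp
qed

lemma bext_zero: "b 2 = 0 \<Longrightarrow> n > 1 \<Longrightarrow> bext b n = 0"
proof -
  assume b2: "b 2 = 0" and n: "n > 1"
  obtain p m where pm: "prime p" "n = p * m" "1 \<le> m" "m < n"
    using prime_factor_step[OF n] by auto
  have "b p = 0" by (rule adams_conditions_b_zero[OF conds b2 pm(1)])
  then show ?thesis using pm by (simp add: bext_mult bext_prime prime_gt_0_nat)
qed

lemma sq_diff_b2_dvd:
  assumes "n \<ge> 1"
  shows "(b 2 ^ 2 - b 2) dvd c 2 * (bext b n ^ 2 - bext b n)"
  using assms
proof (induction n rule: less_induct)
  case (less n)
  show ?case
  proof (cases "n = 1")
    case False
    then obtain p m where pm: "prime p" "n = p * m" "1 \<le> m" "m < n"
      using prime_factor_step[of n] less.prems by auto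
    have B: "bext b n = b p * bext b m" using pm by (simp add: bext_mult bext_prime prime_gt_0_nat)
    have "c 2 * (bext b n ^ 2 - bext b n) = bext b m * (c 2 * (b p ^ 2 - b p)) + b p ^ 2 * (c 2 * (bext b m ^ 2 - bext b m))"
      unfolding B by (simp add: algebra_simps power2_eq_square)
    also have "c 2 * (b p ^ 2 - b p) = (b 2 ^ 2 - b 2) * c p"
      using adams_conditions_commute[OF pm(1) two_is_prime_nat] by (simp add: mult.commute)
    finally show ?thesis using less pm by simp
  qed simp
qed

lemma sq_diff_b2_nonzero: "b 2 \<noteq> 0 \<Longrightarrow> b 2 ^ 2 - b 2 \<noteq> 0"
proof
  assume "b 2 \<noteq> 0" "b 2 ^ 2 - b 2 = 0"
  then have "b 2 * (b 2 - 1) = 0" by (simp add: power2_eq_square algebra_simps)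
  then have "b 2 = 1" using \<open>b 2 \<noteq> 0\<close> by simp
  then show False using adams_conditions_even_b2 by simp
qed

lemma sq_diff_b2_cext: "b 2 \<noteq> 0 \<Longrightarrow> n \<ge> 1 \<Longrightarrow> (b 2 ^ 2 - b 2) * cext b c n = c 2 * (bext b n ^ 2 - bext b n)"
  by (simp add: cext_def sq_diff_b2_dvd)

lemma cext_1 [simp]: "cext b c 1 = 0"
  by (simp add: cext_def)

lemma cext_Suc0 [simp]: "cext b c (Suc 0) = 0"
  by (simp add: cext_def)

lemma cext_prime: "prime p \<Longrightarrow> cext b c p = c p"
proof (cases "b 2 = 0")
  case False
  assume p: "prime p"
  have "c 2 * (b p ^ 2 - b p) = (b 2 ^ 2 - b 2) * c p"
    using adams_conditions_commute[OF p two_is_prime_nat] by (simp add: mult.commute)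
  then show ?thesis using False sq_diff_b2_nonzero[OF False] p by (simp add: cext_def bext_prime)
qed (simp add: cext_def)

lemma cext_mult:
  assumes m: "m \<ge> 1" and n: "n \<ge> 1"
  shows "cext b c (m * n) = bext b n * cext b c m + bext b m ^ 2 * cext b c n"
proof (cases "b 2 = 0")
  case True
  show ?thesis
  proof (cases "m = 1 \<or> n = 1")
    case True then show ?thesis by auto
  next
    case False
    then have "m > 1" "n > 1" using m n by auto
    moreover have "\<not> prime (m * n)" using \<open>m > 1\<close> \<open>n > 1\<close> prime_product[of m n] by auto
    ultimately show ?thesis using True by (simp add: cext_def bext_zero)
  qed
next
  case False
  have mn: "m * n \<ge> 1" using m n by simp
  let ?D = "b 2 ^ 2 - b 2"
  have m0: "m \<noteq> 0" and n0: "n \<noteq> 0" using m n by auto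
  have 1: "?D * cext b c (m * n) = c 2 * ((bext b m * bext b n) ^ 2 - bext b m * bext b n)"
    using sq_diff_b2_cext[OF False mn] bext_mult[OF m0 n0] by simp
  have "?D * (bext b n * cext b c m + bext b m ^ 2 * cext b c n) = bext b n * (?D * cext b c m) + bext b m ^ 2 * (?D * cext b c n)"
    by (simp add: algebra_simps)
  also have "\<dots> = bext b n * (c 2 * (bext b m ^ 2 - bext b m)) + bext b m ^ 2 * (c 2 * (bext b n ^ 2 - bext b n))"
    using sq_diff_b2_cext[OF False m] sq_diff_b2_cext[OF False n] by simp
  also have "\<dots> = c 2 * ((bext b m * bext b n) ^ 2 - bext b m * bext b n)"
    by (simp add: algebra_simps power2_eq_square)
  finally have "?D * cext b c (m * n) = ?D * (bext b n * cext b c m + bext b m ^ 2 * cext b c n)" using 1 by simp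
  then show ?thesis using sq_diff_b2_nonzero[OF False] by simp
qed

lemma cext_odd: "odd n \<Longrightarrow> int n dvd cext b c n"
proof (induction n rule: less_induct)
  case (less n)
  show ?case
  proof (cases "n = 1")
    case False
    then have "n > 1" using less.prems by (cases n) auto
    then obtain p m where pm: "prime p" "n = p * m" "1 \<le> m" "m < n"
      using prime_factor_step[of n] by auto
    have op: "odd p" and om: "odd m" using less.prems pm by auto
    have p2: "p > 2" using op pm prime_ge_2_nat[of p] by (cases "p = 2") auto
    have C: "cext b c n = bext b m * c p + b p ^ 2 * cext b c m"
      using pm cext_mult[of p m] prime_ge_1_nat[of p] by (simp add: cext_prime bext_prime)
    have "int p * int m dvd c p * bext b m"
      by (rule mult_dvd_mono[OF adams_conditions_dvd_c[OF pm(1) p2] bext_dvd[OF pm(3)]])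
    then have "int p * int m dvd bext b m * c p" by (simp add: mult.commute)
    moreover have "int p * int m dvd b p ^ 2 * cext b c m"
    proof -
      have "int p dvd b p ^ 2" using adams_conditions_dvd_b[OF pm(1)] by (simp add: power2_eq_square)
      moreover have "int m dvd cext b c m" using less om pm by simp
      ultimately show ?thesis by (rule mult_dvd_mono)
    qed
    ultimately show ?thesis using C pm by simp
  qed simp
qed

lemma cext_double: "k \<ge> 1 \<Longrightarrow> \<exists>g. cext b c (2 * k) = int k * g \<and> (odd g \<longleftrightarrow> odd (bext b k div int k))"
proof (induction k rule: less_induct)
  case (less k)
  obtain \<beta> where \<beta>: "bext b k = int k * \<beta>" using bext_dvd[OF less.prems] by (auto elim: dvdE)
  have kk: "bext b k div int k = \<beta>" using \<beta> less.prems by simp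
  obtain h where h: "b 2 = 2 * h" using adams_conditions_even_b2 by (auto elim: evenE)
  have C: "cext b c (2 * k) = bext b k * c 2 + b 2 ^ 2 * cext b c k"
    using cext_mult[of 2 k] less.prems by (simp add: cext_prime bext_prime)
  show ?case
  proof (cases "odd k")
    case True
    obtain \<gamma> where \<gamma>: "cext b c k = int k * \<gamma>" using cext_odd[OF True] by (auto elim: dvdE)
    let ?g = "\<beta> * c 2 + b 2 ^ 2 * \<gamma>"
    have "cext b c (2 * k) = int k * ?g" unfolding C \<beta> \<gamma> by (simp add: algebra_simps)
    moreover have "odd ?g \<longleftrightarrow> odd \<beta>" using adams_conditions_odd_c2 h by (simp add: power2_eq_square)
    ultimately show ?thesis using kk by blast
  next
    case False
    then obtain k' where k': "k = 2 * k'" by (auto elim: evenE)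
    then have k'1: "k' \<ge> 1" "k' < k" using less.prems by auto
    obtain g' where g': "cext b c (2 * k') = int k' * g'" using less.IH[OF k'1(2) k'1(1)] by blast
    let ?g = "\<beta> * c 2 + 2 * h ^ 2 * g'"
    have "cext b c (2 * k) = int k * ?g" unfolding C \<beta> using g' k' h by (simp add: algebra_simps power2_eq_square)
    moreover have "odd ?g \<longleftrightarrow> odd \<beta>" using adams_conditions_odd_c2 by simp
    ultimately show ?thesis using kk by blast
  qed
qed

definition bq :: "nat \<Rightarrow> int" where "bq n = bext b n div int n"
definition bq_conv :: "nat \<Rightarrow> int" where "bq_conv n = (\<Sum>i\<in>{1..<n}. int i * (bq i * bq (n - i)))"

lemma bext_eq: "n \<ge> 1 \<Longrightarrow> bext b n = int n * bq n"
  using bext_dvd by (simp add: bq_def)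

lemma dvd_cext_minus_bq_conv:
  assumes n: "n \<ge> 1"
  shows "int n dvd cext b c n * \<beta> - \<beta>^2 * bq_conv n"
proof -
  let ?S = "\<Sum>i\<in>{1..<n}. bq i * bq (n - i)"
  have TS: "2 * bq_conv n = int n * ?S" unfolding bq_conv_def by (rule sum_weighted_reflect)
  show ?thesis
  proof (cases "odd n")
    case True
    have "int n dvd cext b c n" by (rule cext_odd[OF True])
    moreover have "int n dvd bq_conv n"
    proof -
      have "int n dvd 2 * bq_conv n" using TS by simp
      moreover have "coprime (int n) 2" using True by simp
      ultimately show ?thesis using coprime_dvd_mult_right_iff by blast
    qed
    ultimately show ?thesis by simp
  next
    case False
    then obtain k where k: "n = 2 * k" by (auto elim: evenE)
    then have k1: "k \<ge> 1" using n by simp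
    obtain g where g: "cext b c (2 * k) = int k * g" "odd g \<longleftrightarrow> odd (bext b k div int k)"
      using cext_double[OF k1] by blast
    have T: "bq_conv n = int k * ?S" using TS k by simp
    have par: "odd ?S \<longleftrightarrow> odd (bq k)" unfolding k by (rule odd_sum_reflect_iff[OF k1])
    have "even (g * \<beta> - \<beta>^2 * ?S)"
    proof (cases "odd (bq k)")
      case True
      then have "odd g" "odd ?S" using g(2) par by (simp_all add: bq_def)
      then show ?thesis by (simp add: power2_eq_square)
    next
      case False
      then have "even g" "even ?S" using g(2) par by (simp_all add: bq_def)
      then show ?thesis by simp
    qed
    then obtain r where r: "g * \<beta> - \<beta>^2 * ?S = 2 * r" by (rule evenE)
    have "cext b c n * \<beta> - \<beta>^2 * bq_conv n = int k * (g * \<beta> - \<beta>^2 * ?S)"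
      unfolding T using g(1) k by (simp add: algebra_simps)
    also have "\<dots> = int n * r" using r k by simp
    finally show ?thesis by simp
  qed
qed

text \<open>The coefficients of \<open>\<lambda>\<^sup>k(\<beta>x + \<gamma>x\<^sup>2)\<close>, obtained by solving Newton's formula; the division
  by \<open>k\<close> is exact by \<open>dvd_cext_minus_bq_conv\<close>.\<close>

definition lam_nil_b :: "int \<Rightarrow> nat \<Rightarrow> int" where
  "lam_nil_b \<beta> k = (-1)^(k - 1) * \<beta> * bq k"
definition lam_nil_c :: "int \<Rightarrow> int \<Rightarrow> nat \<Rightarrow> int" where
  "lam_nil_c \<beta> \<gamma> k = ((-1)^(k - 1) * (cext b c k * \<beta> + bext b k ^ 2 * \<gamma> - \<beta>^2 * bq_conv k)) div int k"

lemma lam_nil_b_eq: "n \<ge> 1 \<Longrightarrow> (-1)^(n - 1) * (int n * lam_nil_b \<beta> n) = \<beta> * bext b n"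
proof -
  assume n: "n \<ge> 1"
  have "((-1::int)^(n - 1)) * (-1)^(n - 1) = 1" by (simp flip: power_add)
  then have "(-1)^(n - 1) * (int n * lam_nil_b \<beta> n) = \<beta> * (int n * bq n)"
    by (simp add: lam_nil_b_def algebra_simps)
  then show ?thesis using bext_eq[OF n] by simp
qed

lemma lam_nil_c_eq:
  assumes n: "n \<ge> 1"
  shows "(-1)^(n - 1) * (int n * lam_nil_c \<beta> \<gamma> n - (\<Sum>i\<in>{1..<n}. int i * (lam_nil_b \<beta> i * lam_nil_b \<beta> (n - i)))) = cext b c n * \<beta> + bext b n ^ 2 * \<gamma>"
proof -
  let ?R = "cext b c n * \<beta> + bext b n ^ 2 * \<gamma> - \<beta>^2 * bq_conv n"
  have sq: "((-1::int)^(n - 1)) * (-1)^(n - 1) = 1" by (simp flip: power_add)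
  have dR: "int n dvd ?R"
  proof -
    have "int n dvd bext b n ^ 2 * \<gamma>" using bext_dvd[OF n] by (simp add: power2_eq_square)
    moreover have "?R = (cext b c n * \<beta> - \<beta>^2 * bq_conv n) + bext b n ^ 2 * \<gamma>" by simp
    ultimately show ?thesis using dvd_cext_minus_bq_conv[OF n, of \<beta>] by (metis dvd_add)
  qed
  have Q: "int n * lam_nil_c \<beta> \<gamma> n = (-1)^(n - 1) * ?R"
    using dR unfolding lam_nil_c_def by simp
  have P: "(\<Sum>i\<in>{1..<n}. int i * (lam_nil_b \<beta> i * lam_nil_b \<beta> (n - i))) = - ((-1)^(n - 1) * \<beta>^2 * bq_conv n)"
  proof -
    have "(\<Sum>i\<in>{1..<n}. int i * (lam_nil_b \<beta> i * lam_nil_b \<beta> (n - i))) = (\<Sum>i\<in>{1..<n}. - ((-1)^(n - 1) * \<beta>^2 * (int i * (bq i * bq (n - i)))))"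
    proof (rule sum.cong)
      fix i assume "i \<in> {1..<n}"
      then have i: "1 \<le> i" "i < n" by auto
      have "(-1::int)^(i - 1) * (-1)^(n - i - 1) = (-1)^(n - 2)" using i by (simp flip: power_add)
      also have "(-1::int)^(n - 2) = - ((-1)^(n - 1))"
      proof -
        have "n - 1 = Suc (n - 2)" using i by simp
        then show ?thesis by simp
      qed
      finally have s: "(-1::int)^(i - 1) * (-1)^(n - i - 1) = - ((-1)^(n - 1))" .
      have "int i * (lam_nil_b \<beta> i * lam_nil_b \<beta> (n - i)) = ((-1::int)^(i - 1) * (-1)^(n - i - 1)) * \<beta>^2 * (int i * (bq i * bq (n - i)))"
        by (simp add: lam_nil_b_def power2_eq_square algebra_simps)
      then show "int i * (lam_nil_b \<beta> i * lam_nil_b \<beta> (n - i)) = - ((-1)^(n - 1) * \<beta>^2 * (int i * (bq i * bq (n - i))))"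
        unfolding s by simp
    qed simp
    also have "\<dots> = - ((-1)^(n - 1) * \<beta>^2 * bq_conv n)"
      by (simp add: bq_conv_def sum_negf sum_distrib_left)
    finally show ?thesis .
  qed
  have "(-1)^(n - 1) * (int n * lam_nil_c \<beta> \<gamma> n - (\<Sum>i\<in>{1..<n}. int i * (lam_nil_b \<beta> i * lam_nil_b \<beta> (n - i))))
      = ((-1)^(n - 1) * (-1)^(n - 1)) * (?R + \<beta>^2 * bq_conv n)"
    unfolding Q P by (simp add: algebra_simps)
  also have "\<dots> = cext b c n * \<beta> + bext b n ^ 2 * \<gamma>" unfolding sq by simp
  finally show ?thesis .
qed

definition lam_nil :: "int \<Rightarrow> int \<Rightarrow> nat \<Rightarrow> tr3" where
  "lam_nil \<beta> \<gamma> k = (if k = 0 then 1 else Tr 0 (lam_nil_b \<beta> k) (lam_nil_c \<beta> \<gamma> k))"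

definition psi_tr3 :: "nat \<Rightarrow> tr3 \<Rightarrow> tr3" where
  "psi_tr3 k x = (case x of Tr a \<beta> \<gamma> \<Rightarrow> Tr a (\<beta> * bext b k) (cext b c k * \<beta> + bext b k ^ 2 * \<gamma>))"

definition lam_tr3 :: "nat \<Rightarrow> tr3 \<Rightarrow> tr3" where
  "lam_tr3 k x = (case x of Tr a \<beta> \<gamma> \<Rightarrow> seq_conv (\<lambda>i. of_int (binom_int a i)) (lam_nil \<beta> \<gamma>) k)"

definition psi_ctr3 :: "nat \<Rightarrow> ctr3 \<Rightarrow> ctr3" where
  "psi_ctr3 k y = (case y of CTr a \<beta> \<gamma> \<Rightarrow> CTr a (\<beta> * of_int (bext b k)) (of_int (cext b c k) * \<beta> + of_int (bext b k) ^ 2 * \<gamma>))"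

lemma psi_seq_lam_nil:
  assumes n: "n \<ge> 1"
  shows "psi_seq (lam_nil \<beta> \<gamma>) n = Tr 0 (\<beta> * bext b n) (cext b c n * \<beta> + bext b n ^ 2 * \<gamma>)"
proof -
  have "psi_seq (lam_nil \<beta> \<gamma>) n = Tr 0 ((-1)^(n - 1) * (int n * lam_nil_b \<beta> n))
      ((-1)^(n - 1) * (int n * lam_nil_c \<beta> \<gamma> n - (\<Sum>i\<in>{1..<n}. int i * (lam_nil_b \<beta> i * lam_nil_b \<beta> (n - i)))))"
    by (rule psi_seq_Tr0[OF _ n]) (simp add: lam_nil_def)
  then show ?thesis using lam_nil_b_eq[OF n] lam_nil_c_eq[OF n] by simp
qed

lemma newton_lam_nil: "newton (lam_nil \<beta> \<gamma>) (\<lambda>k. Tr 0 (\<beta> * bext b k) (cext b c k * \<beta> + bext b k ^ 2 * \<gamma>))"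
proof (rule newton_cong)
  show "newton (lam_nil \<beta> \<gamma>) (psi_seq (lam_nil \<beta> \<gamma>))" by (rule newton_psi_seq) (simp add: lam_nil_def)
  fix k :: nat assume "k \<ge> 1"
  then show "psi_seq (lam_nil \<beta> \<gamma>) k = Tr 0 (\<beta> * bext b k) (cext b c k * \<beta> + bext b k ^ 2 * \<gamma>)" by (rule psi_seq_lam_nil)
qed

lemma newton_lam_tr3: "newton (\<lambda>k. lam_tr3 k x) (\<lambda>k. psi_tr3 k x)"
proof (cases x)
  case (Tr a \<beta> \<gamma>)
  have N1: "newton (\<lambda>i. of_int (binom_int a i) :: tr3) (\<lambda>i. of_int a)"
    using newton_hom[OF is_ring_hom_of_int_fun newton_binom_int[of a]] by simp
  have "newton (seq_conv (\<lambda>i. of_int (binom_int a i)) (lam_nil \<beta> \<gamma>)) (\<lambda>k. of_int a + Tr 0 (\<beta> * bext b k) (cext b c k * \<beta> + bext b k ^ 2 * \<gamma>))"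
    by (rule newton_seq_conv[OF N1 newton_lam_nil])
  then show ?thesis using Tr by (simp add: lam_tr3_def psi_tr3_def of_int_tr3)
qed

lemma lam_tr3_0: "lam_tr3 0 x = 1"
  by (cases x) (simp add: lam_tr3_def seq_conv_0 binom_int_0 lam_nil_def)

lemma to_ctr3_psi_tr3: "to_ctr3 (psi_tr3 k x) = psi_ctr3 k (to_ctr3 x)"
  by (cases x) (simp add: psi_tr3_def psi_ctr3_def algebra_simps)

lemma is_ring_hom_psi_ctr3: "is_ring_hom (psi_ctr3 k)"
  unfolding is_ring_hom_def
proof (intro conjI allI)
  fix x y :: ctr3
  show "psi_ctr3 k (x + y) = psi_ctr3 k x + psi_ctr3 k y" by (cases x; cases y) (simp add: psi_ctr3_def algebra_simps)
  show "psi_ctr3 k (x * y) = psi_ctr3 k x * psi_ctr3 k y" by (cases x; cases y) (simp add: psi_ctr3_def algebra_simps power2_eq_square)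
  show "psi_ctr3 k 1 = 1" by (simp add: psi_ctr3_def one_ctr3_def)
qed

lemma psi_ctr3_inv_nat_ctr3: "psi_ctr3 k (inv_nat_ctr3 i) = inv_nat_ctr3 i"
  by (simp add: psi_ctr3_def inv_nat_ctr3_def)

lemma psi_ctr3_psi_ctr3:
  assumes j: "j \<ge> 1" and k: "k \<ge> 1"
  shows "psi_ctr3 j (psi_ctr3 k y) = psi_ctr3 (j * k) y"
proof (cases y)
  case (CTr a \<beta> \<gamma>)
  have B: "bext b (j * k) = bext b j * bext b k" using j k by (simp add: bext_mult)
  have C: "cext b c (j * k) = bext b k * cext b c j + bext b j ^ 2 * cext b c k" by (rule cext_mult[OF j k])
  show ?thesis using CTr unfolding psi_ctr3_def B C by (simp add: algebra_simps power2_eq_square)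
qed

lemma to_ctr3_lam_tr3: "to_ctr3 (lam_tr3 k x) = lam_seq inv_nat_ctr3 (\<lambda>j. psi_ctr3 j (to_ctr3 x)) k"
proof -
  have N: "newton (\<lambda>k. to_ctr3 (lam_tr3 k x)) (\<lambda>k. psi_ctr3 k (to_ctr3 x))"
    using newton_hom[OF is_ring_hom_to_ctr3 newton_lam_tr3[of x]] by (simp add: to_ctr3_psi_tr3)
  show ?thesis
    by (rule newton_lam_seq_eq[OF inverts_nat_inv_nat_ctr3 _ N]) (simp add: lam_tr3_0 ring_hom_one[OF is_ring_hom_to_ctr3])
qed

lemma psi_seq_to_ctr3_lam_tr3: "k \<ge> 1 \<Longrightarrow> psi_seq (\<lambda>i. to_ctr3 (lam_tr3 i x)) k = psi_ctr3 k (to_ctr3 x)"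
  unfolding to_ctr3_lam_tr3 by (rule psi_seq_lam_seq[OF inverts_nat_inv_nat_ctr3])

lemma lam_seq_one: "lam_seq inv_nat_ctr3 (\<lambda>j. 1) n = (if n = 0 then 1 else if n = 1 then 1 else 0)"
proof -
  have "lam_seq inv_nat_ctr3 (\<lambda>k. \<Sum>a\<in>{0::nat}. (\<lambda>_. (1::ctr3)) a ^ k) n = esym n {0::nat} (\<lambda>_. 1)"
    by (rule lam_seq_esym[OF inverts_nat_inv_nat_ctr3]) simp
  then show ?thesis by (simp add: esym_single)
qed

lemma lam_tr3_1: "lam_tr3 1 x = x"
proof (rule to_ctr3_inj)
  have "to_ctr3 (lam_tr3 1 x) = inv_nat_ctr3 1 * psi_ctr3 1 (to_ctr3 x)"
    unfolding to_ctr3_lam_tr3 by (simp add: lam_seq.simps)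
  also have "\<dots> = to_ctr3 x"
    by (cases x) (simp add: inv_nat_ctr3_def psi_ctr3_def one_ctr3_def cext_Suc0)
  finally show "to_ctr3 (lam_tr3 1 x) = to_ctr3 x" .
qed

lemma lam_tr3_add: "lam_tr3 n (x + y) = (\<Sum>i\<le>n. lam_tr3 i x * lam_tr3 (n - i) y)"
proof (rule to_ctr3_inj)
  have newton_x: "newton (\<lambda>k. to_ctr3 (lam_tr3 k x)) (\<lambda>k. psi_ctr3 k (to_ctr3 x))" for x
    using newton_hom[OF is_ring_hom_to_ctr3 newton_lam_tr3[of x]] by (simp add: to_ctr3_psi_tr3)
  have "to_ctr3 (lam_tr3 n (x + y)) = lam_seq inv_nat_ctr3 (\<lambda>j. psi_ctr3 j (to_ctr3 x) + psi_ctr3 j (to_ctr3 y)) n"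
    unfolding to_ctr3_lam_tr3 by (simp add: ring_hom_add[OF is_ring_hom_to_ctr3] ring_hom_add[OF is_ring_hom_psi_ctr3])
  also have "\<dots> = seq_conv (\<lambda>k. to_ctr3 (lam_tr3 k x)) (\<lambda>k. to_ctr3 (lam_tr3 k y)) n"
    by (rule newton_lam_seq_eq[OF inverts_nat_inv_nat_ctr3 _ newton_seq_conv[OF newton_x newton_x], symmetric])
      (simp add: seq_conv_0 lam_tr3_0 ring_hom_one[OF is_ring_hom_to_ctr3])
  also have "\<dots> = to_ctr3 (\<Sum>i\<le>n. lam_tr3 i x * lam_tr3 (n - i) y)"
    by (simp add: seq_conv_def ring_hom_sum[OF is_ring_hom_to_ctr3] ring_hom_mult[OF is_ring_hom_to_ctr3])
  finally show "to_ctr3 (lam_tr3 n (x + y)) = to_ctr3 (\<Sum>i\<le>n. lam_tr3 i x * lam_tr3 (n - i) y)" .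
qed

lemma lam_tr3_one: "n \<ge> 2 \<Longrightarrow> lam_tr3 n 1 = 0"
proof (rule to_ctr3_inj)
  assume "n \<ge> 2"
  have "to_ctr3 (lam_tr3 n 1) = lam_seq inv_nat_ctr3 (\<lambda>j. 1) n"
    unfolding to_ctr3_lam_tr3 by (simp add: ring_hom_one[OF is_ring_hom_to_ctr3] ring_hom_one[OF is_ring_hom_psi_ctr3])
  also have "\<dots> = 0" using \<open>n \<ge> 2\<close> by (simp add: lam_seq_one)
  finally show "to_ctr3 (lam_tr3 n 1) = to_ctr3 0" by (simp add: ring_hom_zero[OF is_ring_hom_to_ctr3])
qed

lemma lam_tr3_mult:
  assumes "n \<ge> 1"
  shows "lam_tr3 n (x * y) = mpeval (Pmul_args n (\<lambda>i. lam_tr3 i x) (\<lambda>i. lam_tr3 i y)) (Pmul n)"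
proof (rule to_ctr3_inj)
  have "to_ctr3 (lam_tr3 n (x * y)) = lam_seq inv_nat_ctr3 (\<lambda>k. psi_ctr3 k (to_ctr3 x) * psi_ctr3 k (to_ctr3 y)) n"
    unfolding to_ctr3_lam_tr3 by (simp add: ring_hom_mult[OF is_ring_hom_to_ctr3] ring_hom_mult[OF is_ring_hom_psi_ctr3])
  also have "\<dots> = lam_seq inv_nat_ctr3 (\<lambda>k. psi_seq (\<lambda>i. to_ctr3 (lam_tr3 i x)) k * psi_seq (\<lambda>i. to_ctr3 (lam_tr3 i y)) k) n"
    by (rule lam_seq_cong) (simp add: psi_seq_to_ctr3_lam_tr3)
  also have "\<dots> = mpeval (Pmul_args n (\<lambda>i. to_ctr3 (lam_tr3 i x)) (\<lambda>i. to_ctr3 (lam_tr3 i y))) (Pmul n)"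
    by (rule Pmul_newton_ctr3[symmetric])
  also have "\<dots> = to_ctr3 (mpeval (Pmul_args n (\<lambda>i. lam_tr3 i x) (\<lambda>i. lam_tr3 i y)) (Pmul n))"
    by (simp add: mpeval_hom[OF is_ring_hom_to_ctr3] Pmul_args_hom[OF is_ring_hom_to_ctr3])
  finally show "to_ctr3 (lam_tr3 n (x * y)) = to_ctr3 (mpeval (Pmul_args n (\<lambda>i. lam_tr3 i x) (\<lambda>i. lam_tr3 i y)) (Pmul n))" .
qed

lemma lam_tr3_lam_tr3:
  assumes "m \<ge> 1" "n \<ge> 1"
  shows "lam_tr3 m (lam_tr3 n x) = mpeval (Pcomp_args (m * n) (\<lambda>i. lam_tr3 i x)) (Pcomp m n)"
proof (rule to_ctr3_inj)
  have "to_ctr3 (lam_tr3 m (lam_tr3 n x)) = lam_seq inv_nat_ctr3 (\<lambda>j. lam_seq inv_nat_ctr3 (\<lambda>k. psi_ctr3 j (psi_ctr3 k (to_ctr3 x))) n) m"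
    by (simp add: to_ctr3_lam_tr3 lam_seq_hom[OF is_ring_hom_psi_ctr3 psi_ctr3_inv_nat_ctr3])
  also have "\<dots> = lam_seq inv_nat_ctr3 (\<lambda>j. lam_seq inv_nat_ctr3 (\<lambda>k. psi_seq (\<lambda>i. to_ctr3 (lam_tr3 i x)) (j * k)) n) m"
    by (intro lam_seq_cong) (simp add: psi_ctr3_psi_ctr3 psi_seq_to_ctr3_lam_tr3)
  also have "\<dots> = mpeval (Pcomp_args (m * n) (\<lambda>i. to_ctr3 (lam_tr3 i x))) (Pcomp m n)"
    by (rule Pcomp_newton_ctr3[symmetric])
  also have "\<dots> = to_ctr3 (mpeval (Pcomp_args (m * n) (\<lambda>i. lam_tr3 i x)) (Pcomp m n))"
    by (simp add: mpeval_hom[OF is_ring_hom_to_ctr3] Pcomp_args_hom[OF is_ring_hom_to_ctr3])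
  finally show "to_ctr3 (lam_tr3 m (lam_tr3 n x)) = to_ctr3 (mpeval (Pcomp_args (m * n) (\<lambda>i. lam_tr3 i x)) (Pcomp m n))" .
qed

lemma lam_tr3_lambda_ring: "lambda_ring lam_tr3"
  using lam_tr3_1 lam_tr3_mult lam_tr3_lam_tr3
  by (simp add: lambda_ring_def pre_lambda_ring_def lam_tr3_0 lam_tr3_add lam_tr3_one
      Pmul_args_def[abs_def] Pcomp_args_def[abs_def])

lemma lam_tr3_Tr0: "i \<ge> 1 \<Longrightarrow> lam_tr3 i (Tr 0 \<beta> \<gamma>) = Tr 0 (lam_nil_b \<beta> i) (lam_nil_c \<beta> \<gamma> i)"
  by (simp add: lam_tr3_def binom_int_zero seq_conv_delta_seq lam_nil_def)

lemma lam_tr3_filtered: "filtered_lambda_ring d lam_tr3"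
  unfolding filtered_lambda_ring_def
proof (intro conjI allI impI ballI)
  show "lambda_ring lam_tr3" by (rule lam_tr3_lambda_ring)
next
  fix k i :: nat and r :: tr3 assume i: "i \<ge> 1" and r: "r \<in> fil d k"
  show "lam_tr3 i r \<in> fil d k"
  proof (cases "k = 0")
    case True
    obtain a' b' c' where "lam_tr3 i r = Tr a' b' c'" by (cases "lam_tr3 i r")
    then show ?thesis using True by (simp add: fil_def)
  next
    case False
    obtain \<beta> \<gamma> where r': "r = Tr 0 \<beta> \<gamma>" "d < k \<longrightarrow> \<beta> = 0" "2 * d < k \<longrightarrow> \<gamma> = 0"
      using r False by (auto simp: fil_def)
    have "lam_tr3 i r = Tr 0 (lam_nil_b \<beta> i) (lam_nil_c \<beta> \<gamma> i)" using r' lam_tr3_Tr0[OF i] by simp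
    moreover have "d < k \<longrightarrow> lam_nil_b \<beta> i = 0" using r' by (auto simp: lam_nil_b_def)
    moreover have "2 * d < k \<longrightarrow> lam_nil_c \<beta> \<gamma> i = 0" using r' by (auto simp: lam_nil_c_def)
    ultimately show ?thesis using False by (auto simp: fil_def)
  qed
qed

lemma lam_tr3_adams: "prime p \<Longrightarrow> adams lam_tr3 p X = of_int (b p) * X + of_int (c p) * X^2"
proof -
  assume p: "prime p"
  have p1: "p \<ge> 1" using p prime_ge_1_nat by simp
  have "to_ctr3 (adams lam_tr3 p X) = psi_seq (\<lambda>i. to_ctr3 (lam_tr3 i X)) p"
    by (simp add: adams_psi_seq psi_seq_hom[OF is_ring_hom_to_ctr3])
  also have "\<dots> = psi_ctr3 p (to_ctr3 X)" by (rule psi_seq_to_ctr3_lam_tr3[OF p1])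
  also have "\<dots> = to_ctr3 (Tr 0 (b p) (c p))"
    using p by (simp add: X_def psi_ctr3_def bext_prime cext_prime)
  finally have "adams lam_tr3 p X = Tr 0 (b p) (c p)" by (rule to_ctr3_inj)
  then show ?thesis by (simp add: of_int_tr3 X_def power2_eq_square)
qed

end

lemma adams_conditions_sufficient:
  assumes "adams_conditions b c"
  shows "\<exists>lam. filtered_lambda_ring d lam \<and>
           (\<forall>p. prime p \<longrightarrow> adams lam p X = of_int (b p) * X + of_int (c p) * X^2)"
proof -
  interpret adams_coeffs b c by (rule adams_coeffs.intro[OF assms])
  show ?thesis using lam_tr3_filtered lam_tr3_adams by blast
qed

theorem lemma3p1:
  fixes b c :: "nat \<Rightarrow> int" and d :: nat
  assumes "d > 0"
  shows "((\<exists>lam. filtered_lambda_ring d lam \<and>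
            (\<forall>p. prime p \<longrightarrow> adams lam p X = of_int (b p) * X + of_int (c p) * X^2))
          \<longleftrightarrow>
          ((\<forall>p. prime p \<longrightarrow> int p dvd b p) \<and>
           odd (c 2) \<and> (\<forall>p. prime p \<and> p > 2 \<longrightarrow> int p dvd c p) \<and>
           (\<forall>p q. prime p \<and> prime q \<longrightarrow> (b q^2 - b q) * c p = (b p^2 - b p) * c q)))
     \<and> (((\<forall>p. prime p \<longrightarrow> int p dvd b p) \<and>
           odd (c 2) \<and> (\<forall>p. prime p \<and> p > 2 \<longrightarrow> int p dvd c p) \<and>
           (\<forall>p q. prime p \<and> prime q \<longrightarrow> (b q^2 - b q) * c p = (b p^2 - b p) * c q))
        \<longrightarrow> (b 2 \<noteq> 0 \<longrightarrow> (\<forall>p. prime p \<and> p > 2 \<longrightarrow> 2 ^ multiplicity 2 (b 2) dvd b p^2 - b p))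
          \<and> (b 2 = 0 \<longrightarrow> (\<forall>p. prime p \<and> p > 2 \<longrightarrow> b p = 0)))"
  unfolding adams_conditions_def[symmetric]
proof (intro conjI impI allI)
  show "(\<exists>lam. filtered_lambda_ring d lam \<and>
          (\<forall>p. prime p \<longrightarrow> adams lam p X = of_int (b p) * X + of_int (c p) * X^2))
        \<longleftrightarrow> adams_conditions b c"
    using adams_conditions_necessary[OF assms] adams_conditions_sufficient by blast
next
  fix p :: nat assume "adams_conditions b c" "b 2 \<noteq> 0" "prime p \<and> p > 2"
  then show "2 ^ multiplicity 2 (b 2) dvd b p^2 - b p"
    by (simp add: adams_conditions_two_power_dvd)
next
  fix p :: nat assume "adams_conditions b c" "b 2 = 0" "prime p \<and> p > 2"
  then show "b p = 0"
    by (simp add: adams_conditions_b_zero)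
qed

end
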